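(* Let $\mathcal K$ be a 2-category and $n>1$ an integer. The composite 2-functor $C_1\circ C_1\circ\cdots\circ C_1:\mathsf{Wdl}^{(n)}(\overline{\mathcal K})\to\mathsf{Wdl}^{(n-1)}(\overline{\mathcal K})\to\cdots\to\mathsf{Wdl}(\overline{\mathcal K})$ ($n-1$ factors) takes a 0-cell $\{\lambda_{i,j}:s_js_i\to s_is_j\}_{0\le i<j\le n}$ to the weak distributive law $$\lambda_{0\dots n-1,n}:=R.s_n\bar\lambda_{0\dots n-1}:s_n(s_0\cdots s_{n-1})\to(s_0\cdots s_{n-1})s_n,$$ where $R:=s_0\cdots s_{n-2}\lambda_{n-1,n}.\cdots.s_0\lambda_{1,n}s_2\cdots s_{n-1}.\lambda_{0,n}s_1\cdots s_{n-1}:s_ns_0\cdots s_{n-1}\to s_0\cdots s_{n-1}s_n$ (between the monads $(s_0\cdots s_{n-1},\bar\lambda_{0\dots n-1})$ and $s_n$).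
   Context: Conventions. For 1-cells, $uw$ is the horizontal composite ($w$ first); for 2-cells $\alpha,\beta$, $\alpha\beta$ is their horizontal composite; a 1-cell next to a 2-cell means whiskering; $\alpha.\beta$ is vertical composition ($\beta$ first). A monad $(A,t)$ has multiplication $\mu:tt\to t$, unit $\eta:1_A\to t$; decorations carry over. Local idempotent closure $\overline{\mathcal K}$: same 0-cells as $\mathcal K$; 1-cells are pairs $(v,\bar v)$ with $v$ a 1-cell of $\mathcal K$ and $\bar v$ an idempotent 2-cell on $v$; 2-cells $(v,\bar v)\to(v',\bar v')$ are 2-cells $\omega:v\to v'$ of $\mathcal K$ with $\bar v'.\omega=\omega=\omega.\bar v$; compositions from $\mathcal K$, identity 2-cell of $(v,\bar v)$ is $\bar v$. Monads $(A,(t,\bar t))$ in $\overline{\mathcal K}$ satisfy $\mu.t\eta=\mu.\eta t=\bar t$; we write just $t$, and $v$ for $(v,\bar v)$. $\mathsf{Mnd}(\overline{\mathcal K})$: 1-cells $(A,t)\to(A',t')$ are $(v,\psi)$, $\psi:t'v\to vt$, with $\psi.\mu'v=v\mu.\psi t.t'\psi$, $\psi.\eta'v=v\eta$; 2-cells $\omega:v\to v'$ with $\psi'.t'\omega=\omega t.\psi$. Weak distributive law in $\overline{\mathcal K}$: monads $(A,t),(A,s)$ and $\lambda:ts\to st$ with $\lambda.\mu s=s\mu.\lambda t.t\lambda$, $\lambda.t\mu=\mu t.s\lambda.\lambda s$, $\lambda.\eta s=\mu t.s\lambda.st\eta.s\eta$, $\lambda.t\eta=s\mu.\lambda t.\eta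 st.\eta t$; idempotent $\bar\lambda:=\mu t.s\lambda.st\eta$; induced monad $(st,\bar\lambda)$ with multiplication $\mu\mu.s\lambda t$, unit $\lambda.\eta\eta$. $\mathsf{Wdl}(\overline{\mathcal K})$: 1-cells $\lambda\to\lambda'$ are $(v,\xi,\zeta)$ with $(v,\xi),(v,\zeta)$ 1-cells of $\mathsf{Mnd}(\overline{\mathcal K})$ and $v\lambda.\xi s.t'\zeta=v\bar\lambda.\zeta t.s'\xi.\lambda'v$; 2-cells are 2-cells of $\mathsf{Mnd}(\overline{\mathcal K})$ for both. $\mathsf{Wdl}^{(m)}(\overline{\mathcal K})$: 0-cells are monads $(A,s_0),\dots,(A,s_m)$ with weak distributive laws $\lambda_{i,j}:s_js_i\to s_is_j$ ($i<j$) satisfying $\lambda_{i,j}s_k.s_j\lambda_{i,k}.\lambda_{j,k}s_i=s_i\lambda_{j,k}.\lambda_{i,k}s_j.s_k\lambda_{i,j}$; 1-cells are $v$ with $\xi_i:s'_iv\to vs_i$ such that each $(v,\xi_i,\xi_j)$ ($i<j$) is a 1-cell of $\mathsf{Wdl}(\overline{\mathcal K})$; 2-cells are 2-cells of $\mathsf{Mnd}(\overline{\mathcal K})$ for all $(v,\xi_i)$. $\bar\lambda_{ij}$ is the idempotent of $\lambda_{i,j}$. The idempotent $\bar\lambda_{0\dots m}$ ($m\ge1$): $\bar\lambda_{01}$ for $m=1$; for $m\ge2$, $\bar\lambda_{0\dots m}:=\overleftarrow\lambda_{0,\dots,m}.\overleftarrow\lambda_{0,\dots,m-1}s_m.\cdots.\overleftarrow\lambda_{0,1,2}s_3\cdots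 s_m.\bar\lambda_{01}s_2\cdots s_m$, where $\overleftarrow\lambda_{0,\dots,l}:=s_0\cdots s_{l-1}\mu_l.R_l.\eta_ls_0\cdots s_l$ with $R_l:=s_0\cdots s_{l-2}\lambda_{l-1,l}s_l.\cdots.\lambda_{0,l}s_1\cdots s_l$. The 2-functor $C_1:\mathsf{Wdl}^{(m)}(\overline{\mathcal K})\to\mathsf{Wdl}^{(m-1)}(\overline{\mathcal K})$ ($m\ge1$): on a 0-cell it gives the monads $(s_0s_1,\bar\lambda_{01}),s_2,\dots,s_m$ with laws $\lambda_{i,j}$ for $2\le i<j$ and $s_0\lambda_{1,j}.\lambda_{0,j}s_1.s_j\bar\lambda_{01}:s_j(s_0s_1)\to(s_0s_1)s_j$ for $j\ge2$; on a 1-cell it gives $v\bar\lambda_{01}.\xi_0s_1.s'_0\xi_1,\xi_2,\dots,\xi_m$; identity on 2-cells. *)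

theory Defs
  imports Main
begin

text \<open>Hc1 u w is the horizontal composite uw (w first); Vc a b is the vertical composite a.b (b first);
  Hc2 a b is the horizontal composite of 2-cells, with Dom (Hc2 a b) = Hc1 (Dom a) (Dom b).\<close>

record ('o,'a,'c) tcat =
  Obj  :: "'o set"
  Arr  :: "'a set"
  Src  :: "'a \<Rightarrow> 'o"
  Trg  :: "'a \<Rightarrow> 'o"
  Id1  :: "'o \<Rightarrow> 'a"
  Hc1  :: "'a \<Rightarrow> 'a \<Rightarrow> 'a"
  Cell :: "'c set"
  Dom  :: "'c \<Rightarrow> 'a"
  Cod  :: "'c \<Rightarrow> 'a"
  Vc   :: "'c \<Rightarrow> 'c \<Rightarrow> 'c"
  Id2  :: "'a \<Rightarrow> 'c"
  Hc2  :: "'c \<Rightarrow> 'c \<Rightarrow> 'c"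

definition twocat :: "('o,'a,'c) tcat \<Rightarrow> bool" where
  "twocat K \<longleftrightarrow>
    (\<forall>x\<in>Obj K. Id1 K x \<in> Arr K \<and> Src K (Id1 K x) = x \<and> Trg K (Id1 K x) = x) \<and>
    (\<forall>u\<in>Arr K. Src K u \<in> Obj K \<and> Trg K u \<in> Obj K) \<and>
    (\<forall>u\<in>Arr K. \<forall>w\<in>Arr K. Trg K w = Src K u \<longrightarrow>
        Hc1 K u w \<in> Arr K \<and> Src K (Hc1 K u w) = Src K w \<and> Trg K (Hc1 K u w) = Trg K u) \<and>
    (\<forall>u\<in>Arr K. \<forall>v\<in>Arr K. \<forall>w\<in>Arr K. Trg K w = Src K v \<longrightarrow> Trg K v = Src K u \<longrightarrow>
        Hc1 K (Hc1 K u v) w = Hc1 K u (Hc1 K v w)) \<and>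
    (\<forall>u\<in>Arr K. Hc1 K (Id1 K (Trg K u)) u = u \<and> Hc1 K u (Id1 K (Src K u)) = u) \<and>
    (\<forall>a\<in>Cell K. Dom K a \<in> Arr K \<and> Cod K a \<in> Arr K \<and>
        Src K (Dom K a) = Src K (Cod K a) \<and> Trg K (Dom K a) = Trg K (Cod K a)) \<and>
    (\<forall>u\<in>Arr K. Id2 K u \<in> Cell K \<and> Dom K (Id2 K u) = u \<and> Cod K (Id2 K u) = u) \<and>
    (\<forall>a\<in>Cell K. \<forall>b\<in>Cell K. Cod K b = Dom K a \<longrightarrow>
        Vc K a b \<in> Cell K \<and> Dom K (Vc K a b) = Dom K b \<and> Cod K (Vc K a b) = Cod K a) \<and>
    (\<forall>a\<in>Cell K. \<forall>b\<in>Cell K. \<forall>c\<in>Cell K. Cod K c = Dom K b \<longrightarrow> Cod K b = Dom K a \<longrightarrow>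
        Vc K (Vc K a b) c = Vc K a (Vc K b c)) \<and>
    (\<forall>a\<in>Cell K. Vc K (Id2 K (Cod K a)) a = a \<and> Vc K a (Id2 K (Dom K a)) = a) \<and>
    (\<forall>a\<in>Cell K. \<forall>b\<in>Cell K. Trg K (Dom K b) = Src K (Dom K a) \<longrightarrow>
        Hc2 K a b \<in> Cell K \<and> Dom K (Hc2 K a b) = Hc1 K (Dom K a) (Dom K b) \<and>
        Cod K (Hc2 K a b) = Hc1 K (Cod K a) (Cod K b)) \<and>
    (\<forall>a\<in>Cell K. \<forall>b\<in>Cell K. \<forall>c\<in>Cell K.
        Trg K (Dom K c) = Src K (Dom K b) \<longrightarrow> Trg K (Dom K b) = Src K (Dom K a) \<longrightarrow>
        Hc2 K (Hc2 K a b) c = Hc2 K a (Hc2 K b c)) \<and>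
    (\<forall>a\<in>Cell K. Hc2 K (Id2 K (Id1 K (Trg K (Dom K a)))) a = a \<and>
        Hc2 K a (Id2 K (Id1 K (Src K (Dom K a)))) = a) \<and>
    (\<forall>u\<in>Arr K. \<forall>w\<in>Arr K. Trg K w = Src K u \<longrightarrow> Hc2 K (Id2 K u) (Id2 K w) = Id2 K (Hc1 K u w)) \<and>
    (\<forall>a\<in>Cell K. \<forall>b\<in>Cell K. \<forall>c\<in>Cell K. \<forall>d\<in>Cell K.
        Cod K b = Dom K a \<longrightarrow> Cod K d = Dom K c \<longrightarrow> Trg K (Dom K c) = Src K (Dom K a) \<longrightarrow>
        Hc2 K (Vc K a b) (Vc K c d) = Vc K (Hc2 K a c) (Hc2 K b d))"

text \<open>A 1-cell of the local idempotent closure is a pair (v, vbar).  A 2-cell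
  (v,vbar) -> (v',vbar') is a 2-cell w of K with vbar'.w = w = w.vbar.
  Compositions are those of K; the identity 2-cell of (v,vbar) is vbar, so whiskering
  by (v,vbar) is horizontal composition with vbar.\<close>

definition barArr :: "('o,'a,'c) tcat \<Rightarrow> 'a \<times> 'c \<Rightarrow> bool" where
  "barArr K v \<longleftrightarrow> fst v \<in> Arr K \<and> snd v \<in> Cell K \<and> Dom K (snd v) = fst v \<and>
     Cod K (snd v) = fst v \<and> Vc K (snd v) (snd v) = snd v"

definition barHom :: "('o,'a,'c) tcat \<Rightarrow> 'c \<Rightarrow> 'a \<times> 'c \<Rightarrow> 'a \<times> 'c \<Rightarrow> bool" where
  "barHom K w v v' \<longleftrightarrow> w \<in> Cell K \<and> Dom K w = fst v \<and> Cod K w = fst v' \<and>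
     Vc K (snd v') w = w \<and> Vc K w (snd v) = w"

definition barC :: "('o,'a,'c) tcat \<Rightarrow> 'a \<times> 'c \<Rightarrow> 'a \<times> 'c \<Rightarrow> 'a \<times> 'c" where
  "barC K u w = (Hc1 K (fst u) (fst w), Hc2 K (snd u) (snd w))"

definition barId :: "('o,'a,'c) tcat \<Rightarrow> 'o \<Rightarrow> 'a \<times> 'c" where
  "barId K A = (Id1 K A, Id2 K (Id1 K A))"

definition wl :: "('o,'a,'c) tcat \<Rightarrow> 'a \<times> 'c \<Rightarrow> 'c \<Rightarrow> 'c" where
  "wl K v a = Hc2 K (snd v) a"

definition wr :: "('o,'a,'c) tcat \<Rightarrow> 'c \<Rightarrow> 'a \<times> 'c \<Rightarrow> 'c" where
  "wr K a v = Hc2 K a (snd v)"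

record ('a,'c) bmonad =
  mc  :: "'a \<times> 'c"
  mmu :: 'c
  meta :: 'c

definition bar_monad :: "('o,'a,'c) tcat \<Rightarrow> 'o \<Rightarrow> ('a,'c) bmonad \<Rightarrow> bool" where
  "bar_monad K A M \<longleftrightarrow> A \<in> Obj K \<and> barArr K (mc M) \<and>
     Src K (fst (mc M)) = A \<and> Trg K (fst (mc M)) = A \<and>
     barHom K (mmu M) (barC K (mc M) (mc M)) (mc M) \<and>
     barHom K (meta M) (barId K A) (mc M) \<and>
     Vc K (mmu M) (wr K (mmu M) (mc M)) = Vc K (mmu M) (wl K (mc M) (mmu M)) \<and>
     Vc K (mmu M) (wl K (mc M) (meta M)) = snd (mc M) \<and>
     Vc K (mmu M) (wr K (meta M) (mc M)) = snd (mc M)"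

definition bar_wdl :: "('o,'a,'c) tcat \<Rightarrow> 'o \<Rightarrow> ('a,'c) bmonad \<Rightarrow> ('a,'c) bmonad \<Rightarrow> 'c \<Rightarrow> bool" where
  "bar_wdl K A T S l \<longleftrightarrow> bar_monad K A T \<and> bar_monad K A S \<and>
     (let t = mc T; s = mc S in
       barHom K l (barC K t s) (barC K s t) \<and>
       Vc K l (wr K (mmu T) s) = Vc K (wl K s (mmu T)) (Vc K (wr K l t) (wl K t l)) \<and>
       Vc K l (wl K t (mmu S)) = Vc K (wr K (mmu S) t) (Vc K (wl K s l) (wr K l s)) \<and>
       Vc K l (wr K (meta T) s) =
         Vc K (wr K (mmu S) t) (Vc K (wl K s l) (Vc K (wl K (barC K s t) (meta S)) (wl K s (meta T)))) \<and>
       Vc K l (wl K t (meta S)) =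
         Vc K (wl K s (mmu T)) (Vc K (wr K l t) (Vc K (wr K (meta T) (barC K s t)) (wr K (meta S) t))))"

definition wdl_idem :: "('o,'a,'c) tcat \<Rightarrow> ('a,'c) bmonad \<Rightarrow> ('a,'c) bmonad \<Rightarrow> 'c \<Rightarrow> 'c" where
  "wdl_idem K T S l = (let t = mc T; s = mc S in
     Vc K (wr K (mmu S) t) (Vc K (wl K s l) (wl K (barC K s t) (meta S))))"

definition wdl_monad :: "('o,'a,'c) tcat \<Rightarrow> ('a,'c) bmonad \<Rightarrow> ('a,'c) bmonad \<Rightarrow> 'c \<Rightarrow> ('a,'c) bmonad" where
  "wdl_monad K T S l = (let t = mc T; s = mc S in
     \<lparr> mc = (Hc1 K (fst s) (fst t), wdl_idem K T S l),
       mmu = Vc K (Hc2 K (mmu S) (mmu T)) (wl K s (wr K l t)),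
       meta = Vc K l (Hc2 K (meta T) (meta S)) \<rparr>)"

text \<open>A 0-cell: object A, number m, monads wS 0 .. wS m at A, laws wL i j : s_j s_i -> s_i s_j (i<j).\<close>
record ('o,'a,'c) wdlm =
  wA :: 'o
  wm :: nat
  wS :: "nat \<Rightarrow> ('a,'c) bmonad"
  wL :: "nat \<Rightarrow> nat \<Rightarrow> 'c"

definition Wdl_obj :: "('o,'a,'c) tcat \<Rightarrow> ('o,'a,'c) wdlm \<Rightarrow> bool" where
  "Wdl_obj K D \<longleftrightarrow>
     (\<forall>i\<le>wm D. bar_monad K (wA D) (wS D i)) \<and>
     (\<forall>i j. i < j \<and> j \<le> wm D \<longrightarrow> bar_wdl K (wA D) (wS D j) (wS D i) (wL D i j)) \<and>
     (\<forall>i j k. i < j \<and> j < k \<and> k \<le> wm D \<longrightarrow>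
        (let si = mc (wS D i); sj = mc (wS D j); sk = mc (wS D k) in
          Vc K (wr K (wL D i j) sk) (Vc K (wl K sj (wL D i k)) (wr K (wL D j k) si)) =
          Vc K (wl K si (wL D j k)) (Vc K (wr K (wL D i k) sj) (wl K sk (wL D i j)))))"

definition C1 :: "('o,'a,'c) tcat \<Rightarrow> ('o,'a,'c) wdlm \<Rightarrow> ('o,'a,'c) wdlm" where
  "C1 K D = (let S = wS D; L = wL D; lb = wdl_idem K (S 1) (S 0) (L 0 1) in
     \<lparr> wA = wA D,
       wm = wm D - 1,
       wS = (\<lambda>i. if i = 0 then wdl_monad K (S 1) (S 0) (L 0 1) else S (Suc i)),
       wL = (\<lambda>i j. if i = 0 then
                 Vc K (wl K (mc (S 0)) (L 1 (Suc j)))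
                   (Vc K (wr K (L 0 (Suc j)) (mc (S 1))) (wl K (mc (S (Suc j))) lb))
               else L (Suc i) (Suc j)) \<rparr>)"

fun comp_list :: "('o,'a,'c) tcat \<Rightarrow> 'o \<Rightarrow> ('a \<times> 'c) list \<Rightarrow> 'a \<times> 'c" where
  "comp_list K A [] = barId K A"
| "comp_list K A [v] = v"
| "comp_list K A (v # vs) = barC K v (comp_list K A vs)"

definition seg :: "('o,'a,'c) tcat \<Rightarrow> 'o \<Rightarrow> (nat \<Rightarrow> ('a,'c) bmonad) \<Rightarrow> nat \<Rightarrow> nat \<Rightarrow> 'a \<times> 'c" where
  "seg K A S a b = comp_list K A (map (\<lambda>i. mc (S i)) [a..<b])"

definition Rterm :: "('o,'a,'c) tcat \<Rightarrow> 'o \<Rightarrow> (nat \<Rightarrow> ('a,'c) bmonad) \<Rightarrow> (nat \<Rightarrow> nat \<Rightarrow> 'c)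
    \<Rightarrow> nat \<Rightarrow> nat \<Rightarrow> nat \<Rightarrow> 'c" where
  "Rterm K A S L l k i = wl K (seg K A S 0 i) (wr K (L i l) (seg K A S (Suc i) k))"

fun pushc :: "('o,'a,'c) tcat \<Rightarrow> 'o \<Rightarrow> (nat \<Rightarrow> ('a,'c) bmonad) \<Rightarrow> (nat \<Rightarrow> nat \<Rightarrow> 'c)
    \<Rightarrow> nat \<Rightarrow> nat \<Rightarrow> nat \<Rightarrow> 'c" where
  "pushc K A S L l k 0 = snd (barC K (mc (S l)) (seg K A S 0 k))"
| "pushc K A S L l k (Suc 0) = Rterm K A S L l k 0"
| "pushc K A S L l k (Suc (Suc j)) = Vc K (Rterm K A S L l k (Suc j)) (pushc K A S L l k (Suc j))"

text \<open>R_l = pushc l (l+1) l;  overleftarrow lambda_(0..l) = s_0..s_(l-1) mu_l . R_l . eta_l s_0 .. s_l.\<close>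
definition ovl :: "('o,'a,'c) tcat \<Rightarrow> 'o \<Rightarrow> (nat \<Rightarrow> ('a,'c) bmonad) \<Rightarrow> (nat \<Rightarrow> nat \<Rightarrow> 'c) \<Rightarrow> nat \<Rightarrow> 'c" where
  "ovl K A S L l = Vc K (wl K (seg K A S 0 l) (mmu (S l)))
      (Vc K (pushc K A S L l (Suc l) l) (wr K (meta (S l)) (seg K A S 0 (Suc l))))"

definition lbterm :: "('o,'a,'c) tcat \<Rightarrow> 'o \<Rightarrow> (nat \<Rightarrow> ('a,'c) bmonad) \<Rightarrow> (nat \<Rightarrow> nat \<Rightarrow> 'c)
    \<Rightarrow> nat \<Rightarrow> nat \<Rightarrow> 'c" where
  "lbterm K A S L m j = (if j = 1 then wr K (wdl_idem K (S 1) (S 0) (L 0 1)) (seg K A S 2 (Suc m))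
                         else wr K (ovl K A S L j) (seg K A S (Suc j) (Suc m)))"

fun lbaux :: "('o,'a,'c) tcat \<Rightarrow> 'o \<Rightarrow> (nat \<Rightarrow> ('a,'c) bmonad) \<Rightarrow> (nat \<Rightarrow> nat \<Rightarrow> 'c)
    \<Rightarrow> nat \<Rightarrow> nat \<Rightarrow> 'c" where
  "lbaux K A S L m 0 = snd (seg K A S 0 (Suc m))"
| "lbaux K A S L m (Suc 0) = lbterm K A S L m 1"
| "lbaux K A S L m (Suc (Suc j)) = Vc K (lbterm K A S L m (Suc (Suc j))) (lbaux K A S L m (Suc j))"

text \<open>lbar_{0...m} for m >= 1.\<close>
definition lbar :: "('o,'a,'c) tcat \<Rightarrow> 'o \<Rightarrow> (nat \<Rightarrow> ('a,'c) bmonad) \<Rightarrow> (nat \<Rightarrow> nat \<Rightarrow> 'c) \<Rightarrow> nat \<Rightarrow> 'c" where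
  "lbar K A S L m = (if m = 1 then wdl_idem K (S 1) (S 0) (L 0 1) else lbaux K A S L m m)"

end

theory Submission
  imports Defs
begin

text \<open>
  The 2-functor C1 replaces the first two monads s0, s1 by their composite (s0 s1, lbar01) and
  the laws lambda_0j, lambda_1j by the composite law from s_j to s0 s1.  Iterating, after k steps
  the first monad is s0 ... sk with idempotent lbar_{0..k}, and the law from s_j to it is
  R_j . s_j lbar_{0..k}.  One more step composes this law with lambda_{k+1,j}; the idempotent
  lbar_{0..k} occurring inside can be absorbed because the law already is a 2-cell of the
  local idempotent closure, and what remains is exactly the recursive description of
  lbar_{0..k+1} and of R_j.  For this to be an induction, each iterate must again be a 0-cell of
  Wdl, i.e. C1 must be well defined on 0-cells; this is the bulk of the work.  It is carried out
  in the local idempotent closure regarded as a 2-category in its own right, where identity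
  2-cells are genuine identities and the calculus of weak distributive laws can be developed
  once for an arbitrary 2-category.
\<close>

section \<open>Calculus of endo-2-cells at one object\<close>

lemma twocatD:
  assumes "twocat K"
  shows
    "(\<forall>x\<in>Obj K. Id1 K x \<in> Arr K \<and> Src K (Id1 K x) = x \<and> Trg K (Id1 K x) = x)"
    "(\<forall>u\<in>Arr K. Src K u \<in> Obj K \<and> Trg K u \<in> Obj K)"
    "(\<forall>u\<in>Arr K. \<forall>w\<in>Arr K. Trg K w = Src K u \<longrightarrow>
        Hc1 K u w \<in> Arr K \<and> Src K (Hc1 K u w) = Src K w \<and> Trg K (Hc1 K u w) = Trg K u)"
    "(\<forall>u\<in>Arr K. \<forall>v\<in>Arr K. \<forall>w\<in>Arr K. Trg K w = Src K v \<longrightarrow> Trg K v = Src K u \<longrightarrow>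
        Hc1 K (Hc1 K u v) w = Hc1 K u (Hc1 K v w))"
    "(\<forall>u\<in>Arr K. Hc1 K (Id1 K (Trg K u)) u = u \<and> Hc1 K u (Id1 K (Src K u)) = u)"
    "(\<forall>a\<in>Cell K. Dom K a \<in> Arr K \<and> Cod K a \<in> Arr K \<and>
        Src K (Dom K a) = Src K (Cod K a) \<and> Trg K (Dom K a) = Trg K (Cod K a))"
    "(\<forall>u\<in>Arr K. Id2 K u \<in> Cell K \<and> Dom K (Id2 K u) = u \<and> Cod K (Id2 K u) = u)"
    "(\<forall>a\<in>Cell K. \<forall>b\<in>Cell K. Cod K b = Dom K a \<longrightarrow>
        Vc K a b \<in> Cell K \<and> Dom K (Vc K a b) = Dom K b \<and> Cod K (Vc K a b) = Cod K a)"
    "(\<forall>a\<in>Cell K. \<forall>b\<in>Cell K. \<forall>c\<in>Cell K. Cod K c = Dom K b \<longrightarrow> Cod K b = Dom K a \<longrightarrow>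
        Vc K (Vc K a b) c = Vc K a (Vc K b c))"
    "(\<forall>a\<in>Cell K. Vc K (Id2 K (Cod K a)) a = a \<and> Vc K a (Id2 K (Dom K a)) = a)"
    "(\<forall>a\<in>Cell K. \<forall>b\<in>Cell K. Trg K (Dom K b) = Src K (Dom K a) \<longrightarrow>
        Hc2 K a b \<in> Cell K \<and> Dom K (Hc2 K a b) = Hc1 K (Dom K a) (Dom K b) \<and>
        Cod K (Hc2 K a b) = Hc1 K (Cod K a) (Cod K b))"
    "(\<forall>a\<in>Cell K. \<forall>b\<in>Cell K. \<forall>c\<in>Cell K.
        Trg K (Dom K c) = Src K (Dom K b) \<longrightarrow> Trg K (Dom K b) = Src K (Dom K a) \<longrightarrow>
        Hc2 K (Hc2 K a b) c = Hc2 K a (Hc2 K b c))"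
    "(\<forall>a\<in>Cell K. Hc2 K (Id2 K (Id1 K (Trg K (Dom K a)))) a = a \<and>
        Hc2 K a (Id2 K (Id1 K (Src K (Dom K a)))) = a)"
    "(\<forall>u\<in>Arr K. \<forall>w\<in>Arr K. Trg K w = Src K u \<longrightarrow> Hc2 K (Id2 K u) (Id2 K w) = Id2 K (Hc1 K u w))"
    "(\<forall>a\<in>Cell K. \<forall>b\<in>Cell K. \<forall>c\<in>Cell K. \<forall>d\<in>Cell K.
        Cod K b = Dom K a \<longrightarrow> Cod K d = Dom K c \<longrightarrow> Trg K (Dom K c) = Src K (Dom K a) \<longrightarrow>
        Hc2 K (Vc K a b) (Vc K c d) = Vc K (Hc2 K a c) (Hc2 K b d))"
  using assms unfolding twocat_def by (simp_all only: conj_imp_eq_imp_imp) 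

locale endo_twocat =
  fixes K :: "('o,'a,'c) tcat" and A :: 'o
  assumes tc: "twocat K" and A: "A \<in> Obj K"
begin

abbreviation V (infixr "\<odot>" 60) where "a \<odot> b \<equiv> Vc K a b"
abbreviation H (infixr "\<otimes>" 70) where "a \<otimes> b \<equiv> Hc2 K a b"
abbreviation H1 (infixr "\<cdot>" 75) where "u \<cdot> w \<equiv> Hc1 K u w"
abbreviation I where "I \<equiv> Id1 K A"

definition arr where "arr u \<longleftrightarrow> u \<in> Arr K \<and> Src K u = A \<and> Trg K u = A"
definition cell where "cell c \<longleftrightarrow> c \<in> Cell K \<and> arr (Dom K c) \<and> arr (Cod K c)"

lemmas tcD = twocatD[OF tc]

lemma arr_Id1[simp]: "arr I" using tcD(1) A by (simp add: arr_def)
lemma arr_Hc1[simp]: "arr u \<Longrightarrow> arr w \<Longrightarrow> arr (Hc1 K u w)" using tcD(3) by (simp add: arr_def)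
lemma Hc1_assoc[simp]: "arr u \<Longrightarrow> arr v \<Longrightarrow> arr w \<Longrightarrow> Hc1 K (Hc1 K u v) w = Hc1 K u (Hc1 K v w)"
  using tcD(4) by (simp add: arr_def)
lemma Hc1_Id1[simp]: "arr u \<Longrightarrow> Hc1 K I u = u" "arr u \<Longrightarrow> Hc1 K u I = u"
  using tcD(5) by (auto simp: arr_def)
lemma Hc2_typing: assumes "cell a" "cell b"
  shows "cell (a \<otimes> b) \<and> Dom K (a \<otimes> b) = Hc1 K (Dom K a) (Dom K b) \<and> Cod K (a \<otimes> b) = Hc1 K (Cod K a) (Cod K b)"
proof -
  have c: "a \<in> Cell K" "b \<in> Cell K" "Trg K (Dom K b) = Src K (Dom K a)" "arr (Dom K a)" "arr (Dom K b)"
     "arr (Cod K a)" "arr (Cod K b)"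
    using assms by (auto simp: cell_def arr_def)
  then have h: "a \<otimes> b \<in> Cell K \<and> Dom K (a \<otimes> b) = Hc1 K (Dom K a) (Dom K b) \<and> Cod K (a \<otimes> b) = Hc1 K (Cod K a) (Cod K b)"
    using tcD(11)[rule_format] by blast
  then show ?thesis using c by (simp add: cell_def)
qed
lemma cell_Hc2[simp]: "cell a \<Longrightarrow> cell b \<Longrightarrow> cell (a \<otimes> b)"
  and Dom_Hc2[simp]: "cell a \<Longrightarrow> cell b \<Longrightarrow> Dom K (a \<otimes> b) = Hc1 K (Dom K a) (Dom K b)"
  and Cod_Hc2[simp]: "cell a \<Longrightarrow> cell b \<Longrightarrow> Cod K (a \<otimes> b) = Hc1 K (Cod K a) (Cod K b)"
  using Hc2_typing by blast+
lemma Vc_typing: assumes "cell a" "cell b" "Cod K b = Dom K a"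
  shows "cell (a \<odot> b) \<and> Dom K (a \<odot> b) = Dom K b \<and> Cod K (a \<odot> b) = Cod K a"
proof -
  have c: "a \<in> Cell K" "b \<in> Cell K" "arr (Dom K b)" "arr (Cod K a)"
    using assms by (auto simp: cell_def)
  then have h: "a \<odot> b \<in> Cell K \<and> Dom K (a \<odot> b) = Dom K b \<and> Cod K (a \<odot> b) = Cod K a"
    using tcD(8)[rule_format] assms(3) by blast
  then show ?thesis using c by (simp add: cell_def)
qed
lemma cell_Vc[simp]: "cell a \<Longrightarrow> cell b \<Longrightarrow> Cod K b = Dom K a \<Longrightarrow> cell (a \<odot> b)"
  and Dom_Vc[simp]: "cell a \<Longrightarrow> cell b \<Longrightarrow> Cod K b = Dom K a \<Longrightarrow> Dom K (a \<odot> b) = Dom K b"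
  and Cod_Vc[simp]: "cell a \<Longrightarrow> cell b \<Longrightarrow> Cod K b = Dom K a \<Longrightarrow> Cod K (a \<odot> b) = Cod K a"
  using Vc_typing by blast+
lemma cell_Id2[simp]: "arr u \<Longrightarrow> cell (Id2 K u)" and Dom_Id2[simp]: "arr u \<Longrightarrow> Dom K (Id2 K u) = u"
  and Cod_Id2[simp]: "arr u \<Longrightarrow> Cod K (Id2 K u) = u"
  using tcD(7) by (auto simp: cell_def arr_def)
lemma arr_Dom_Cod[simp]: "cell a \<Longrightarrow> arr (Dom K a)" "cell a \<Longrightarrow> arr (Cod K a)" by (auto simp: cell_def)

lemma Vc_assoc[simp]: "cell a \<Longrightarrow> cell b \<Longrightarrow> cell c \<Longrightarrow> Cod K c = Dom K b \<Longrightarrow> Cod K b = Dom K a \<Longrightarrow>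
   (a \<odot> b) \<odot> c = a \<odot> b \<odot> c"
  unfolding cell_def by (rule tcD(9)[rule_format]) auto
lemma Hc2_assoc[simp]: "cell a \<Longrightarrow> cell b \<Longrightarrow> cell c \<Longrightarrow> (a \<otimes> b) \<otimes> c = a \<otimes> b \<otimes> c"
  unfolding cell_def arr_def by (rule tcD(12)[rule_format]) auto
lemma Vc_Id2_left[simp]: "cell a \<Longrightarrow> Cod K a = u \<Longrightarrow> Id2 K u \<odot> a = a"
  and Vc_Id2_right[simp]: "cell a \<Longrightarrow> Dom K a = u \<Longrightarrow> a \<odot> Id2 K u = a"
proof -
  assume "cell a"
  then have "a \<in> Cell K" unfolding cell_def by blast
  then have "Vc K (Id2 K (Cod K a)) a = a \<and> Vc K a (Id2 K (Dom K a)) = a" by (rule tcD(10)[rule_format])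
  then show "Cod K a = u \<Longrightarrow> Id2 K u \<odot> a = a" "Dom K a = u \<Longrightarrow> a \<odot> Id2 K u = a" by auto
qed
lemma Hc2_Id_left[simp]: "cell a \<Longrightarrow> Id2 K I \<otimes> a = a" and Hc2_Id_right[simp]: "cell a \<Longrightarrow> a \<otimes> Id2 K I = a"
proof -
  assume "cell a"
  then have "a \<in> Cell K" "Trg K (Dom K a) = A" "Src K (Dom K a) = A" unfolding cell_def arr_def by blast+
  moreover from this(1) have "Hc2 K (Id2 K (Id1 K (Trg K (Dom K a)))) a = a \<and>
        Hc2 K a (Id2 K (Id1 K (Src K (Dom K a)))) = a" by (rule tcD(13)[rule_format])
  ultimately show "Id2 K I \<otimes> a = a" "a \<otimes> Id2 K I = a" by simp_all
qed
lemma Hc2_Id2[simp]: "arr u \<Longrightarrow> arr w \<Longrightarrow> Id2 K u \<otimes> Id2 K w = Id2 K (Hc1 K u w)"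
proof -
  assume "arr u" "arr w"
  then have "u \<in> Arr K" "w \<in> Arr K" "Trg K w = Src K u" unfolding arr_def by auto
  then show ?thesis by (rule tcD(14)[rule_format])
qed
lemma interchange: "cell a \<Longrightarrow> cell b \<Longrightarrow> cell c \<Longrightarrow> cell d \<Longrightarrow> Cod K b = Dom K a \<Longrightarrow> Cod K d = Dom K c \<Longrightarrow>
   (a \<odot> b) \<otimes> (c \<odot> d) = (a \<otimes> c) \<odot> (b \<otimes> d)"
  unfolding cell_def arr_def by (rule tcD(15)[rule_format]) auto

lemma interchange_fuse: "cell a \<Longrightarrow> cell b \<Longrightarrow> cell c \<Longrightarrow> cell d \<Longrightarrow> Cod K b = Dom K a \<Longrightarrow> Cod K d = Dom K c \<Longrightarrow>
   (a \<otimes> c) \<odot> (b \<otimes> d) = (a \<odot> b) \<otimes> (c \<odot> d)"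
  using interchange[of a b c d] by simp

abbreviation idt ("\<iota>") where "\<iota> \<equiv> Id2 K"

lemma Id2_Hc2_merge[simp]: "arr u \<Longrightarrow> arr w \<Longrightarrow> cell x \<Longrightarrow> \<iota> u \<otimes> \<iota> w \<otimes> x = \<iota> (u \<cdot> w) \<otimes> x"
  by (simp flip: Hc2_assoc)
lemma Id2_Hc2_Vc[simp]: "arr p \<Longrightarrow> cell x \<Longrightarrow> cell y \<Longrightarrow> Cod K y = Dom K x \<Longrightarrow> \<iota> p \<otimes> (x \<odot> y) = (\<iota> p \<otimes> x) \<odot> (\<iota> p \<otimes> y)"
  using interchange[of "\<iota> p" "\<iota> p" x y] by simp
lemma Vc_Hc2_Id2[simp]: "arr p \<Longrightarrow> cell x \<Longrightarrow> cell y \<Longrightarrow> Cod K y = Dom K x \<Longrightarrow> (x \<odot> y) \<otimes> \<iota> p = (x \<otimes> \<iota> p) \<odot> (y \<otimes> \<iota> p)"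
  using interchange[of x y "\<iota> p" "\<iota> p"] by simp
lemma Vc_Id2_middle[simp]: "cell x \<Longrightarrow> cell y \<Longrightarrow> Dom K x = w \<Longrightarrow> Cod K y = w \<Longrightarrow> x \<odot> \<iota> w \<odot> y = x \<odot> y"
proof -
  assume h: "cell x" "cell y" "Dom K x = w" "Cod K y = w"
  then have "x \<odot> \<iota> w \<odot> y = (x \<odot> \<iota> w) \<odot> y" by (intro Vc_assoc[symmetric]) auto
  then show ?thesis using h by simp
qed

text \<open>
  The simplifier keeps vertical composites right-associated; the following congruences feed it
  an equation whiskered on both sides and followed by an arbitrary tail.
\<close>

lemma whisker_eq: "x = y \<Longrightarrow> \<iota> p \<otimes> x \<otimes> \<iota> q = \<iota> p \<otimes> y \<otimes> \<iota> q" by simp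
lemma whisker_eq_Vc: "x = y \<Longrightarrow> (\<And>z. cell z \<Longrightarrow> Cod K z = Dom K (\<iota> p \<otimes> x \<otimes> \<iota> q) \<Longrightarrow> (\<iota> p \<otimes> x \<otimes> \<iota> q) \<odot> z = (\<iota> p \<otimes> y \<otimes> \<iota> q) \<odot> z)" by simp
lemma Hc2_split: "cell x \<Longrightarrow> cell y \<Longrightarrow> x \<otimes> y = (x \<otimes> \<iota> (Cod K y)) \<odot> (\<iota> (Dom K x) \<otimes> y)"
  using interchange[of x "\<iota> (Dom K x)" "\<iota> (Cod K y)" y] by simp
lemma Hc2_split': "cell x \<Longrightarrow> cell y \<Longrightarrow> x \<otimes> y = (\<iota> (Cod K x) \<otimes> y) \<odot> (x \<otimes> \<iota> (Dom K y))"
  using interchange[of "\<iota> (Cod K x)" x y "\<iota> (Dom K y)"] by simp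
lemma whisker_Vc_Id2: "x \<odot> y = \<iota> w \<Longrightarrow> cell x \<Longrightarrow> cell y \<Longrightarrow> Cod K y = Dom K x \<Longrightarrow> arr w \<Longrightarrow> arr p \<Longrightarrow> arr q \<Longrightarrow>
   (\<iota> p \<otimes> x \<otimes> \<iota> q) \<odot> (\<iota> p \<otimes> y \<otimes> \<iota> q) = \<iota> (p \<cdot> w \<cdot> q)"
proof -
  assume h: "x \<odot> y = \<iota> w" "cell x" "cell y" "Cod K y = Dom K x" "arr w" "arr p" "arr q"
  have e: "(\<iota> p \<otimes> x \<otimes> \<iota> q) \<odot> (\<iota> p \<otimes> y \<otimes> \<iota> q) = \<iota> p \<otimes> (x \<odot> y) \<otimes> \<iota> q" using h(2-7) by simp
  show ?thesis unfolding e h(1) using h by simp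
qed
lemma whisker_Vc_Id2_Vc: "x \<odot> y = \<iota> w \<Longrightarrow> cell x \<Longrightarrow> cell y \<Longrightarrow> Cod K y = Dom K x \<Longrightarrow> arr w \<Longrightarrow> arr p \<Longrightarrow> arr q \<Longrightarrow> cell z \<Longrightarrow>
   Cod K z = Dom K (\<iota> p \<otimes> y \<otimes> \<iota> q) \<Longrightarrow>
   (\<iota> p \<otimes> x \<otimes> \<iota> q) \<odot> (\<iota> p \<otimes> y \<otimes> \<iota> q) \<odot> z = z"
proof -
  assume h: "x \<odot> y = \<iota> w" "cell x" "cell y" "Cod K y = Dom K x" "arr w" "arr p" "arr q" "cell z" "Cod K z = Dom K (\<iota> p \<otimes> y \<otimes> \<iota> q)"
  have w: "(\<iota> p \<otimes> x \<otimes> \<iota> q) \<odot> (\<iota> p \<otimes> y \<otimes> \<iota> q) = \<iota> (p \<cdot> w \<cdot> q)" by (rule whisker_Vc_Id2[OF h(1-7)])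
  have "Dom K (\<iota> p \<otimes> y \<otimes> \<iota> q) = p \<cdot> w \<cdot> q"
  proof -
    have "Dom K ((\<iota> p \<otimes> x \<otimes> \<iota> q) \<odot> (\<iota> p \<otimes> y \<otimes> \<iota> q)) = Dom K (\<iota> p \<otimes> y \<otimes> \<iota> q)"
      using h by simp
    then show ?thesis using w h by simp
  qed
  have "(\<iota> p \<otimes> x \<otimes> \<iota> q) \<odot> (\<iota> p \<otimes> y \<otimes> \<iota> q) \<odot> z = ((\<iota> p \<otimes> x \<otimes> \<iota> q) \<odot> (\<iota> p \<otimes> y \<otimes> \<iota> q)) \<odot> z"
    using h by simp
  also have "\<dots> = \<iota> (p \<cdot> w \<cdot> q) \<odot> z" using w by simp
  also have "\<dots> = z" using h \<open>Dom K (\<iota> p \<otimes> y \<otimes> \<iota> q) = p \<cdot> w \<cdot> q\<close> by simp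
  finally show ?thesis .
qed
lemma eq_Vc: "x = y \<Longrightarrow> (\<And>z. cell z \<Longrightarrow> Cod K z = Dom K x \<Longrightarrow> x \<odot> z = y \<odot> z)" by simp

text \<open>Interchange in the form that slides two cells at different heights past each other.\<close>

lemma slide: "cell x \<Longrightarrow> cell y \<Longrightarrow> arr p \<Longrightarrow> arr m \<Longrightarrow> arr q \<Longrightarrow>
  (\<iota> p \<otimes> \<iota> (Cod K x) \<otimes> \<iota> m \<otimes> y \<otimes> \<iota> q) \<odot> (\<iota> p \<otimes> x \<otimes> \<iota> m \<otimes> \<iota> (Dom K y) \<otimes> \<iota> q)
  = (\<iota> p \<otimes> x \<otimes> \<iota> m \<otimes> \<iota> (Cod K y) \<otimes> \<iota> q) \<odot> (\<iota> p \<otimes> \<iota> (Dom K x) \<otimes> \<iota> m \<otimes> y \<otimes> \<iota> q)"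
  by (simp del: Id2_Hc2_merge Hc2_Id2 Id2_Hc2_Vc Vc_Hc2_Id2 add: interchange_fuse)

lemma slide_Vc: "cell x \<Longrightarrow> cell y \<Longrightarrow> arr p \<Longrightarrow> arr m \<Longrightarrow> arr q \<Longrightarrow> cell z \<Longrightarrow>
  Cod K z = Dom K (\<iota> p \<otimes> x \<otimes> \<iota> m \<otimes> \<iota> (Dom K y) \<otimes> \<iota> q) \<Longrightarrow>
  (\<iota> p \<otimes> \<iota> (Cod K x) \<otimes> \<iota> m \<otimes> y \<otimes> \<iota> q) \<odot> (\<iota> p \<otimes> x \<otimes> \<iota> m \<otimes> \<iota> (Dom K y) \<otimes> \<iota> q) \<odot> z
  = (\<iota> p \<otimes> x \<otimes> \<iota> m \<otimes> \<iota> (Cod K y) \<otimes> \<iota> q) \<odot> (\<iota> p \<otimes> \<iota> (Dom K x) \<otimes> \<iota> m \<otimes> y \<otimes> \<iota> q) \<odot> z"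
proof -
  assume h: "cell x" "cell y" "arr p" "arr m" "arr q" "cell z" 
    "Cod K z = Dom K (\<iota> p \<otimes> x \<otimes> \<iota> m \<otimes> \<iota> (Dom K y) \<otimes> \<iota> q)"
  note sw = slide[OF h(1-5)]
  have "((\<iota> p \<otimes> \<iota> (Cod K x) \<otimes> \<iota> m \<otimes> y \<otimes> \<iota> q) \<odot> (\<iota> p \<otimes> x \<otimes> \<iota> m \<otimes> \<iota> (Dom K y) \<otimes> \<iota> q)) \<odot> z
  = ((\<iota> p \<otimes> x \<otimes> \<iota> m \<otimes> \<iota> (Cod K y) \<otimes> \<iota> q) \<odot> (\<iota> p \<otimes> \<iota> (Dom K x) \<otimes> \<iota> m \<otimes> y \<otimes> \<iota> q)) \<odot> z"
    by (subst sw) (rule refl)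
  then show ?thesis using h by (simp del: Id2_Hc2_merge Hc2_Id2)
qed

definition is_monad where
  "is_monad s m h \<longleftrightarrow> arr s \<and> cell m \<and> Dom K m = s \<cdot> s \<and> Cod K m = s \<and> cell h \<and> Dom K h = I \<and> Cod K h = s \<and>
     m \<odot> (m \<otimes> \<iota> s) = m \<odot> (\<iota> s \<otimes> m) \<and> m \<odot> (\<iota> s \<otimes> h) = \<iota> s \<and> m \<odot> (h \<otimes> \<iota> s) = \<iota> s"

definition is_wdl where
  "is_wdl t mt ht s ms hs l \<longleftrightarrow> is_monad t mt ht \<and> is_monad s ms hs \<and> cell l \<and> Dom K l = t \<cdot> s \<and> Cod K l = s \<cdot> t \<and>
     l \<odot> (mt \<otimes> \<iota> s) = (\<iota> s \<otimes> mt) \<odot> (l \<otimes> \<iota> t) \<odot> (\<iota> t \<otimes> l) \<and>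
     l \<odot> (\<iota> t \<otimes> ms) = (ms \<otimes> \<iota> t) \<odot> (\<iota> s \<otimes> l) \<odot> (l \<otimes> \<iota> s) \<and>
     l \<odot> (ht \<otimes> \<iota> s) = (ms \<otimes> \<iota> t) \<odot> (\<iota> s \<otimes> l) \<odot> (\<iota> s \<otimes> \<iota> t \<otimes> hs) \<odot> (\<iota> s \<otimes> ht) \<and>
     l \<odot> (\<iota> t \<otimes> hs) = (\<iota> s \<otimes> mt) \<odot> (l \<otimes> \<iota> t) \<odot> (ht \<otimes> \<iota> s \<otimes> \<iota> t) \<odot> (hs \<otimes> \<iota> t)"

end

section \<open>Monads and weak distributive laws in a 2-category\<close>

locale twocat_monad = endo_twocat +
  fixes s ms hs assumes monad: "is_monad s ms hs"
begin
lemma monad_simps[simp]: "arr s" "cell ms" "Dom K ms = s \<cdot> s" "Cod K ms = s" "cell hs" "Dom K hs = I" "Cod K hs = s"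
  "ms \<odot> (\<iota> s \<otimes> hs) = \<iota> s" "ms \<odot> (hs \<otimes> \<iota> s) = \<iota> s"
  using monad by (auto simp: is_monad_def)
lemma mult_assoc: "ms \<odot> (ms \<otimes> \<iota> s) = ms \<odot> (\<iota> s \<otimes> ms)" using monad by (auto simp: is_monad_def)
end

locale twocat_wdl = endo_twocat +
  fixes t mt ht s ms hs l assumes wdl_ax: "is_wdl t mt ht s ms hs l"
begin
sublocale T: twocat_monad K A t mt ht using wdl_ax by unfold_locales (simp add: is_wdl_def)
sublocale S: twocat_monad K A s ms hs using wdl_ax by unfold_locales (simp add: is_wdl_def)
lemma law_simps[simp]: "cell l" "Dom K l = t \<cdot> s" "Cod K l = s \<cdot> t" using wdl_ax by (auto simp: is_wdl_def)
lemma law_mult_t: "l \<odot> (mt \<otimes> \<iota> s) = (\<iota> s \<otimes> mt) \<odot> (l \<otimes> \<iota> t) \<odot> (\<iota> t \<otimes> l)" using wdl_ax by (simp add: is_wdl_def)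
lemma law_mult_s: "l \<odot> (\<iota> t \<otimes> ms) = (ms \<otimes> \<iota> t) \<odot> (\<iota> s \<otimes> l) \<odot> (l \<otimes> \<iota> s)" using wdl_ax by (simp add: is_wdl_def)
lemma law_unit_t: "l \<odot> (ht \<otimes> \<iota> s) = (ms \<otimes> \<iota> t) \<odot> (\<iota> s \<otimes> l) \<odot> (\<iota> (s \<cdot> t) \<otimes> hs) \<odot> (\<iota> s \<otimes> ht)"
  using wdl_ax by (simp add: is_wdl_def)
lemma law_unit_s: "l \<odot> (\<iota> t \<otimes> hs) = (\<iota> s \<otimes> mt) \<odot> (l \<otimes> \<iota> t) \<odot> (ht \<otimes> \<iota> (s \<cdot> t)) \<odot> (hs \<otimes> \<iota> t)"
  using wdl_ax by (simp add: is_wdl_def)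

definition "idem = (ms \<otimes> \<iota> t) \<odot> (\<iota> s \<otimes> l) \<odot> (\<iota> (s \<cdot> t) \<otimes> hs)"
definition "idem' = (\<iota> s \<otimes> mt) \<odot> (l \<otimes> \<iota> t) \<odot> (ht \<otimes> \<iota> (s \<cdot> t))"

lemma idem_typing[simp]: "cell idem" "Dom K idem = s \<cdot> t" "Cod K idem = s \<cdot> t" unfolding idem_def by simp_all
lemma idem'_typing[simp]: "cell idem'" "Dom K idem' = s \<cdot> t" "Cod K idem' = s \<cdot> t" unfolding idem'_def by simp_all

lemma idem_law: "idem \<odot> l = l"
proof -
  have 1: "(\<iota> (s \<cdot> t) \<otimes> hs) \<odot> l = (l \<otimes> \<iota> s) \<odot> (\<iota> (t \<cdot> s) \<otimes> hs)"
    using interchange[of "\<iota> (s \<cdot> t)" l hs "\<iota> I"] interchange[of l "\<iota> (t \<cdot> s)" "\<iota> s" hs] by simp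
  have "idem \<odot> l = (ms \<otimes> \<iota> t) \<odot> (\<iota> s \<otimes> l) \<odot> (l \<otimes> \<iota> s) \<odot> (\<iota> (t \<cdot> s) \<otimes> hs)"
    unfolding idem_def using 1 by simp
  also have "\<dots> = l \<odot> (\<iota> t \<otimes> ms) \<odot> (\<iota> (t \<cdot> s) \<otimes> hs)"
    using law_mult_s[symmetric, THEN eq_Vc] by simp
  also have "\<dots> = l" 
    using interchange[of "\<iota> t" "\<iota> t" ms "\<iota> s \<otimes> hs"] by simp
  finally show ?thesis .
qed

lemma idem_mult_s: "idem \<odot> (ms \<otimes> \<iota> t) = (ms \<otimes> \<iota> t) \<odot> (\<iota> s \<otimes> idem)"
proof -
  have "(ms \<otimes> \<iota> t) \<odot> (\<iota> s \<otimes> idem) = (ms \<otimes> \<iota> t) \<odot> (\<iota> s \<otimes> ms \<otimes> \<iota> t) \<odot> (\<iota> (s \<cdot> s) \<otimes> l) \<odot> (\<iota> (s \<cdot> s \<cdot> t) \<otimes> hs)"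
    unfolding idem_def by simp
  also have "\<dots> = (ms \<otimes> \<iota> t) \<odot> (ms \<otimes> \<iota> (s \<cdot> t)) \<odot> (\<iota> (s \<cdot> s) \<otimes> l) \<odot> (\<iota> (s \<cdot> s \<cdot> t) \<otimes> hs)"
    using S.mult_assoc[symmetric, THEN whisker_eq_Vc[where p=I and q=t]] by simp
  also have "\<dots> = (ms \<otimes> \<iota> t) \<odot> (\<iota> s \<otimes> l) \<odot> (ms \<otimes> \<iota> (t \<cdot> s)) \<odot> (\<iota> (s \<cdot> s \<cdot> t) \<otimes> hs)"
    using slide_Vc[of ms l I I I, symmetric] by simp
  also have "\<dots> = (ms \<otimes> \<iota> t) \<odot> (\<iota> s \<otimes> l) \<odot> (\<iota> (s \<cdot> t) \<otimes> hs) \<odot> (ms \<otimes> \<iota> t)"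
    using slide[of ms hs I t I, symmetric] by simp
  also have "\<dots> = idem \<odot> (ms \<otimes> \<iota> t)" unfolding idem_def by simp
  finally show ?thesis by simp
qed

lemma idem'_mult_t: "idem' \<odot> (\<iota> s \<otimes> mt) = (\<iota> s \<otimes> mt) \<odot> (idem' \<otimes> \<iota> t)"
proof -
  have "(\<iota> s \<otimes> mt) \<odot> (idem' \<otimes> \<iota> t) = (\<iota> s \<otimes> mt) \<odot> (\<iota> s \<otimes> mt \<otimes> \<iota> t) \<odot> (l \<otimes> \<iota> (t \<cdot> t)) \<odot> (ht \<otimes> \<iota> (s \<cdot> t \<cdot> t))"
    unfolding idem'_def by simp
  also have "\<dots> = (\<iota> s \<otimes> mt) \<odot> (\<iota> (s \<cdot> t) \<otimes> mt) \<odot> (l \<otimes> \<iota> (t \<cdot> t)) \<odot> (ht \<otimes> \<iota> (s \<cdot> t \<cdot> t))"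
    using T.mult_assoc[THEN whisker_eq_Vc[where p=s and q=I]] by simp
  also have "\<dots> = (\<iota> s \<otimes> mt) \<odot> (l \<otimes> \<iota> t) \<odot> (\<iota> (t \<cdot> s) \<otimes> mt) \<odot> (ht \<otimes> \<iota> (s \<cdot> t \<cdot> t))"
    using slide_Vc[of l mt I I I] by simp
  also have "\<dots> = (\<iota> s \<otimes> mt) \<odot> (l \<otimes> \<iota> t) \<odot> (ht \<otimes> \<iota> (s \<cdot> t)) \<odot> (\<iota> s \<otimes> mt)"
    using slide[of ht mt I s I] by simp
  also have "\<dots> = idem' \<odot> (\<iota> s \<otimes> mt)" unfolding idem'_def by simp
  finally show ?thesis by simp
qed

lemma idem_eq_idem': "idem = idem'"
proof -
  have "idem = (ms \<otimes> \<iota> t) \<odot> (\<iota> s \<otimes> l) \<odot> (\<iota> (s \<cdot> t) \<otimes> hs)" unfolding idem_def by simp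
  also have "\<dots> = (ms \<otimes> \<iota> t) \<odot> (\<iota> (s \<cdot> s) \<otimes> mt) \<odot> (\<iota> s \<otimes> l \<otimes> \<iota> t) \<odot> (\<iota> s \<otimes> ht \<otimes> \<iota> (s \<cdot> t)) \<odot> (\<iota> s \<otimes> hs \<otimes> \<iota> t)"
    using law_unit_s[THEN whisker_eq[where p=s and q=I]] by simp
  also have "\<dots> = (\<iota> s \<otimes> mt) \<odot> (ms \<otimes> \<iota> (t \<cdot> t)) \<odot> (\<iota> s \<otimes> l \<otimes> \<iota> t) \<odot> (\<iota> s \<otimes> ht \<otimes> \<iota> (s \<cdot> t)) \<odot> (\<iota> s \<otimes> hs \<otimes> \<iota> t)"
    using slide_Vc[of ms mt I I I, symmetric] by simp
  also have "\<dots> = (\<iota> s \<otimes> mt) \<odot> (ms \<otimes> \<iota> (t \<cdot> t)) \<odot> (\<iota> s \<otimes> l \<otimes> \<iota> t) \<odot> (\<iota> (s \<cdot> t) \<otimes> hs \<otimes> \<iota> t) \<odot> (\<iota> s \<otimes> ht \<otimes> \<iota> t)"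
    using slide[of ht hs s I t, symmetric] by simp
  also have "\<dots> = (\<iota> s \<otimes> mt) \<odot> (l \<otimes> \<iota> t) \<odot> (ht \<otimes> \<iota> (s \<cdot> t))"
    using law_unit_t[symmetric, THEN whisker_eq[where p=I and q=t]] by simp
  also have "\<dots> = idem'" unfolding idem'_def by simp
  finally show ?thesis .
qed

lemma idem_mult_t: "idem \<odot> (\<iota> s \<otimes> mt) = (\<iota> s \<otimes> mt) \<odot> (idem \<otimes> \<iota> t)"
  using idem'_mult_t idem_eq_idem' by simp

lemma idem_idem: "idem \<odot> idem = idem"
proof -
  have "idem \<odot> idem = idem \<odot> (ms \<otimes> \<iota> t) \<odot> (\<iota> s \<otimes> l) \<odot> (\<iota> (s \<cdot> t) \<otimes> hs)" by (simp add: idem_def)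
  also have "\<dots> = (ms \<otimes> \<iota> t) \<odot> (\<iota> s \<otimes> idem) \<odot> (\<iota> s \<otimes> l) \<odot> (\<iota> (s \<cdot> t) \<otimes> hs)"
    using idem_mult_s[THEN eq_Vc] by simp
  also have "\<dots> = idem"
    using idem_law[THEN whisker_eq_Vc[where p=s and q=I]] by (simp add: idem_def)
  finally show ?thesis .
qed

definition "mu_st = (ms \<otimes> \<iota> t) \<odot> (\<iota> (s \<cdot> s) \<otimes> mt) \<odot> (\<iota> s \<otimes> l \<otimes> \<iota> t)"
definition "eta_st = l \<odot> (ht \<otimes> hs)"
lemma mu_st_typing[simp]: "cell mu_st" "Dom K mu_st = s \<cdot> t \<cdot> s \<cdot> t" "Cod K mu_st = s \<cdot> t" unfolding mu_st_def by simp_all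
lemma eta_st_typing[simp]: "cell eta_st" "Dom K eta_st = I" "Cod K eta_st = s \<cdot> t" unfolding eta_st_def by simp_all
lemma mu_st_alt: "mu_st = (ms \<otimes> mt) \<odot> (\<iota> s \<otimes> l \<otimes> \<iota> t)"
  unfolding mu_st_def using Hc2_split[of ms mt] by simp

lemma idem_mu_st: "idem \<odot> mu_st = mu_st"
proof -
  have "idem \<odot> mu_st = (ms \<otimes> \<iota> t) \<odot> (\<iota> s \<otimes> idem) \<odot> (\<iota> (s \<cdot> s) \<otimes> mt) \<odot> (\<iota> s \<otimes> l \<otimes> \<iota> t)"
    unfolding mu_st_def using idem_mult_s[THEN eq_Vc] by simp
  also have "\<dots> = (ms \<otimes> \<iota> t) \<odot> (\<iota> (s \<cdot> s) \<otimes> mt) \<odot> (\<iota> s \<otimes> idem \<otimes> \<iota> t) \<odot> (\<iota> s \<otimes> l \<otimes> \<iota> t)"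
    using idem_mult_t[THEN whisker_eq_Vc[where p=s and q=I]] by simp
  also have "\<dots> = mu_st"
    unfolding mu_st_def using idem_law[THEN whisker_eq[where p=s and q=t]] by simp
  finally show ?thesis .
qed

lemma mu_st_idem'_right: "mu_st \<odot> (\<iota> (s \<cdot> t) \<otimes> idem') = mu_st"
proof -
  have "mu_st \<odot> (\<iota> (s \<cdot> t) \<otimes> idem') = (ms \<otimes> \<iota> t) \<odot> (\<iota> (s \<cdot> s) \<otimes> mt) \<odot> (\<iota> s \<otimes> l \<otimes> \<iota> t) \<odot> (\<iota> (s \<cdot> t \<cdot> s) \<otimes> mt)
     \<odot> (\<iota> (s \<cdot> t) \<otimes> l \<otimes> \<iota> t) \<odot> (\<iota> (s \<cdot> t) \<otimes> ht \<otimes> \<iota> (s \<cdot> t))"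
    unfolding mu_st_def idem'_def by simp
  also have "\<dots> = (ms \<otimes> \<iota> t) \<odot> (\<iota> (s \<cdot> s) \<otimes> mt) \<odot> (\<iota> (s \<cdot> s \<cdot> t) \<otimes> mt) \<odot> (\<iota> s \<otimes> l \<otimes> \<iota> (t \<cdot> t))
     \<odot> (\<iota> (s \<cdot> t) \<otimes> l \<otimes> \<iota> t) \<odot> (\<iota> (s \<cdot> t) \<otimes> ht \<otimes> \<iota> (s \<cdot> t))"
    using slide_Vc[of l mt s I I, symmetric] by simp
  also have "\<dots> = (ms \<otimes> \<iota> t) \<odot> (\<iota> (s \<cdot> s) \<otimes> mt) \<odot> (\<iota> (s \<cdot> s) \<otimes> mt \<otimes> \<iota> t) \<odot> (\<iota> s \<otimes> l \<otimes> \<iota> (t \<cdot> t))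
     \<odot> (\<iota> (s \<cdot> t) \<otimes> l \<otimes> \<iota> t) \<odot> (\<iota> (s \<cdot> t) \<otimes> ht \<otimes> \<iota> (s \<cdot> t))"
    using T.mult_assoc[symmetric, THEN whisker_eq_Vc[where p="s \<cdot> s" and q=I]] by simp
  also have "\<dots> = (ms \<otimes> \<iota> t) \<odot> (\<iota> (s \<cdot> s) \<otimes> mt) \<odot> (\<iota> s \<otimes> l \<otimes> \<iota> t) \<odot> (\<iota> s \<otimes> mt \<otimes> \<iota> (s \<cdot> t))
     \<odot> (\<iota> (s \<cdot> t) \<otimes> ht \<otimes> \<iota> (s \<cdot> t))"
    using law_mult_t[symmetric, THEN whisker_eq_Vc[where p=s and q=t]] by simp
  also have "\<dots> = mu_st"
    unfolding mu_st_def using whisker_Vc_Id2[OF T.monad_simps(8), of s "s \<cdot> t"] by simp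
  finally show ?thesis .
qed

lemma mu_st_idem_left: "mu_st \<odot> (idem \<otimes> \<iota> (s \<cdot> t)) = mu_st"
proof -
  have "mu_st \<odot> (idem \<otimes> \<iota> (s \<cdot> t)) = (ms \<otimes> \<iota> t) \<odot> (\<iota> (s \<cdot> s) \<otimes> mt) \<odot> (\<iota> s \<otimes> l \<otimes> \<iota> t) \<odot> (ms \<otimes> \<iota> (t \<cdot> s \<cdot> t))
     \<odot> (\<iota> s \<otimes> l \<otimes> \<iota> (s \<cdot> t)) \<odot> (\<iota> (s \<cdot> t) \<otimes> hs \<otimes> \<iota> (s \<cdot> t))"
    unfolding mu_st_def idem_def by simp
  also have "\<dots> = (ms \<otimes> \<iota> t) \<odot> (\<iota> (s \<cdot> s) \<otimes> mt) \<odot> (ms \<otimes> \<iota> (s \<cdot> t \<cdot> t)) \<odot> (\<iota> (s \<cdot> s) \<otimes> l \<otimes> \<iota> t)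
     \<odot> (\<iota> s \<otimes> l \<otimes> \<iota> (s \<cdot> t)) \<odot> (\<iota> (s \<cdot> t) \<otimes> hs \<otimes> \<iota> (s \<cdot> t))"
    using slide_Vc[of ms l I I t] by simp
  also have "\<dots> = (ms \<otimes> \<iota> t) \<odot> (ms \<otimes> \<iota> (s \<cdot> t)) \<odot> (\<iota> (s \<cdot> s \<cdot> s) \<otimes> mt) \<odot> (\<iota> (s \<cdot> s) \<otimes> l \<otimes> \<iota> t)
     \<odot> (\<iota> s \<otimes> l \<otimes> \<iota> (s \<cdot> t)) \<odot> (\<iota> (s \<cdot> t) \<otimes> hs \<otimes> \<iota> (s \<cdot> t))"
    using slide_Vc[of ms mt I s I] by simp
  also have "\<dots> = (ms \<otimes> \<iota> t) \<odot> (\<iota> s \<otimes> ms \<otimes> \<iota> t) \<odot> (\<iota> (s \<cdot> s \<cdot> s) \<otimes> mt) \<odot> (\<iota> (s \<cdot> s) \<otimes> l \<otimes> \<iota> t)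
     \<odot> (\<iota> s \<otimes> l \<otimes> \<iota> (s \<cdot> t)) \<odot> (\<iota> (s \<cdot> t) \<otimes> hs \<otimes> \<iota> (s \<cdot> t))"
    using S.mult_assoc[THEN whisker_eq_Vc[where p=I and q=t]] by simp
  also have "\<dots> = (ms \<otimes> \<iota> t) \<odot> (\<iota> (s \<cdot> s) \<otimes> mt) \<odot> (\<iota> s \<otimes> ms \<otimes> \<iota> (t \<cdot> t)) \<odot> (\<iota> (s \<cdot> s) \<otimes> l \<otimes> \<iota> t)
     \<odot> (\<iota> s \<otimes> l \<otimes> \<iota> (s \<cdot> t)) \<odot> (\<iota> (s \<cdot> t) \<otimes> hs \<otimes> \<iota> (s \<cdot> t))"
    using slide_Vc[of ms mt s I I, symmetric] by simp
  also have "\<dots> = (ms \<otimes> \<iota> t) \<odot> (\<iota> (s \<cdot> s) \<otimes> mt) \<odot> (\<iota> s \<otimes> l \<otimes> \<iota> t) \<odot> (\<iota> (s \<cdot> t) \<otimes> ms \<otimes> \<iota> t)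
     \<odot> (\<iota> (s \<cdot> t) \<otimes> hs \<otimes> \<iota> (s \<cdot> t))"
    using law_mult_s[symmetric, THEN whisker_eq_Vc[where p=s and q=t]] by simp
  also have "\<dots> = mu_st"
    unfolding mu_st_def using whisker_Vc_Id2[OF S.monad_simps(9), of "s \<cdot> t" t] by simp
  finally show ?thesis .
qed

lemma mu_st_idem_idem: "mu_st \<odot> (idem \<otimes> idem) = mu_st"
proof -
  have "mu_st \<odot> (idem \<otimes> idem) = mu_st \<odot> (idem \<otimes> \<iota> (s \<cdot> t)) \<odot> (\<iota> (s \<cdot> t) \<otimes> idem')"
    using Hc2_split[of idem idem] idem_eq_idem' by simp
  also have "\<dots> = mu_st" using mu_st_idem_left[THEN eq_Vc] mu_st_idem'_right by simp
  finally show ?thesis .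
qed

lemma idem_eta_st: "idem \<odot> eta_st = eta_st" unfolding eta_st_def using idem_law[THEN eq_Vc] by simp

lemma mu_st_eta_right: "mu_st \<odot> (\<iota> (s \<cdot> t) \<otimes> eta_st) = idem"
proof -
  have "mu_st \<odot> (\<iota> (s \<cdot> t) \<otimes> eta_st) = (ms \<otimes> \<iota> t) \<odot> (\<iota> (s \<cdot> s) \<otimes> mt) \<odot> (\<iota> s \<otimes> l \<otimes> \<iota> t) \<odot> (\<iota> (s \<cdot> t) \<otimes> l)
     \<odot> (\<iota> (s \<cdot> t) \<otimes> ht \<otimes> \<iota> s) \<odot> (\<iota> (s \<cdot> t) \<otimes> hs)"
    unfolding mu_st_def eta_st_def using Hc2_split[of ht hs] by simp
  also have "\<dots> = (ms \<otimes> \<iota> t) \<odot> (\<iota> s \<otimes> l) \<odot> (\<iota> s \<otimes> mt \<otimes> \<iota> s) \<odot> (\<iota> (s \<cdot> t) \<otimes> ht \<otimes> \<iota> s) \<odot> (\<iota> (s \<cdot> t) \<otimes> hs)"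
    using law_mult_t[symmetric, THEN whisker_eq_Vc[where p=s and q=I]] by simp
  also have "\<dots> = idem"
    unfolding idem_def using whisker_Vc_Id2_Vc[OF T.monad_simps(8), of s s] by simp
  finally show ?thesis .
qed

lemma mu_st_eta_left: "mu_st \<odot> (eta_st \<otimes> \<iota> (s \<cdot> t)) = idem"
proof -
  have "mu_st \<odot> (eta_st \<otimes> \<iota> (s \<cdot> t)) = (ms \<otimes> \<iota> t) \<odot> (\<iota> (s \<cdot> s) \<otimes> mt) \<odot> (\<iota> s \<otimes> l \<otimes> \<iota> t) \<odot> (l \<otimes> \<iota> (s \<cdot> t))
     \<odot> (ht \<otimes> \<iota> (s \<cdot> s \<cdot> t)) \<odot> (hs \<otimes> \<iota> (s \<cdot> t))"
    unfolding mu_st_def eta_st_def using Hc2_split[of ht "hs \<otimes> \<iota> (s \<cdot> t)"] by simp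
  also have "\<dots> = (\<iota> s \<otimes> mt) \<odot> (ms \<otimes> \<iota> (t \<cdot> t)) \<odot> (\<iota> s \<otimes> l \<otimes> \<iota> t) \<odot> (l \<otimes> \<iota> (s \<cdot> t))
     \<odot> (ht \<otimes> \<iota> (s \<cdot> s \<cdot> t)) \<odot> (hs \<otimes> \<iota> (s \<cdot> t))"
    using slide_Vc[of ms mt I I I, symmetric] by simp
  also have "\<dots> = (\<iota> s \<otimes> mt) \<odot> (l \<otimes> \<iota> t) \<odot> (\<iota> t \<otimes> ms \<otimes> \<iota> t)
     \<odot> (ht \<otimes> \<iota> (s \<cdot> s \<cdot> t)) \<odot> (hs \<otimes> \<iota> (s \<cdot> t))"
    using law_mult_s[symmetric, THEN whisker_eq_Vc[where p=I and q=t]] by simp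
  also have "\<dots> = (\<iota> s \<otimes> mt) \<odot> (l \<otimes> \<iota> t) \<odot> (ht \<otimes> \<iota> (s \<cdot> t)) \<odot> (ms \<otimes> \<iota> t) \<odot> (hs \<otimes> \<iota> (s \<cdot> t))"
    using slide_Vc[of ht ms I I t] by simp
  also have "\<dots> = idem'"
    unfolding idem'_def using whisker_Vc_Id2[OF S.monad_simps(9), of I t] by simp
  finally show ?thesis using idem_eq_idem' by simp
qed

lemma mu_st_assoc: "mu_st \<odot> (mu_st \<otimes> \<iota> (s \<cdot> t)) = mu_st \<odot> (\<iota> (s \<cdot> t) \<otimes> mu_st)"
proof -
  have "mu_st \<odot> (mu_st \<otimes> \<iota> (s \<cdot> t)) = (ms \<otimes> \<iota> t) \<odot> (\<iota> (s \<cdot> s) \<otimes> mt) \<odot> (\<iota> s \<otimes> l \<otimes> \<iota> t) \<odot> (ms \<otimes> \<iota> (t \<cdot> s \<cdot> t))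
     \<odot> (\<iota> (s \<cdot> s) \<otimes> mt \<otimes> \<iota> (s \<cdot> t)) \<odot> (\<iota> s \<otimes> l \<otimes> \<iota> (t \<cdot> s \<cdot> t))"
    unfolding mu_st_def by simp
  also have "\<dots> = (ms \<otimes> \<iota> t) \<odot> (\<iota> (s \<cdot> s) \<otimes> mt) \<odot> (ms \<otimes> \<iota> (s \<cdot> t \<cdot> t)) \<odot> (\<iota> (s \<cdot> s) \<otimes> l \<otimes> \<iota> t)
     \<odot> (\<iota> (s \<cdot> s) \<otimes> mt \<otimes> \<iota> (s \<cdot> t)) \<odot> (\<iota> s \<otimes> l \<otimes> \<iota> (t \<cdot> s \<cdot> t))"
    using slide_Vc[of ms l I I t] by simp
  also have "\<dots> = (ms \<otimes> \<iota> t) \<odot> (ms \<otimes> \<iota> (s \<cdot> t)) \<odot> (\<iota> (s \<cdot> s \<cdot> s) \<otimes> mt) \<odot> (\<iota> (s \<cdot> s) \<otimes> l \<otimes> \<iota> t)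
     \<odot> (\<iota> (s \<cdot> s) \<otimes> mt \<otimes> \<iota> (s \<cdot> t)) \<odot> (\<iota> s \<otimes> l \<otimes> \<iota> (t \<cdot> s \<cdot> t))"
    using slide_Vc[of ms mt I s I] by simp
  also have "\<dots> = (ms \<otimes> \<iota> t) \<odot> (\<iota> s \<otimes> ms \<otimes> \<iota> t) \<odot> (\<iota> (s \<cdot> s \<cdot> s) \<otimes> mt) \<odot> (\<iota> (s \<cdot> s) \<otimes> l \<otimes> \<iota> t)
     \<odot> (\<iota> (s \<cdot> s) \<otimes> mt \<otimes> \<iota> (s \<cdot> t)) \<odot> (\<iota> s \<otimes> l \<otimes> \<iota> (t \<cdot> s \<cdot> t))"
    using S.mult_assoc[THEN whisker_eq_Vc[where p=I and q=t]] by simp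
  also have "\<dots> = (ms \<otimes> \<iota> t) \<odot> (\<iota> s \<otimes> ms \<otimes> \<iota> t) \<odot> (\<iota> (s \<cdot> s \<cdot> s) \<otimes> mt) \<odot> (\<iota> (s \<cdot> s \<cdot> s) \<otimes> mt \<otimes> \<iota> t)
     \<odot> (\<iota> (s \<cdot> s) \<otimes> l \<otimes> \<iota> (t \<cdot> t)) \<odot> (\<iota> (s \<cdot> s \<cdot> t) \<otimes> l \<otimes> \<iota> t) \<odot> (\<iota> s \<otimes> l \<otimes> \<iota> (t \<cdot> s \<cdot> t))"
    using law_mult_t[THEN whisker_eq_Vc[where p="s \<cdot> s" and q=t]] by simp
  also have "\<dots> = (ms \<otimes> \<iota> t) \<odot> (\<iota> s \<otimes> ms \<otimes> \<iota> t) \<odot> (\<iota> (s \<cdot> s \<cdot> s) \<otimes> mt) \<odot> (\<iota> (s \<cdot> s \<cdot> s \<cdot> t) \<otimes> mt)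
     \<odot> (\<iota> (s \<cdot> s) \<otimes> l \<otimes> \<iota> (t \<cdot> t)) \<odot> (\<iota> (s \<cdot> s \<cdot> t) \<otimes> l \<otimes> \<iota> t) \<odot> (\<iota> s \<otimes> l \<otimes> \<iota> (t \<cdot> s \<cdot> t))"
    using T.mult_assoc[THEN whisker_eq_Vc[where p="s \<cdot> s \<cdot> s" and q=I]] by simp
  also have "\<dots> = (ms \<otimes> \<iota> t) \<odot> (\<iota> s \<otimes> ms \<otimes> \<iota> t) \<odot> (\<iota> (s \<cdot> s \<cdot> s) \<otimes> mt) \<odot> (\<iota> (s \<cdot> s \<cdot> s \<cdot> t) \<otimes> mt)
     \<odot> (\<iota> (s \<cdot> s) \<otimes> l \<otimes> \<iota> (t \<cdot> t)) \<odot> (\<iota> s \<otimes> l \<otimes> \<iota> (s \<cdot> t \<cdot> t)) \<odot> (\<iota> (s \<cdot> t \<cdot> s) \<otimes> l \<otimes> \<iota> t)"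
    using slide[of l l s I t] by simp
  also have "\<dots> = (ms \<otimes> \<iota> t) \<odot> (\<iota> s \<otimes> ms \<otimes> \<iota> t) \<odot> (\<iota> (s \<cdot> s \<cdot> s) \<otimes> mt) \<odot> (\<iota> (s \<cdot> s) \<otimes> l \<otimes> \<iota> t)
     \<odot> (\<iota> (s \<cdot> s \<cdot> t \<cdot> s) \<otimes> mt) \<odot> (\<iota> s \<otimes> l \<otimes> \<iota> (s \<cdot> t \<cdot> t)) \<odot> (\<iota> (s \<cdot> t \<cdot> s) \<otimes> l \<otimes> \<iota> t)"
    using slide_Vc[of l mt "s \<cdot> s" I I] by simp
  also have "\<dots> = (ms \<otimes> \<iota> t) \<odot> (\<iota> s \<otimes> ms \<otimes> \<iota> t) \<odot> (\<iota> (s \<cdot> s \<cdot> s) \<otimes> mt) \<odot> (\<iota> (s \<cdot> s) \<otimes> l \<otimes> \<iota> t)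
     \<odot> (\<iota> s \<otimes> l \<otimes> \<iota> (s \<cdot> t)) \<odot> (\<iota> (s \<cdot> t \<cdot> s \<cdot> s) \<otimes> mt) \<odot> (\<iota> (s \<cdot> t \<cdot> s) \<otimes> l \<otimes> \<iota> t)"
    using slide_Vc[of l mt s s I] by simp
  also have "\<dots> = (ms \<otimes> \<iota> t) \<odot> (\<iota> (s \<cdot> s) \<otimes> mt) \<odot> (\<iota> s \<otimes> ms \<otimes> \<iota> (t \<cdot> t)) \<odot> (\<iota> (s \<cdot> s) \<otimes> l \<otimes> \<iota> t)
     \<odot> (\<iota> s \<otimes> l \<otimes> \<iota> (s \<cdot> t)) \<odot> (\<iota> (s \<cdot> t \<cdot> s \<cdot> s) \<otimes> mt) \<odot> (\<iota> (s \<cdot> t \<cdot> s) \<otimes> l \<otimes> \<iota> t)"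
    using slide_Vc[of ms mt s I I, symmetric] by simp
  also have "\<dots> = (ms \<otimes> \<iota> t) \<odot> (\<iota> (s \<cdot> s) \<otimes> mt) \<odot> (\<iota> s \<otimes> l \<otimes> \<iota> t) \<odot> (\<iota> (s \<cdot> t) \<otimes> ms \<otimes> \<iota> t)
     \<odot> (\<iota> (s \<cdot> t \<cdot> s \<cdot> s) \<otimes> mt) \<odot> (\<iota> (s \<cdot> t \<cdot> s) \<otimes> l \<otimes> \<iota> t)"
    using law_mult_s[symmetric, THEN whisker_eq_Vc[where p=s and q=t]] by simp
  also have "\<dots> = mu_st \<odot> (\<iota> (s \<cdot> t) \<otimes> mu_st)" unfolding mu_st_def by simp
  finally show ?thesis .
qed

lemma law_unit_t_idem: "l \<odot> (ht \<otimes> \<iota> s) = idem \<odot> (\<iota> s \<otimes> ht)" using law_unit_t unfolding idem_def by simp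
lemma law_unit_s_idem': "l \<odot> (\<iota> t \<otimes> hs) = idem' \<odot> (hs \<otimes> \<iota> t)" using law_unit_s unfolding idem'_def by simp
lemma idem'_idem: "idem' \<odot> idem' = idem'" using idem_idem idem_eq_idem' by simp
lemma mu_st_units_middle: "mu_st \<odot> (\<iota> s \<otimes> ht \<otimes> \<iota> (s \<cdot> t)) \<odot> (\<iota> s \<otimes> hs \<otimes> \<iota> t) = idem"
proof -
  have "mu_st \<odot> (\<iota> s \<otimes> ht \<otimes> \<iota> (s \<cdot> t)) \<odot> (\<iota> s \<otimes> hs \<otimes> \<iota> t) = (ms \<otimes> \<iota> t) \<odot> (\<iota> (s \<cdot> s) \<otimes> mt) \<odot> (\<iota> s \<otimes> idem \<otimes> \<iota> t) \<odot> (\<iota> (s \<cdot> s) \<otimes> ht \<otimes> \<iota> t) \<odot> (\<iota> s \<otimes> hs \<otimes> \<iota> t)"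
    unfolding mu_st_def using law_unit_t_idem[THEN whisker_eq_Vc[where p=s and q=t]] by simp
  also have "\<dots> = idem \<odot> (ms \<otimes> \<iota> t) \<odot> (\<iota> (s \<cdot> s) \<otimes> mt) \<odot> (\<iota> (s \<cdot> s) \<otimes> ht \<otimes> \<iota> t) \<odot> (\<iota> s \<otimes> hs \<otimes> \<iota> t)"
    using idem_mult_t[symmetric, THEN whisker_eq_Vc[where p=s and q=I]] idem_mult_s[symmetric, THEN eq_Vc] by simp
  also have "\<dots> = idem"
    using whisker_Vc_Id2_Vc[OF T.monad_simps(9), of "s \<cdot> s" I] whisker_Vc_Id2[OF S.monad_simps(8), of I t] by simp
  finally show ?thesis .
qed
lemma mu_st_idem_right: "mu_st \<odot> (\<iota> (s \<cdot> t) \<otimes> idem) = mu_st" using mu_st_idem'_right idem_eq_idem' by simp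
lemma mu_st_assoc_idem: "mu_st \<odot> (mu_st \<otimes> idem) = mu_st \<odot> (idem \<otimes> mu_st)"
proof -
  have "mu_st \<odot> (mu_st \<otimes> idem) = mu_st \<odot> (\<iota> (s \<cdot> t) \<otimes> idem) \<odot> (mu_st \<otimes> \<iota> (s \<cdot> t))" using Hc2_split'[of mu_st idem] by simp
  also have "\<dots> = mu_st \<odot> (mu_st \<otimes> \<iota> (s \<cdot> t))" using mu_st_idem_right[THEN eq_Vc] by simp
  also have "\<dots> = mu_st \<odot> (\<iota> (s \<cdot> t) \<otimes> mu_st)" by (rule mu_st_assoc)
  also have "\<dots> = mu_st \<odot> (idem \<otimes> \<iota> (s \<cdot> t)) \<odot> (\<iota> (s \<cdot> t) \<otimes> mu_st)" using mu_st_idem_left[THEN eq_Vc] by simp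
  also have "\<dots> = mu_st \<odot> (idem \<otimes> mu_st)" using Hc2_split[of idem mu_st] by simp
  finally show ?thesis .
qed
lemma mu_st_idem_eta: "mu_st \<odot> (idem \<otimes> eta_st) = idem"
  using Hc2_split[of idem eta_st] mu_st_idem_left[THEN eq_Vc] mu_st_eta_right by simp
lemma mu_st_eta_idem: "mu_st \<odot> (eta_st \<otimes> idem) = idem"
  using Hc2_split'[of eta_st idem] mu_st_idem_right[THEN eq_Vc] mu_st_eta_left by simp
end

text \<open>
  For laws a : ts -> st, b : us -> su and c : ut -> tu satisfying Yang-Baxter, the composite
  lam : u(st) -> (st)u is again a weak distributive law (lam_mult_u, lam_mult_st, lam_unit_u,
  lam_unit_st); this is what C1 does to 0-cells.
\<close>

locale twocat_wdl_triple = endo_twocat +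
  fixes s ms hs t mt ht u mu hu a b c
  assumes Wa: "is_wdl t mt ht s ms hs a" and Wb: "is_wdl u mu hu s ms hs b" and Wc: "is_wdl u mu hu t mt ht c"
  and yb: "(a \<otimes> \<iota> u) \<odot> (\<iota> t \<otimes> b) \<odot> (c \<otimes> \<iota> s) = (\<iota> s \<otimes> c) \<odot> (b \<otimes> \<iota> t) \<odot> (\<iota> u \<otimes> a)"
begin
sublocale WA: twocat_wdl K A t mt ht s ms hs a by unfold_locales (rule Wa)
sublocale WB: twocat_wdl K A u mu hu s ms hs b by unfold_locales (rule Wb)
sublocale WC: twocat_wdl K A u mu hu t mt ht c by unfold_locales (rule Wc)

abbreviation "idem_st \<equiv> WA.idem"

definition "proj_s = (ms \<otimes> \<iota> (t \<cdot> u)) \<odot> (\<iota> s \<otimes> a \<otimes> \<iota> u) \<odot> (\<iota> (s \<cdot> t) \<otimes> b) \<odot> (\<iota> (s \<cdot> t \<cdot> u) \<otimes> hs)"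
definition "proj_u = (\<iota> (s \<cdot> t) \<otimes> mu) \<odot> (\<iota> s \<otimes> c \<otimes> \<iota> u) \<odot> (b \<otimes> \<iota> (t \<cdot> u)) \<odot> (hu \<otimes> \<iota> (s \<cdot> t \<cdot> u))"
lemma proj_s_typing[simp]: "cell proj_s" "Dom K proj_s = s \<cdot> t \<cdot> u" "Cod K proj_s = s \<cdot> t \<cdot> u" unfolding proj_s_def by simp_all
lemma proj_u_typing[simp]: "cell proj_u" "Dom K proj_u = s \<cdot> t \<cdot> u" "Cod K proj_u = s \<cdot> t \<cdot> u" unfolding proj_u_def by simp_all

lemma lam_raw_idem_st: "(\<iota> s \<otimes> c) \<odot> (b \<otimes> \<iota> t) \<odot> (\<iota> u \<otimes> idem_st) = proj_s \<odot> (\<iota> s \<otimes> c) \<odot> (b \<otimes> \<iota> t)"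
proof -
  have "(\<iota> s \<otimes> c) \<odot> (b \<otimes> \<iota> t) \<odot> (\<iota> u \<otimes> idem_st) = (\<iota> s \<otimes> c) \<odot> (b \<otimes> \<iota> t) \<odot> (\<iota> u \<otimes> ms \<otimes> \<iota> t) \<odot> (\<iota> (u \<cdot> s) \<otimes> a) \<odot> (\<iota> (u \<cdot> s \<cdot> t) \<otimes> hs)"
    unfolding WA.idem_def by simp
  also have "\<dots> = (\<iota> s \<otimes> c) \<odot> (ms \<otimes> \<iota> (u \<cdot> t)) \<odot> (\<iota> s \<otimes> b \<otimes> \<iota> t) \<odot> (b \<otimes> \<iota> (s \<cdot> t)) \<odot> (\<iota> (u \<cdot> s) \<otimes> a) \<odot> (\<iota> (u \<cdot> s \<cdot> t) \<otimes> hs)"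
    using WB.law_mult_s[THEN whisker_eq_Vc[where p=I and q=t]] by simp
  also have "\<dots> = (ms \<otimes> \<iota> (t \<cdot> u)) \<odot> (\<iota> (s \<cdot> s) \<otimes> c) \<odot> (\<iota> s \<otimes> b \<otimes> \<iota> t) \<odot> (\<iota> (s \<cdot> u) \<otimes> a) \<odot> (b \<otimes> \<iota> (t \<cdot> s)) \<odot> (\<iota> (u \<cdot> s \<cdot> t) \<otimes> hs)"
    using slide_Vc[of ms c I I I] slide_Vc[of b a I I I, symmetric] by simp
  also have "\<dots> = (ms \<otimes> \<iota> (t \<cdot> u)) \<odot> (\<iota> s \<otimes> a \<otimes> \<iota> u) \<odot> (\<iota> (s \<cdot> t) \<otimes> b) \<odot> (\<iota> s \<otimes> c \<otimes> \<iota> s) \<odot> (b \<otimes> \<iota> (t \<cdot> s)) \<odot> (\<iota> (u \<cdot> s \<cdot> t) \<otimes> hs)"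
    using yb[symmetric, THEN whisker_eq_Vc[where p=s and q=I]] by simp
  also have "\<dots> = (ms \<otimes> \<iota> (t \<cdot> u)) \<odot> (\<iota> s \<otimes> a \<otimes> \<iota> u) \<odot> (\<iota> (s \<cdot> t) \<otimes> b) \<odot> (\<iota> (s \<cdot> t \<cdot> u) \<otimes> hs) \<odot> (\<iota> s \<otimes> c) \<odot> (b \<otimes> \<iota> t)"
    using slide[of b hs I t I, symmetric] slide_Vc[of c hs s I I, symmetric] by simp
  also have "\<dots> = proj_s \<odot> (\<iota> s \<otimes> c) \<odot> (b \<otimes> \<iota> t)" unfolding proj_s_def by simp
  finally show ?thesis .
qed

lemma idem_st_proj_s: "(idem_st \<otimes> \<iota> u) \<odot> proj_s = proj_s"
proof -
  have "(idem_st \<otimes> \<iota> u) \<odot> proj_s = (ms \<otimes> \<iota> (t \<cdot> u)) \<odot> (\<iota> s \<otimes> idem_st \<otimes> \<iota> u) \<odot> (\<iota> s \<otimes> a \<otimes> \<iota> u) \<odot> (\<iota> (s \<cdot> t) \<otimes> b) \<odot> (\<iota> (s \<cdot> t \<cdot> u) \<otimes> hs)"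
    unfolding proj_s_def using WA.idem_mult_s[THEN whisker_eq_Vc[where p=I and q=u]] by simp
  also have "\<dots> = proj_s" unfolding proj_s_def using WA.idem_law[THEN whisker_eq_Vc[where p=s and q=u]] by simp
  finally show ?thesis .
qed

lemma idem_st_lam_raw: "(idem_st \<otimes> \<iota> u) \<odot> (\<iota> s \<otimes> c) \<odot> (b \<otimes> \<iota> t) \<odot> (\<iota> u \<otimes> idem_st) = (\<iota> s \<otimes> c) \<odot> (b \<otimes> \<iota> t) \<odot> (\<iota> u \<otimes> idem_st)"
  using lam_raw_idem_st idem_st_proj_s[THEN eq_Vc] by simp

definition "lam = (\<iota> s \<otimes> c) \<odot> (b \<otimes> \<iota> t) \<odot> (\<iota> u \<otimes> idem_st)"
lemma lam_typing[simp]: "cell lam" "Dom K lam = u \<cdot> s \<cdot> t" "Cod K lam = s \<cdot> t \<cdot> u" unfolding lam_def by simp_all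

lemma idem_st_lam: "(idem_st \<otimes> \<iota> u) \<odot> lam = lam" unfolding lam_def using idem_st_lam_raw by simp
lemma lam_idem_st: "lam \<odot> (\<iota> u \<otimes> idem_st) = lam" unfolding lam_def using WA.idem_idem[THEN whisker_eq[where p=u and q=I]] by simp

lemma lam_mult_u: "lam \<odot> (mu \<otimes> idem_st) = (idem_st \<otimes> mu) \<odot> (lam \<otimes> \<iota> u) \<odot> (\<iota> u \<otimes> lam)"
proof -
  have "lam \<odot> (mu \<otimes> idem_st) = (\<iota> s \<otimes> c) \<odot> (b \<otimes> \<iota> t) \<odot> (\<iota> u \<otimes> idem_st) \<odot> (mu \<otimes> \<iota> (s \<cdot> t)) \<odot> (\<iota> (u \<cdot> u) \<otimes> idem_st)"
    unfolding lam_def using Hc2_split[of mu idem_st] by simp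
  also have "\<dots> = (\<iota> s \<otimes> c) \<odot> (b \<otimes> \<iota> t) \<odot> (mu \<otimes> \<iota> (s \<cdot> t)) \<odot> (\<iota> (u \<cdot> u) \<otimes> idem_st)"
    using slide_Vc[of mu idem_st I I I] WA.idem_idem[THEN whisker_eq[where p="u \<cdot> u" and q=I]] by simp
  also have "\<dots> = (\<iota> s \<otimes> c) \<odot> (\<iota> s \<otimes> mu \<otimes> \<iota> t) \<odot> (b \<otimes> \<iota> (u \<cdot> t)) \<odot> (\<iota> u \<otimes> b \<otimes> \<iota> t) \<odot> (\<iota> (u \<cdot> u) \<otimes> idem_st)"
    using WB.law_mult_t[THEN whisker_eq_Vc[where p=I and q=t]] by simp
  also have "\<dots> = (\<iota> (s \<cdot> t) \<otimes> mu) \<odot> (\<iota> s \<otimes> c \<otimes> \<iota> u) \<odot> (\<iota> (s \<cdot> u) \<otimes> c) \<odot> (b \<otimes> \<iota> (u \<cdot> t)) \<odot> (\<iota> u \<otimes> b \<otimes> \<iota> t) \<odot> (\<iota> (u \<cdot> u) \<otimes> idem_st)"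
    using WC.law_mult_t[THEN whisker_eq_Vc[where p=s and q=I]] by simp
  also have "\<dots> = (\<iota> (s \<cdot> t) \<otimes> mu) \<odot> (\<iota> s \<otimes> c \<otimes> \<iota> u) \<odot> (b \<otimes> \<iota> (t \<cdot> u)) \<odot> (\<iota> (u \<cdot> s) \<otimes> c) \<odot> (\<iota> u \<otimes> b \<otimes> \<iota> t) \<odot> (\<iota> (u \<cdot> u) \<otimes> idem_st)"
    using slide_Vc[of b c I I I] by simp
  finally have L: "lam \<odot> (mu \<otimes> idem_st) = (\<iota> (s \<cdot> t) \<otimes> mu) \<odot> (\<iota> s \<otimes> c \<otimes> \<iota> u) \<odot> (b \<otimes> \<iota> (t \<cdot> u)) \<odot> (\<iota> (u \<cdot> s) \<otimes> c) \<odot> (\<iota> u \<otimes> b \<otimes> \<iota> t) \<odot> (\<iota> (u \<cdot> u) \<otimes> idem_st)" .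
  have "(idem_st \<otimes> mu) \<odot> (lam \<otimes> \<iota> u) \<odot> (\<iota> u \<otimes> lam) = (\<iota> (s \<cdot> t) \<otimes> mu) \<odot> (idem_st \<otimes> \<iota> (u \<cdot> u)) \<odot> (\<iota> s \<otimes> c \<otimes> \<iota> u) \<odot> (b \<otimes> \<iota> (t \<cdot> u)) \<odot> (\<iota> u \<otimes> idem_st \<otimes> \<iota> u)
     \<odot> (\<iota> (u \<cdot> s) \<otimes> c) \<odot> (\<iota> u \<otimes> b \<otimes> \<iota> t) \<odot> (\<iota> (u \<cdot> u) \<otimes> idem_st)"
    unfolding lam_def using Hc2_split'[of idem_st mu] by simp
  also have "\<dots> = (\<iota> (s \<cdot> t) \<otimes> mu) \<odot> (\<iota> s \<otimes> c \<otimes> \<iota> u) \<odot> (b \<otimes> \<iota> (t \<cdot> u)) \<odot> (\<iota> u \<otimes> idem_st \<otimes> \<iota> u)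
     \<odot> (\<iota> (u \<cdot> s) \<otimes> c) \<odot> (\<iota> u \<otimes> b \<otimes> \<iota> t) \<odot> (\<iota> (u \<cdot> u) \<otimes> idem_st)"
    using idem_st_lam_raw[THEN whisker_eq_Vc[where p=I and q=u]] by simp
  also have "\<dots> = (\<iota> (s \<cdot> t) \<otimes> mu) \<odot> (\<iota> s \<otimes> c \<otimes> \<iota> u) \<odot> (b \<otimes> \<iota> (t \<cdot> u)) 
     \<odot> (\<iota> (u \<cdot> s) \<otimes> c) \<odot> (\<iota> u \<otimes> b \<otimes> \<iota> t) \<odot> (\<iota> (u \<cdot> u) \<otimes> idem_st)"
    using idem_st_lam_raw[THEN whisker_eq[where p=u and q=I]] by simp
  finally show ?thesis using L by simp
qed

lemma lam_raw_mult_st: "(\<iota> s \<otimes> c) \<odot> (b \<otimes> \<iota> t) \<odot> (\<iota> u \<otimes> WA.mu_st) = (WA.mu_st \<otimes> \<iota> u) \<odot> (\<iota> (s \<cdot> t \<cdot> s) \<otimes> c) \<odot> (\<iota> (s \<cdot> t) \<otimes> b \<otimes> \<iota> t)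
   \<odot> (\<iota> s \<otimes> c \<otimes> \<iota> (s \<cdot> t)) \<odot> (b \<otimes> \<iota> (t \<cdot> s \<cdot> t))"
proof -
  have "(\<iota> s \<otimes> c) \<odot> (b \<otimes> \<iota> t) \<odot> (\<iota> u \<otimes> WA.mu_st) = (\<iota> s \<otimes> c) \<odot> (b \<otimes> \<iota> t) \<odot> (\<iota> u \<otimes> ms \<otimes> \<iota> t) \<odot> (\<iota> (u \<cdot> s \<cdot> s) \<otimes> mt) \<odot> (\<iota> (u \<cdot> s) \<otimes> a \<otimes> \<iota> t)"
    unfolding WA.mu_st_def by simp
  also have "\<dots> = (\<iota> s \<otimes> c) \<odot> (ms \<otimes> \<iota> (u \<cdot> t)) \<odot> (\<iota> s \<otimes> b \<otimes> \<iota> t) \<odot> (b \<otimes> \<iota> (s \<cdot> t)) \<odot> (\<iota> (u \<cdot> s \<cdot> s) \<otimes> mt) \<odot> (\<iota> (u \<cdot> s) \<otimes> a \<otimes> \<iota> t)"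
    using WB.law_mult_s[THEN whisker_eq_Vc[where p=I and q=t]] by simp
  also have "\<dots> = (ms \<otimes> \<iota> (t \<cdot> u)) \<odot> (\<iota> (s \<cdot> s) \<otimes> c) \<odot> (\<iota> (s \<cdot> s \<cdot> u) \<otimes> mt) \<odot> (\<iota> s \<otimes> b \<otimes> \<iota> (t \<cdot> t)) \<odot> (b \<otimes> \<iota> (s \<cdot> t \<cdot> t)) \<odot> (\<iota> (u \<cdot> s) \<otimes> a \<otimes> \<iota> t)"
    using slide_Vc[of ms c I I I] slide_Vc[of b mt I s I, symmetric] slide_Vc[of b mt s I I, symmetric] by simp
  also have "\<dots> = (ms \<otimes> \<iota> (t \<cdot> u)) \<odot> (\<iota> (s \<cdot> s) \<otimes> mt \<otimes> \<iota> u) \<odot> (\<iota> (s \<cdot> s \<cdot> t) \<otimes> c) \<odot> (\<iota> (s \<cdot> s) \<otimes> c \<otimes> \<iota> t) \<odot> (\<iota> s \<otimes> b \<otimes> \<iota> (t \<cdot> t)) \<odot> (b \<otimes> \<iota> (s \<cdot> t \<cdot> t)) \<odot> (\<iota> (u \<cdot> s) \<otimes> a \<otimes> \<iota> t)"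
    using WC.law_mult_s[THEN whisker_eq_Vc[where p="s \<cdot> s" and q=I]] by simp
  also have "\<dots> = (ms \<otimes> \<iota> (t \<cdot> u)) \<odot> (\<iota> (s \<cdot> s) \<otimes> mt \<otimes> \<iota> u) \<odot> (\<iota> (s \<cdot> s \<cdot> t) \<otimes> c) \<odot> (\<iota> (s \<cdot> s) \<otimes> c \<otimes> \<iota> t) \<odot> (\<iota> s \<otimes> b \<otimes> \<iota> (t \<cdot> t)) \<odot> (\<iota> (s \<cdot> u) \<otimes> a \<otimes> \<iota> t) \<odot> (b \<otimes> \<iota> (t \<cdot> s \<cdot> t))"
    using slide[of b a I I t, symmetric] by simp
  also have "\<dots> = (ms \<otimes> \<iota> (t \<cdot> u)) \<odot> (\<iota> (s \<cdot> s) \<otimes> mt \<otimes> \<iota> u) \<odot> (\<iota> (s \<cdot> s \<cdot> t) \<otimes> c) \<odot> (\<iota> s \<otimes> a \<otimes> \<iota> (u \<cdot> t)) \<odot> (\<iota> (s \<cdot> t) \<otimes> b \<otimes> \<iota> t) \<odot> (\<iota> s \<otimes> c \<otimes> \<iota> (s \<cdot> t)) \<odot> (b \<otimes> \<iota> (t \<cdot> s \<cdot> t))"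
    using yb[symmetric, THEN whisker_eq_Vc[where p=s and q=t]] by simp
  also have "\<dots> = (ms \<otimes> \<iota> (t \<cdot> u)) \<odot> (\<iota> (s \<cdot> s) \<otimes> mt \<otimes> \<iota> u) \<odot> (\<iota> s \<otimes> a \<otimes> \<iota> (t \<cdot> u)) \<odot> (\<iota> (s \<cdot> t \<cdot> s) \<otimes> c) \<odot> (\<iota> (s \<cdot> t) \<otimes> b \<otimes> \<iota> t) \<odot> (\<iota> s \<otimes> c \<otimes> \<iota> (s \<cdot> t)) \<odot> (b \<otimes> \<iota> (t \<cdot> s \<cdot> t))"
    using slide_Vc[of a c s I I] by simp
  also have "\<dots> = (WA.mu_st \<otimes> \<iota> u) \<odot> (\<iota> (s \<cdot> t \<cdot> s) \<otimes> c) \<odot> (\<iota> (s \<cdot> t) \<otimes> b \<otimes> \<iota> t) \<odot> (\<iota> s \<otimes> c \<otimes> \<iota> (s \<cdot> t)) \<odot> (b \<otimes> \<iota> (t \<cdot> s \<cdot> t))"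
    unfolding WA.mu_st_def by simp
  finally show ?thesis .
qed

lemma lam_mult_st: "lam \<odot> (\<iota> u \<otimes> WA.mu_st) = (WA.mu_st \<otimes> \<iota> u) \<odot> (idem_st \<otimes> lam) \<odot> (lam \<otimes> idem_st)"
proof -
  have "lam \<odot> (\<iota> u \<otimes> WA.mu_st) = (\<iota> s \<otimes> c) \<odot> (b \<otimes> \<iota> t) \<odot> (\<iota> u \<otimes> WA.mu_st)"
    unfolding lam_def using WA.idem_mu_st[THEN whisker_eq[where p=u and q=I]] by simp
  also have "\<dots> = (\<iota> s \<otimes> c) \<odot> (b \<otimes> \<iota> t) \<odot> (\<iota> u \<otimes> WA.mu_st) \<odot> (\<iota> u \<otimes> idem_st \<otimes> \<iota> (s \<cdot> t)) \<odot> (\<iota> (u \<cdot> s \<cdot> t) \<otimes> idem_st)"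
    using WA.mu_st_idem_idem[symmetric, THEN whisker_eq[where p=u and q=I]] Hc2_split[of idem_st idem_st] by simp
  also have "\<dots> = (WA.mu_st \<otimes> \<iota> u) \<odot> (\<iota> (s \<cdot> t \<cdot> s) \<otimes> c) \<odot> (\<iota> (s \<cdot> t) \<otimes> b \<otimes> \<iota> t)
   \<odot> (\<iota> s \<otimes> c \<otimes> \<iota> (s \<cdot> t)) \<odot> (b \<otimes> \<iota> (t \<cdot> s \<cdot> t)) \<odot> (\<iota> u \<otimes> idem_st \<otimes> \<iota> (s \<cdot> t)) \<odot> (\<iota> (u \<cdot> s \<cdot> t) \<otimes> idem_st)"
    using lam_raw_mult_st[THEN eq_Vc] by simp
  finally have L: "lam \<odot> (\<iota> u \<otimes> WA.mu_st) = (WA.mu_st \<otimes> \<iota> u) \<odot> (\<iota> (s \<cdot> t \<cdot> s) \<otimes> c) \<odot> (\<iota> (s \<cdot> t) \<otimes> b \<otimes> \<iota> t)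
   \<odot> (\<iota> s \<otimes> c \<otimes> \<iota> (s \<cdot> t)) \<odot> (b \<otimes> \<iota> (t \<cdot> s \<cdot> t)) \<odot> (\<iota> u \<otimes> idem_st \<otimes> \<iota> (s \<cdot> t)) \<odot> (\<iota> (u \<cdot> s \<cdot> t) \<otimes> idem_st)" .
  have "(WA.mu_st \<otimes> \<iota> u) \<odot> (idem_st \<otimes> lam) \<odot> (lam \<otimes> idem_st) = (WA.mu_st \<otimes> \<iota> u) \<odot> (idem_st \<otimes> \<iota> (s \<cdot> t \<cdot> u)) \<odot> (\<iota> (s \<cdot> t) \<otimes> lam) \<odot> (lam \<otimes> \<iota> (s \<cdot> t)) \<odot> (\<iota> (u \<cdot> s \<cdot> t) \<otimes> idem_st)"
    using Hc2_split[of idem_st lam] Hc2_split[of lam idem_st] by simp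
  also have "\<dots> = (WA.mu_st \<otimes> \<iota> u) \<odot> (\<iota> (s \<cdot> t) \<otimes> lam) \<odot> (lam \<otimes> \<iota> (s \<cdot> t)) \<odot> (\<iota> (u \<cdot> s \<cdot> t) \<otimes> idem_st)"
    using WA.mu_st_idem_left[THEN whisker_eq_Vc[where p=I and q=u]] by simp
  also have "\<dots> = (WA.mu_st \<otimes> \<iota> u) \<odot> (\<iota> (s \<cdot> t \<cdot> s) \<otimes> c) \<odot> (\<iota> (s \<cdot> t) \<otimes> b \<otimes> \<iota> t) \<odot> (\<iota> (s \<cdot> t \<cdot> u) \<otimes> idem_st)
      \<odot> (\<iota> s \<otimes> c \<otimes> \<iota> (s \<cdot> t)) \<odot> (b \<otimes> \<iota> (t \<cdot> s \<cdot> t)) \<odot> (\<iota> u \<otimes> idem_st \<otimes> \<iota> (s \<cdot> t)) \<odot> (\<iota> (u \<cdot> s \<cdot> t) \<otimes> idem_st)"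
    unfolding lam_def by simp
  also have "\<dots> = (WA.mu_st \<otimes> \<iota> u) \<odot> (\<iota> (s \<cdot> t \<cdot> s) \<otimes> c) \<odot> (\<iota> (s \<cdot> t) \<otimes> b \<otimes> \<iota> t)
      \<odot> (\<iota> s \<otimes> c \<otimes> \<iota> (s \<cdot> t)) \<odot> (b \<otimes> \<iota> (t \<cdot> s \<cdot> t)) \<odot> (\<iota> u \<otimes> idem_st \<otimes> \<iota> (s \<cdot> t)) \<odot> (\<iota> (u \<cdot> s \<cdot> t) \<otimes> idem_st) \<odot> (\<iota> (u \<cdot> s \<cdot> t) \<otimes> idem_st)"
    using slide_Vc[of c idem_st s I I] slide_Vc[of b idem_st I t I] slide_Vc[of idem_st idem_st u I I] by simp
  also have "\<dots> = (WA.mu_st \<otimes> \<iota> u) \<odot> (\<iota> (s \<cdot> t \<cdot> s) \<otimes> c) \<odot> (\<iota> (s \<cdot> t) \<otimes> b \<otimes> \<iota> t)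
      \<odot> (\<iota> s \<otimes> c \<otimes> \<iota> (s \<cdot> t)) \<odot> (b \<otimes> \<iota> (t \<cdot> s \<cdot> t)) \<odot> (\<iota> u \<otimes> idem_st \<otimes> \<iota> (s \<cdot> t)) \<odot> (\<iota> (u \<cdot> s \<cdot> t) \<otimes> idem_st)"
    using WA.idem_idem[THEN whisker_eq[where p="u \<cdot> s \<cdot> t" and q=I]] by simp
  finally show ?thesis using L by simp
qed

lemma yb_idem'_c: "(a \<otimes> \<iota> u) \<odot> (\<iota> t \<otimes> b) \<odot> (WC.idem' \<otimes> \<iota> s) = proj_u \<odot> (a \<otimes> \<iota> u) \<odot> (\<iota> t \<otimes> b)"
proof -
  have "(a \<otimes> \<iota> u) \<odot> (\<iota> t \<otimes> b) \<odot> (WC.idem' \<otimes> \<iota> s) = (a \<otimes> \<iota> u) \<odot> (\<iota> t \<otimes> b) \<odot> (\<iota> t \<otimes> mu \<otimes> \<iota> s) \<odot> (c \<otimes> \<iota> (u \<cdot> s)) \<odot> (hu \<otimes> \<iota> (t \<cdot> u \<cdot> s))"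
    unfolding WC.idem'_def by simp
  also have "\<dots> = (a \<otimes> \<iota> u) \<odot> (\<iota> (t \<cdot> s) \<otimes> mu) \<odot> (\<iota> t \<otimes> b \<otimes> \<iota> u) \<odot> (\<iota> (t \<cdot> u) \<otimes> b) \<odot> (c \<otimes> \<iota> (u \<cdot> s)) \<odot> (hu \<otimes> \<iota> (t \<cdot> u \<cdot> s))"
    using WB.law_mult_t[THEN whisker_eq_Vc[where p=t and q=I]] by simp
  also have "\<dots> = (\<iota> (s \<cdot> t) \<otimes> mu) \<odot> (a \<otimes> \<iota> (u \<cdot> u)) \<odot> (\<iota> t \<otimes> b \<otimes> \<iota> u) \<odot> (c \<otimes> \<iota> (s \<cdot> u)) \<odot> (\<iota> (u \<cdot> t) \<otimes> b) \<odot> (hu \<otimes> \<iota> (t \<cdot> u \<cdot> s))"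
    using slide_Vc[of a mu I I I, symmetric] slide_Vc[of c b I I I] by simp
  also have "\<dots> = (\<iota> (s \<cdot> t) \<otimes> mu) \<odot> (\<iota> s \<otimes> c \<otimes> \<iota> u) \<odot> (b \<otimes> \<iota> (t \<cdot> u)) \<odot> (\<iota> u \<otimes> a \<otimes> \<iota> u) \<odot> (\<iota> (u \<cdot> t) \<otimes> b) \<odot> (hu \<otimes> \<iota> (t \<cdot> u \<cdot> s))"
    using yb[THEN whisker_eq_Vc[where p=I and q=u]] by simp
  also have "\<dots> = proj_u \<odot> (a \<otimes> \<iota> u) \<odot> (\<iota> t \<otimes> b)"
    unfolding proj_u_def using slide[of hu b I t I] slide_Vc[of hu a I I u] by simp
  finally show ?thesis .
qed

lemma proj_u_alt: "proj_u = (\<iota> (s \<cdot> t) \<otimes> mu) \<odot> (\<iota> s \<otimes> c \<otimes> \<iota> u) \<odot> (WB.idem \<otimes> \<iota> (t \<cdot> u)) \<odot> (\<iota> s \<otimes> hu \<otimes> \<iota> (t \<cdot> u))"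
  unfolding proj_u_def using WB.law_unit_t_idem[THEN whisker_eq[where p=I and q="t \<cdot> u"]] by simp

lemma mult_s_proj_u: "(ms \<otimes> \<iota> (t \<cdot> u)) \<odot> (\<iota> s \<otimes> proj_u) = proj_u \<odot> (ms \<otimes> \<iota> (t \<cdot> u))"
proof -
  have "(ms \<otimes> \<iota> (t \<cdot> u)) \<odot> (\<iota> s \<otimes> proj_u) = (ms \<otimes> \<iota> (t \<cdot> u)) \<odot> (\<iota> (s \<cdot> s \<cdot> t) \<otimes> mu) \<odot> (\<iota> (s \<cdot> s) \<otimes> c \<otimes> \<iota> u) \<odot> (\<iota> s \<otimes> WB.idem \<otimes> \<iota> (t \<cdot> u)) \<odot> (\<iota> (s \<cdot> s) \<otimes> hu \<otimes> \<iota> (t \<cdot> u))"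
    unfolding proj_u_alt by simp
  also have "\<dots> = (\<iota> (s \<cdot> t) \<otimes> mu) \<odot> (\<iota> s \<otimes> c \<otimes> \<iota> u) \<odot> (ms \<otimes> \<iota> (u \<cdot> t \<cdot> u)) \<odot> (\<iota> s \<otimes> WB.idem \<otimes> \<iota> (t \<cdot> u)) \<odot> (\<iota> (s \<cdot> s) \<otimes> hu \<otimes> \<iota> (t \<cdot> u))"
    using slide_Vc[of ms mu I t I, symmetric] slide_Vc[of ms c I I u, symmetric] by simp
  also have "\<dots> = (\<iota> (s \<cdot> t) \<otimes> mu) \<odot> (\<iota> s \<otimes> c \<otimes> \<iota> u) \<odot> (WB.idem \<otimes> \<iota> (t \<cdot> u)) \<odot> (ms \<otimes> \<iota> (u \<cdot> t \<cdot> u)) \<odot> (\<iota> (s \<cdot> s) \<otimes> hu \<otimes> \<iota> (t \<cdot> u))"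
    using WB.idem_mult_s[symmetric, THEN whisker_eq_Vc[where p=I and q="t \<cdot> u"]] by simp
  also have "\<dots> = proj_u \<odot> (ms \<otimes> \<iota> (t \<cdot> u))"
    unfolding proj_u_alt using slide[of ms hu I I "t \<cdot> u", symmetric] by simp
  finally show ?thesis .
qed

lemma mult_u_unit_s: "(\<iota> s \<otimes> mu) \<odot> (b \<otimes> \<iota> u) \<odot> (\<iota> u \<otimes> hs \<otimes> \<iota> u) = WB.idem' \<odot> (hs \<otimes> \<iota> u) \<odot> mu"
proof -
  have "(\<iota> s \<otimes> mu) \<odot> (b \<otimes> \<iota> u) \<odot> (\<iota> u \<otimes> hs \<otimes> \<iota> u) = (\<iota> s \<otimes> mu) \<odot> (WB.idem' \<otimes> \<iota> u) \<odot> (hs \<otimes> \<iota> (u \<cdot> u))"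
    using WB.law_unit_s_idem'[THEN whisker_eq[where p=I and q=u]] by simp
  also have "\<dots> = WB.idem' \<odot> (\<iota> s \<otimes> mu) \<odot> (hs \<otimes> \<iota> (u \<cdot> u))"
    using WB.idem'_mult_t[symmetric, THEN eq_Vc] by simp
  also have "\<dots> = WB.idem' \<odot> (hs \<otimes> \<iota> u) \<odot> mu"
    using slide[of hs mu I I I] by simp
  finally show ?thesis .
qed

lemma proj_u_idem_st: "proj_u \<odot> (idem_st \<otimes> \<iota> u) = proj_s \<odot> proj_u"
proof -
  have "proj_u \<odot> (idem_st \<otimes> \<iota> u) = (\<iota> (s \<cdot> t) \<otimes> mu) \<odot> (\<iota> s \<otimes> c \<otimes> \<iota> u) \<odot> (b \<otimes> \<iota> (t \<cdot> u)) \<odot> (hu \<otimes> \<iota> (s \<cdot> t \<cdot> u)) \<odot> (ms \<otimes> \<iota> (t \<cdot> u)) \<odot> (\<iota> s \<otimes> a \<otimes> \<iota> u) \<odot> (\<iota> (s \<cdot> t) \<otimes> hs \<otimes> \<iota> u)"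
    unfolding proj_u_def WA.idem_def by simp
  also have "\<dots> = (\<iota> (s \<cdot> t) \<otimes> mu) \<odot> (\<iota> s \<otimes> c \<otimes> \<iota> u) \<odot> (ms \<otimes> \<iota> (u \<cdot> t \<cdot> u)) \<odot> (\<iota> s \<otimes> b \<otimes> \<iota> (t \<cdot> u)) \<odot> (b \<otimes> \<iota> (s \<cdot> t \<cdot> u)) \<odot> (hu \<otimes> \<iota> (s \<cdot> s \<cdot> t \<cdot> u)) \<odot> (\<iota> s \<otimes> a \<otimes> \<iota> u) \<odot> (\<iota> (s \<cdot> t) \<otimes> hs \<otimes> \<iota> u)"
    using slide_Vc[of hu ms I I "t \<cdot> u", symmetric] WB.law_mult_s[THEN whisker_eq_Vc[where p=I and q="t \<cdot> u"]] by simp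
  also have "\<dots> = (ms \<otimes> \<iota> (t \<cdot> u)) \<odot> (\<iota> (s \<cdot> s \<cdot> t) \<otimes> mu) \<odot> (\<iota> (s \<cdot> s) \<otimes> c \<otimes> \<iota> u) \<odot> (\<iota> s \<otimes> b \<otimes> \<iota> (t \<cdot> u)) \<odot> (b \<otimes> \<iota> (s \<cdot> t \<cdot> u)) \<odot> (\<iota> (u \<cdot> s) \<otimes> a \<otimes> \<iota> u) \<odot> (\<iota> (u \<cdot> s \<cdot> t) \<otimes> hs \<otimes> \<iota> u) \<odot> (hu \<otimes> \<iota> (s \<cdot> t \<cdot> u))"
    using slide_Vc[of ms c I I u] slide_Vc[of ms mu I t I] slide_Vc[of hu a I s u, symmetric] slide[of hu hs I "s \<cdot> t" u, symmetric] by simp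
  also have "\<dots> = (ms \<otimes> \<iota> (t \<cdot> u)) \<odot> (\<iota> (s \<cdot> s \<cdot> t) \<otimes> mu) \<odot> (\<iota> (s \<cdot> s) \<otimes> c \<otimes> \<iota> u) \<odot> (\<iota> s \<otimes> b \<otimes> \<iota> (t \<cdot> u)) \<odot> (\<iota> (s \<cdot> u) \<otimes> a \<otimes> \<iota> u) \<odot> (b \<otimes> \<iota> (t \<cdot> s \<cdot> u)) \<odot> (\<iota> (u \<cdot> s \<cdot> t) \<otimes> hs \<otimes> \<iota> u) \<odot> (hu \<otimes> \<iota> (s \<cdot> t \<cdot> u))"
    using slide_Vc[of b a I I u, symmetric] by simp
  also have "\<dots> = (ms \<otimes> \<iota> (t \<cdot> u)) \<odot> (\<iota> (s \<cdot> s \<cdot> t) \<otimes> mu) \<odot> (\<iota> s \<otimes> a \<otimes> \<iota> (u \<cdot> u)) \<odot> (\<iota> (s \<cdot> t) \<otimes> b \<otimes> \<iota> u) \<odot> (\<iota> s \<otimes> c \<otimes> \<iota> (s \<cdot> u)) \<odot> (b \<otimes> \<iota> (t \<cdot> s \<cdot> u)) \<odot> (\<iota> (u \<cdot> s \<cdot> t) \<otimes> hs \<otimes> \<iota> u) \<odot> (hu \<otimes> \<iota> (s \<cdot> t \<cdot> u))"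
    using yb[symmetric, THEN whisker_eq_Vc[where p=s and q=u]] by simp
  also have "\<dots> = (ms \<otimes> \<iota> (t \<cdot> u)) \<odot> (\<iota> s \<otimes> a \<otimes> \<iota> u) \<odot> (\<iota> (s \<cdot> t \<cdot> s) \<otimes> mu) \<odot> (\<iota> (s \<cdot> t) \<otimes> b \<otimes> \<iota> u) \<odot> (\<iota> (s \<cdot> t \<cdot> u) \<otimes> hs \<otimes> \<iota> u) \<odot> (\<iota> s \<otimes> c \<otimes> \<iota> u) \<odot> (b \<otimes> \<iota> (t \<cdot> u)) \<odot> (hu \<otimes> \<iota> (s \<cdot> t \<cdot> u))"
    using slide_Vc[of a mu s I I] slide_Vc[of b hs I t u, symmetric] slide_Vc[of c hs s I u, symmetric] by simp
  also have "\<dots> = (ms \<otimes> \<iota> (t \<cdot> u)) \<odot> (\<iota> s \<otimes> a \<otimes> \<iota> u) \<odot> (\<iota> (s \<cdot> t) \<otimes> WB.idem') \<odot> (\<iota> (s \<cdot> t) \<otimes> hs \<otimes> \<iota> u) \<odot> (\<iota> (s \<cdot> t) \<otimes> mu) \<odot> (\<iota> s \<otimes> c \<otimes> \<iota> u) \<odot> (b \<otimes> \<iota> (t \<cdot> u)) \<odot> (hu \<otimes> \<iota> (s \<cdot> t \<cdot> u))"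
    using mult_u_unit_s[THEN whisker_eq_Vc[where p="s \<cdot> t" and q=I]] by simp
  also have "\<dots> = proj_s \<odot> proj_u"
    unfolding proj_s_def proj_u_def using WB.law_unit_s_idem'[THEN whisker_eq_Vc[where p="s \<cdot> t" and q=I]] by simp
  finally show ?thesis .
qed

lemma proj_u_proj_s: "proj_u \<odot> proj_s = proj_s \<odot> proj_u"
proof -
  have "proj_u \<odot> proj_s = (\<iota> (s \<cdot> t) \<otimes> mu) \<odot> (\<iota> s \<otimes> c \<otimes> \<iota> u) \<odot> (b \<otimes> \<iota> (t \<cdot> u)) \<odot> (hu \<otimes> \<iota> (s \<cdot> t \<cdot> u)) \<odot> (ms \<otimes> \<iota> (t \<cdot> u)) \<odot> (\<iota> s \<otimes> a \<otimes> \<iota> u) \<odot> (\<iota> (s \<cdot> t) \<otimes> b) \<odot> (\<iota> (s \<cdot> t \<cdot> u) \<otimes> hs)"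
    unfolding proj_u_def proj_s_def by simp
  also have "\<dots> = (\<iota> (s \<cdot> t) \<otimes> mu) \<odot> (\<iota> s \<otimes> c \<otimes> \<iota> u) \<odot> (ms \<otimes> \<iota> (u \<cdot> t \<cdot> u)) \<odot> (\<iota> s \<otimes> b \<otimes> \<iota> (t \<cdot> u)) \<odot> (b \<otimes> \<iota> (s \<cdot> t \<cdot> u)) \<odot> (hu \<otimes> \<iota> (s \<cdot> s \<cdot> t \<cdot> u)) \<odot> (\<iota> s \<otimes> a \<otimes> \<iota> u) \<odot> (\<iota> (s \<cdot> t) \<otimes> b) \<odot> (\<iota> (s \<cdot> t \<cdot> u) \<otimes> hs)"
    using slide_Vc[of hu ms I I "t \<cdot> u", symmetric] WB.law_mult_s[THEN whisker_eq_Vc[where p=I and q="t \<cdot> u"]] by simp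
  also have "\<dots> = (ms \<otimes> \<iota> (t \<cdot> u)) \<odot> (\<iota> (s \<cdot> s \<cdot> t) \<otimes> mu) \<odot> (\<iota> (s \<cdot> s) \<otimes> c \<otimes> \<iota> u) \<odot> (\<iota> s \<otimes> b \<otimes> \<iota> (t \<cdot> u)) \<odot> (b \<otimes> \<iota> (s \<cdot> t \<cdot> u)) \<odot> (\<iota> (u \<cdot> s) \<otimes> a \<otimes> \<iota> u) \<odot> (\<iota> (u \<cdot> s \<cdot> t) \<otimes> b) \<odot> (\<iota> (u \<cdot> s \<cdot> t \<cdot> u) \<otimes> hs) \<odot> (hu \<otimes> \<iota> (s \<cdot> t \<cdot> u))"
    using slide_Vc[of ms c I I u] slide_Vc[of ms mu I t I] slide_Vc[of hu a I s u, symmetric] slide_Vc[of hu b I "s \<cdot> t" I, symmetric]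
      slide[of hu hs I "s \<cdot> t \<cdot> u" I, symmetric] by simp
  also have "\<dots> = (ms \<otimes> \<iota> (t \<cdot> u)) \<odot> (\<iota> (s \<cdot> s \<cdot> t) \<otimes> mu) \<odot> (\<iota> s \<otimes> a \<otimes> \<iota> (u \<cdot> u)) \<odot> (\<iota> (s \<cdot> t) \<otimes> b \<otimes> \<iota> u) \<odot> (\<iota> s \<otimes> c \<otimes> \<iota> (s \<cdot> u)) \<odot> (b \<otimes> \<iota> (t \<cdot> s \<cdot> u)) \<odot> (\<iota> (u \<cdot> s \<cdot> t) \<otimes> b) \<odot> (\<iota> (u \<cdot> s \<cdot> t \<cdot> u) \<otimes> hs) \<odot> (hu \<otimes> \<iota> (s \<cdot> t \<cdot> u))"
    using slide_Vc[of b a I I u, symmetric] yb[symmetric, THEN whisker_eq_Vc[where p=s and q=u]] by simp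
  also have "\<dots> = (ms \<otimes> \<iota> (t \<cdot> u)) \<odot> (\<iota> s \<otimes> a \<otimes> \<iota> u) \<odot> (\<iota> (s \<cdot> t \<cdot> s) \<otimes> mu) \<odot> (\<iota> (s \<cdot> t) \<otimes> b \<otimes> \<iota> u) \<odot> (\<iota> (s \<cdot> t \<cdot> u) \<otimes> b) \<odot> (\<iota> s \<otimes> c \<otimes> \<iota> (u \<cdot> s)) \<odot> (b \<otimes> \<iota> (t \<cdot> u \<cdot> s)) \<odot> (\<iota> (u \<cdot> s \<cdot> t \<cdot> u) \<otimes> hs) \<odot> (hu \<otimes> \<iota> (s \<cdot> t \<cdot> u))"
    using slide_Vc[of a mu s I I] slide_Vc[of b b I t I, symmetric] slide_Vc[of c b s I I, symmetric] by simp
  also have "\<dots> = (ms \<otimes> \<iota> (t \<cdot> u)) \<odot> (\<iota> s \<otimes> a \<otimes> \<iota> u) \<odot> (\<iota> (s \<cdot> t) \<otimes> b) \<odot> (\<iota> (s \<cdot> t) \<otimes> mu \<otimes> \<iota> s) \<odot> (\<iota> s \<otimes> c \<otimes> \<iota> (u \<cdot> s)) \<odot> (b \<otimes> \<iota> (t \<cdot> u \<cdot> s)) \<odot> (\<iota> (u \<cdot> s \<cdot> t \<cdot> u) \<otimes> hs) \<odot> (hu \<otimes> \<iota> (s \<cdot> t \<cdot> u))"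
    using WB.law_mult_t[symmetric, THEN whisker_eq_Vc[where p="s \<cdot> t" and q=I]] by simp
  also have "\<dots> = proj_s \<odot> proj_u"
    unfolding proj_s_def proj_u_def using slide_Vc[of b hs I "t \<cdot> u" I, symmetric] slide_Vc[of c hs s u I, symmetric] slide_Vc[of mu hs "s \<cdot> t" I I, symmetric] by simp
  finally show ?thesis .
qed

lemma proj_u_unit_t: "proj_u \<odot> (\<iota> s \<otimes> ht \<otimes> \<iota> u) = (\<iota> s \<otimes> WC.idem') \<odot> (\<iota> s \<otimes> ht \<otimes> \<iota> u) \<odot> WB.idem'"
proof -
  have "proj_u \<odot> (\<iota> s \<otimes> ht \<otimes> \<iota> u) = (\<iota> (s \<cdot> t) \<otimes> mu) \<odot> (\<iota> s \<otimes> c \<otimes> \<iota> u) \<odot> (\<iota> (s \<cdot> u) \<otimes> ht \<otimes> \<iota> u) \<odot> (b \<otimes> \<iota> u) \<odot> (hu \<otimes> \<iota> (s \<cdot> u))"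
    unfolding proj_u_def using slide[of hu ht I s u, symmetric] slide_Vc[of b ht I I u, symmetric] by simp
  also have "\<dots> = (\<iota> (s \<cdot> t) \<otimes> mu) \<odot> (\<iota> s \<otimes> WC.idem' \<otimes> \<iota> u) \<odot> (\<iota> s \<otimes> ht \<otimes> \<iota> (u \<cdot> u)) \<odot> (b \<otimes> \<iota> u) \<odot> (hu \<otimes> \<iota> (s \<cdot> u))"
    using WC.law_unit_s_idem'[THEN whisker_eq_Vc[where p=s and q=u]] by simp
  also have "\<dots> = (\<iota> s \<otimes> WC.idem') \<odot> (\<iota> s \<otimes> ht \<otimes> \<iota> u) \<odot> (\<iota> s \<otimes> mu) \<odot> (b \<otimes> \<iota> u) \<odot> (hu \<otimes> \<iota> (s \<cdot> u))"
    using WC.idem'_mult_t[symmetric, THEN whisker_eq_Vc[where p=s and q=I]] slide_Vc[of ht mu s I I] by simp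
  also have "\<dots> = (\<iota> s \<otimes> WC.idem') \<odot> (\<iota> s \<otimes> ht \<otimes> \<iota> u) \<odot> WB.idem'" unfolding WB.idem'_def by simp
  finally show ?thesis .
qed

lemma lam_raw_eta_st: "(\<iota> s \<otimes> c) \<odot> (b \<otimes> \<iota> t) \<odot> (\<iota> u \<otimes> WA.eta_st) = proj_u \<odot> (a \<otimes> \<iota> u) \<odot> (\<iota> t \<otimes> b) \<odot> (ht \<otimes> \<iota> (u \<cdot> s)) \<odot> (\<iota> u \<otimes> hs)"
proof -
  have "(\<iota> s \<otimes> c) \<odot> (b \<otimes> \<iota> t) \<odot> (\<iota> u \<otimes> WA.eta_st) = (\<iota> s \<otimes> c) \<odot> (b \<otimes> \<iota> t) \<odot> (\<iota> u \<otimes> a) \<odot> (\<iota> u \<otimes> ht \<otimes> \<iota> s) \<odot> (\<iota> u \<otimes> hs)"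
    unfolding WA.eta_st_def using Hc2_split[of ht hs] by simp
  also have "\<dots> = (a \<otimes> \<iota> u) \<odot> (\<iota> t \<otimes> b) \<odot> (c \<otimes> \<iota> s) \<odot> (\<iota> u \<otimes> ht \<otimes> \<iota> s) \<odot> (\<iota> u \<otimes> hs)"
    using yb[symmetric, THEN eq_Vc] by simp
  also have "\<dots> = (a \<otimes> \<iota> u) \<odot> (\<iota> t \<otimes> b) \<odot> (WC.idem' \<otimes> \<iota> s) \<odot> (ht \<otimes> \<iota> (u \<cdot> s)) \<odot> (\<iota> u \<otimes> hs)"
    using WC.law_unit_s_idem'[THEN whisker_eq_Vc[where p=I and q=s]] by simp
  also have "\<dots> = proj_u \<odot> (a \<otimes> \<iota> u) \<odot> (\<iota> t \<otimes> b) \<odot> (ht \<otimes> \<iota> (u \<cdot> s)) \<odot> (\<iota> u \<otimes> hs)"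
    using yb_idem'_c[THEN eq_Vc] by simp
  finally show ?thesis .
qed

lemma lam_unit_st: "lam \<odot> (\<iota> u \<otimes> WA.eta_st) = (idem_st \<otimes> mu) \<odot> (lam \<otimes> \<iota> u) \<odot> (hu \<otimes> idem_st \<otimes> \<iota> u) \<odot> (WA.eta_st \<otimes> \<iota> u)"
proof -
  have "lam \<odot> (\<iota> u \<otimes> WA.eta_st) = proj_u \<odot> (a \<otimes> \<iota> u) \<odot> (\<iota> t \<otimes> b) \<odot> (ht \<otimes> \<iota> (u \<cdot> s)) \<odot> (\<iota> u \<otimes> hs)"
    unfolding lam_def using WA.idem_eta_st[THEN whisker_eq[where p=u and q=I]] lam_raw_eta_st by simp
  also have "\<dots> = proj_u \<odot> (idem_st \<otimes> \<iota> u) \<odot> (\<iota> s \<otimes> ht \<otimes> \<iota> u) \<odot> WB.idem' \<odot> (hs \<otimes> \<iota> u)"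
    using slide_Vc[of ht b I I I] WA.law_unit_t_idem[THEN whisker_eq_Vc[where p=I and q=u]] WB.law_unit_s_idem' by simp
  also have "\<dots> = proj_s \<odot> (\<iota> s \<otimes> WC.idem') \<odot> (\<iota> s \<otimes> ht \<otimes> \<iota> u) \<odot> WB.idem' \<odot> (hs \<otimes> \<iota> u)"
    using proj_u_idem_st[THEN eq_Vc] proj_u_unit_t[THEN eq_Vc] WB.idem'_idem[THEN eq_Vc] by simp
  finally have L: "lam \<odot> (\<iota> u \<otimes> WA.eta_st) = proj_s \<odot> (\<iota> s \<otimes> WC.idem') \<odot> (\<iota> s \<otimes> ht \<otimes> \<iota> u) \<odot> WB.idem' \<odot> (hs \<otimes> \<iota> u)" .
  have "(idem_st \<otimes> mu) \<odot> (lam \<otimes> \<iota> u) \<odot> (hu \<otimes> idem_st \<otimes> \<iota> u) \<odot> (WA.eta_st \<otimes> \<iota> u) = (\<iota> (s \<cdot> t) \<otimes> mu) \<odot> (lam \<otimes> \<iota> u) \<odot> (hu \<otimes> \<iota> (s \<cdot> t \<cdot> u)) \<odot> (idem_st \<otimes> \<iota> u) \<odot> (WA.eta_st \<otimes> \<iota> u)"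
    using Hc2_split'[of idem_st mu] idem_st_lam[THEN whisker_eq_Vc[where p=I and q=u]] Hc2_split[of hu "idem_st \<otimes> \<iota> u"] by simp
  also have "\<dots> = (\<iota> (s \<cdot> t) \<otimes> mu) \<odot> (\<iota> s \<otimes> c \<otimes> \<iota> u) \<odot> (b \<otimes> \<iota> (t \<cdot> u)) \<odot> (hu \<otimes> \<iota> (s \<cdot> t \<cdot> u)) \<odot> (WA.eta_st \<otimes> \<iota> u)"
    unfolding lam_def using slide_Vc[of hu idem_st I I u] WA.idem_idem[THEN whisker_eq_Vc[where p=I and q=u]] WA.idem_eta_st[THEN whisker_eq[where p=I and q=u]] by simp
  also have "\<dots> = proj_u \<odot> (a \<otimes> \<iota> u) \<odot> (ht \<otimes> \<iota> (s \<cdot> u)) \<odot> (hs \<otimes> \<iota> u)"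
    unfolding proj_u_def WA.eta_st_def using Hc2_split[of ht "hs \<otimes> \<iota> u"] by simp
  also have "\<dots> = proj_s \<odot> (\<iota> s \<otimes> WC.idem') \<odot> (\<iota> s \<otimes> ht \<otimes> \<iota> u) \<odot> WB.idem' \<odot> (hs \<otimes> \<iota> u)"
    using WA.law_unit_t_idem[THEN whisker_eq_Vc[where p=I and q=u]] proj_u_idem_st[THEN eq_Vc] proj_u_unit_t[THEN eq_Vc] by simp
  finally show ?thesis using L by simp
qed

lemma yb_mu_tu: "(a \<otimes> \<iota> u) \<odot> (\<iota> t \<otimes> b) \<odot> (WC.mu_st \<otimes> \<iota> s) = (\<iota> s \<otimes> WC.mu_st) \<odot> (a \<otimes> \<iota> (u \<cdot> t \<cdot> u)) \<odot> (\<iota> t \<otimes> b \<otimes> \<iota> (t \<cdot> u))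
   \<odot> (\<iota> (t \<cdot> u) \<otimes> a \<otimes> \<iota> u) \<odot> (\<iota> (t \<cdot> u \<cdot> t) \<otimes> b)"
proof -
  have "(a \<otimes> \<iota> u) \<odot> (\<iota> t \<otimes> b) \<odot> (WC.mu_st \<otimes> \<iota> s) = (a \<otimes> \<iota> u) \<odot> (\<iota> t \<otimes> b) \<odot> (mt \<otimes> \<iota> (u \<cdot> s)) \<odot> (\<iota> (t \<cdot> t) \<otimes> mu \<otimes> \<iota> s) \<odot> (\<iota> t \<otimes> c \<otimes> \<iota> (u \<cdot> s))"
    unfolding WC.mu_st_def by simp
  also have "\<dots> = (\<iota> s \<otimes> mt \<otimes> \<iota> u) \<odot> (a \<otimes> \<iota> (t \<cdot> u)) \<odot> (\<iota> t \<otimes> a \<otimes> \<iota> u) \<odot> (\<iota> (t \<cdot> t \<cdot> s) \<otimes> mu) \<odot> (\<iota> (t \<cdot> t) \<otimes> b \<otimes> \<iota> u) \<odot> (\<iota> (t \<cdot> t \<cdot> u) \<otimes> b) \<odot> (\<iota> t \<otimes> c \<otimes> \<iota> (u \<cdot> s))"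
    using slide_Vc[of mt b I I I] WA.law_mult_t[THEN whisker_eq_Vc[where p=I and q=u]] WB.law_mult_t[THEN whisker_eq_Vc[where p="t \<cdot> t" and q=I]] by simp
  also have "\<dots> = (\<iota> s \<otimes> mt \<otimes> \<iota> u) \<odot> (\<iota> (s \<cdot> t \<cdot> t) \<otimes> mu) \<odot> (a \<otimes> \<iota> (t \<cdot> u \<cdot> u)) \<odot> (\<iota> t \<otimes> a \<otimes> \<iota> (u \<cdot> u)) \<odot> (\<iota> (t \<cdot> t) \<otimes> b \<otimes> \<iota> u) \<odot> (\<iota> t \<otimes> c \<otimes> \<iota> (s \<cdot> u)) \<odot> (\<iota> (t \<cdot> u \<cdot> t) \<otimes> b)"
    using slide[of c b t I I] slide_Vc[of a mu t I I, symmetric] slide_Vc[of a mu I t I, symmetric] by simp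
  also have "\<dots> = (\<iota> s \<otimes> mt \<otimes> \<iota> u) \<odot> (\<iota> (s \<cdot> t \<cdot> t) \<otimes> mu) \<odot> (\<iota> (s \<cdot> t) \<otimes> c \<otimes> \<iota> u) \<odot> (a \<otimes> \<iota> (u \<cdot> t \<cdot> u)) \<odot> (\<iota> t \<otimes> b \<otimes> \<iota> (t \<cdot> u)) \<odot> (\<iota> (t \<cdot> u) \<otimes> a \<otimes> \<iota> u) \<odot> (\<iota> (t \<cdot> u \<cdot> t) \<otimes> b)"
    using yb[THEN whisker_eq_Vc[where p=t and q=u]] slide_Vc[of a c I I u, symmetric] by simp
  also have "\<dots> = (\<iota> s \<otimes> WC.mu_st) \<odot> (a \<otimes> \<iota> (u \<cdot> t \<cdot> u)) \<odot> (\<iota> t \<otimes> b \<otimes> \<iota> (t \<cdot> u)) \<odot> (\<iota> (t \<cdot> u) \<otimes> a \<otimes> \<iota> u) \<odot> (\<iota> (t \<cdot> u \<cdot> t) \<otimes> b)"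
    unfolding WC.mu_st_def by simp
  finally show ?thesis .
qed

lemma lam_eta_st: "lam \<odot> (\<iota> u \<otimes> WA.eta_st) = proj_u \<odot> (a \<otimes> \<iota> u) \<odot> (\<iota> t \<otimes> b) \<odot> (ht \<otimes> \<iota> (u \<cdot> s)) \<odot> (\<iota> u \<otimes> hs)"
  unfolding lam_def using WA.idem_eta_st[THEN whisker_eq[where p=u and q=I]] lam_raw_eta_st by simp

lemma mu_st_lam_eta_st: "(WA.mu_st \<otimes> \<iota> u) \<odot> (\<iota> (s \<cdot> t) \<otimes> lam) \<odot> (\<iota> (s \<cdot> t \<cdot> u) \<otimes> WA.eta_st) = proj_u \<odot> proj_s"
proof -
  have "(WA.mu_st \<otimes> \<iota> u) \<odot> (\<iota> (s \<cdot> t) \<otimes> lam) \<odot> (\<iota> (s \<cdot> t \<cdot> u) \<otimes> WA.eta_st) = (WA.mu_st \<otimes> \<iota> u) \<odot> (\<iota> (s \<cdot> t) \<otimes> proj_u) \<odot> (\<iota> (s \<cdot> t) \<otimes> a \<otimes> \<iota> u) \<odot> (\<iota> (s \<cdot> t \<cdot> t) \<otimes> b) \<odot> (\<iota> (s \<cdot> t) \<otimes> ht \<otimes> \<iota> (u \<cdot> s)) \<odot> (\<iota> (s \<cdot> t \<cdot> u) \<otimes> hs)"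
    using lam_eta_st[THEN whisker_eq[where p="s \<cdot> t" and q=I]] by simp
  also have "\<dots> = (ms \<otimes> \<iota> (t \<cdot> u)) \<odot> (\<iota> (s \<cdot> s) \<otimes> mt \<otimes> \<iota> u) \<odot> (\<iota> s \<otimes> a \<otimes> \<iota> (t \<cdot> u)) \<odot> (\<iota> (s \<cdot> t \<cdot> s \<cdot> t) \<otimes> mu) \<odot> (\<iota> (s \<cdot> t \<cdot> s) \<otimes> c \<otimes> \<iota> u) \<odot> (\<iota> (s \<cdot> t) \<otimes> b \<otimes> \<iota> (t \<cdot> u)) \<odot> (\<iota> (s \<cdot> t) \<otimes> hu \<otimes> \<iota> (s \<cdot> t \<cdot> u)) 
       \<odot> (\<iota> (s \<cdot> t) \<otimes> a \<otimes> \<iota> u) \<odot> (\<iota> (s \<cdot> t \<cdot> t) \<otimes> b) \<odot> (\<iota> (s \<cdot> t) \<otimes> ht \<otimes> \<iota> (u \<cdot> s)) \<odot> (\<iota> (s \<cdot> t \<cdot> u) \<otimes> hs)"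
    unfolding WA.mu_st_def proj_u_def by simp
  also have "\<dots> = (ms \<otimes> \<iota> (t \<cdot> u)) \<odot> (\<iota> (s \<cdot> s) \<otimes> mt \<otimes> \<iota> u) \<odot> (\<iota> (s \<cdot> s \<cdot> t \<cdot> t) \<otimes> mu) \<odot> (\<iota> (s \<cdot> s \<cdot> t) \<otimes> c \<otimes> \<iota> u) \<odot> (\<iota> s \<otimes> a \<otimes> \<iota> (u \<cdot> t \<cdot> u)) \<odot> (\<iota> (s \<cdot> t) \<otimes> b \<otimes> \<iota> (t \<cdot> u)) 
       \<odot> (\<iota> (s \<cdot> t \<cdot> u) \<otimes> a \<otimes> \<iota> u) \<odot> (\<iota> (s \<cdot> t \<cdot> u \<cdot> t) \<otimes> b) \<odot> (\<iota> (s \<cdot> t) \<otimes> hu \<otimes> \<iota> (t \<cdot> u \<cdot> s)) \<odot> (\<iota> (s \<cdot> t) \<otimes> ht \<otimes> \<iota> (u \<cdot> s)) \<odot> (\<iota> (s \<cdot> t \<cdot> u) \<otimes> hs)"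
    using slide_Vc[of a mu s t I, symmetric] slide_Vc[of a c s I u, symmetric] slide_Vc[of hu a "s \<cdot> t" I u, symmetric] slide_Vc[of hu b "s \<cdot> t" t I, symmetric] by simp
  also have "\<dots> = (ms \<otimes> \<iota> (t \<cdot> u)) \<odot> (\<iota> s \<otimes> a \<otimes> \<iota> u) \<odot> (\<iota> (s \<cdot> t) \<otimes> b) \<odot> (\<iota> s \<otimes> WC.mu_st \<otimes> \<iota> s) \<odot> (\<iota> (s \<cdot> t) \<otimes> hu \<otimes> \<iota> (t \<cdot> u \<cdot> s)) \<odot> (\<iota> (s \<cdot> t) \<otimes> ht \<otimes> \<iota> (u \<cdot> s)) \<odot> (\<iota> (s \<cdot> t \<cdot> u) \<otimes> hs)"
    using yb_mu_tu[symmetric, THEN whisker_eq_Vc[where p=s and q=I]] unfolding WC.mu_st_def by simp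
  also have "\<dots> = (ms \<otimes> \<iota> (t \<cdot> u)) \<odot> (\<iota> s \<otimes> a \<otimes> \<iota> u) \<odot> (\<iota> (s \<cdot> t) \<otimes> b) \<odot> (\<iota> s \<otimes> WC.idem' \<otimes> \<iota> s) \<odot> (\<iota> (s \<cdot> t \<cdot> u) \<otimes> hs)"
    using WC.mu_st_units_middle[THEN whisker_eq_Vc[where p=s and q=s]] WC.idem_eq_idem' by simp
  also have "\<dots> = (ms \<otimes> \<iota> (t \<cdot> u)) \<odot> (\<iota> s \<otimes> proj_u) \<odot> (\<iota> s \<otimes> a \<otimes> \<iota> u) \<odot> (\<iota> (s \<cdot> t) \<otimes> b) \<odot> (\<iota> (s \<cdot> t \<cdot> u) \<otimes> hs)"
    using yb_idem'_c[THEN whisker_eq_Vc[where p=s and q=I]] by simp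
  also have "\<dots> = proj_u \<odot> proj_s" unfolding proj_s_def using mult_s_proj_u[THEN eq_Vc] by simp
  finally show ?thesis .
qed

lemma lam_unit_u: "lam \<odot> (hu \<otimes> idem_st) = (WA.mu_st \<otimes> \<iota> u) \<odot> (idem_st \<otimes> lam) \<odot> (idem_st \<otimes> \<iota> u \<otimes> WA.eta_st) \<odot> (idem_st \<otimes> hu)"
proof -
  have "(WA.mu_st \<otimes> \<iota> u) \<odot> (idem_st \<otimes> lam) \<odot> (idem_st \<otimes> \<iota> u \<otimes> WA.eta_st) \<odot> (idem_st \<otimes> hu)
     = (WA.mu_st \<otimes> \<iota> u) \<odot> (idem_st \<otimes> \<iota> (s \<cdot> t \<cdot> u)) \<odot> (\<iota> (s \<cdot> t) \<otimes> lam) \<odot> (idem_st \<otimes> \<iota> (u \<cdot> s \<cdot> t)) \<odot> (\<iota> (s \<cdot> t \<cdot> u) \<otimes> WA.eta_st) \<odot> (idem_st \<otimes> \<iota> u) \<odot> (\<iota> (s \<cdot> t) \<otimes> hu)"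
    using Hc2_split[of idem_st lam] Hc2_split[of idem_st "\<iota> u \<otimes> WA.eta_st"] Hc2_split[of idem_st hu] by simp
  also have "\<dots> = (WA.mu_st \<otimes> \<iota> u) \<odot> (\<iota> (s \<cdot> t) \<otimes> lam) \<odot> (\<iota> (s \<cdot> t \<cdot> u) \<otimes> WA.eta_st) \<odot> (\<iota> (s \<cdot> t) \<otimes> hu)"
    using WA.mu_st_idem_left[THEN whisker_eq_Vc[where p=I and q=u]] slide_Vc[of idem_st lam I I I] slide_Vc[of idem_st WA.eta_st I u I]
      WA.idem_idem[THEN whisker_eq_Vc[where p=I and q="u \<cdot> s \<cdot> t"]] WA.idem_idem[THEN whisker_eq_Vc[where p=I and q="s \<cdot> t \<cdot> u"]] by simp
  also have "\<dots> = proj_u \<odot> proj_s \<odot> (\<iota> (s \<cdot> t) \<otimes> hu)" using mu_st_lam_eta_st[THEN eq_Vc] by simp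
  also have "\<dots> = proj_u \<odot> (idem_st \<otimes> \<iota> u) \<odot> (\<iota> (s \<cdot> t) \<otimes> hu)" using proj_u_proj_s[THEN eq_Vc] proj_u_idem_st[symmetric, THEN eq_Vc] by simp
  also have "\<dots> = (\<iota> (s \<cdot> t) \<otimes> mu) \<odot> (lam \<otimes> \<iota> u) \<odot> (hu \<otimes> \<iota> (s \<cdot> t \<cdot> u)) \<odot> (\<iota> (s \<cdot> t) \<otimes> hu)"
    unfolding proj_u_def lam_def using slide_Vc[of hu idem_st I I u] by simp
  also have "\<dots> = lam \<odot> (hu \<otimes> \<iota> (s \<cdot> t))"
    using slide[of hu hu I "s \<cdot> t" I, symmetric] slide_Vc[of lam hu I I I, symmetric] whisker_Vc_Id2_Vc[OF WB.T.monad_simps(8), of "s \<cdot> t" I] by simp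
  also have "\<dots> = lam \<odot> (hu \<otimes> idem_st)" using Hc2_split'[of hu idem_st] lam_idem_st[THEN eq_Vc] by simp
  finally show ?thesis by simp
qed

end

locale twocat_wdl_quad = endo_twocat +
  fixes s ms hs t mt ht u mu hu v mv hv a b c bv cv d
  assumes Wa: "is_wdl t mt ht s ms hs a" and Wb: "is_wdl u mu hu s ms hs b" and Wc: "is_wdl u mu hu t mt ht c"
  and Wbv: "is_wdl v mv hv s ms hs bv" and Wcv: "is_wdl v mv hv t mt ht cv" and Wd: "is_wdl v mv hv u mu hu d"
  and yb_stu: "(a \<otimes> \<iota> u) \<odot> (\<iota> t \<otimes> b) \<odot> (c \<otimes> \<iota> s) = (\<iota> s \<otimes> c) \<odot> (b \<otimes> \<iota> t) \<odot> (\<iota> u \<otimes> a)"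
  and yb_stv: "(a \<otimes> \<iota> v) \<odot> (\<iota> t \<otimes> bv) \<odot> (cv \<otimes> \<iota> s) = (\<iota> s \<otimes> cv) \<odot> (bv \<otimes> \<iota> t) \<odot> (\<iota> v \<otimes> a)"
  and yb_suv: "(b \<otimes> \<iota> v) \<odot> (\<iota> u \<otimes> bv) \<odot> (d \<otimes> \<iota> s) = (\<iota> s \<otimes> d) \<odot> (bv \<otimes> \<iota> u) \<odot> (\<iota> v \<otimes> b)"
  and yb_tuv: "(c \<otimes> \<iota> v) \<odot> (\<iota> u \<otimes> cv) \<odot> (d \<otimes> \<iota> t) = (\<iota> t \<otimes> d) \<odot> (cv \<otimes> \<iota> u) \<odot> (\<iota> v \<otimes> c)"
begin
sublocale U: twocat_wdl_triple K A s ms hs t mt ht u mu hu a b c by unfold_locales (rule Wa Wb Wc yb_stu)+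
sublocale V: twocat_wdl_triple K A s ms hs t mt ht v mv hv a bv cv by unfold_locales (rule Wa Wbv Wcv yb_stv)+
sublocale WD: twocat_wdl K A v mv hv u mu hu d by unfold_locales (rule Wd)

lemma lam_yang_baxter: "(U.lam \<otimes> \<iota> v) \<odot> (\<iota> u \<otimes> V.lam) \<odot> (d \<otimes> U.idem_st) = (U.idem_st \<otimes> d) \<odot> (V.lam \<otimes> \<iota> u) \<odot> (\<iota> v \<otimes> U.lam)"
proof -
  have "(U.lam \<otimes> \<iota> v) \<odot> (\<iota> u \<otimes> V.lam) \<odot> (d \<otimes> U.idem_st) = (\<iota> s \<otimes> c \<otimes> \<iota> v) \<odot> (b \<otimes> \<iota> (t \<cdot> v)) \<odot> (\<iota> u \<otimes> U.idem_st \<otimes> \<iota> v) \<odot> (\<iota> (u \<cdot> s) \<otimes> cv) \<odot> (\<iota> u \<otimes> bv \<otimes> \<iota> t) \<odot> (\<iota> (u \<cdot> v) \<otimes> U.idem_st) \<odot> (\<iota> (u \<cdot> v) \<otimes> U.idem_st) \<odot> (d \<otimes> \<iota> (s \<cdot> t))"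
    unfolding U.lam_def V.lam_def using Hc2_split'[of d U.idem_st] by simp
  also have "\<dots> = (\<iota> s \<otimes> c \<otimes> \<iota> v) \<odot> (b \<otimes> \<iota> (t \<cdot> v)) \<odot> (\<iota> (u \<cdot> s) \<otimes> cv) \<odot> (\<iota> u \<otimes> bv \<otimes> \<iota> t) \<odot> (\<iota> (u \<cdot> v) \<otimes> U.idem_st) \<odot> (d \<otimes> \<iota> (s \<cdot> t))"
    using U.WA.idem_idem[THEN whisker_eq_Vc[where p="u \<cdot> v" and q=I]] V.idem_st_lam_raw[THEN whisker_eq_Vc[where p=u and q=I]] by simp
  also have "\<dots> = (\<iota> s \<otimes> c \<otimes> \<iota> v) \<odot> (b \<otimes> \<iota> (t \<cdot> v)) \<odot> (\<iota> (u \<cdot> s) \<otimes> cv) \<odot> (\<iota> u \<otimes> bv \<otimes> \<iota> t) \<odot> (d \<otimes> \<iota> (s \<cdot> t)) \<odot> (\<iota> (v \<cdot> u) \<otimes> U.idem_st)"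
    using slide[of d U.idem_st I I I] by simp
  also have "\<dots> = (\<iota> s \<otimes> c \<otimes> \<iota> v) \<odot> (\<iota> (s \<cdot> u) \<otimes> cv) \<odot> (\<iota> s \<otimes> d \<otimes> \<iota> t) \<odot> (bv \<otimes> \<iota> (u \<cdot> t)) \<odot> (\<iota> v \<otimes> b \<otimes> \<iota> t) \<odot> (\<iota> (v \<cdot> u) \<otimes> U.idem_st)"
    using slide_Vc[of b cv I I I, symmetric] yb_suv[THEN whisker_eq_Vc[where p=I and q=t]] by simp
  also have "\<dots> = (\<iota> (s \<cdot> t) \<otimes> d) \<odot> (\<iota> s \<otimes> cv \<otimes> \<iota> u) \<odot> (bv \<otimes> \<iota> (t \<cdot> u)) \<odot> (\<iota> (v \<cdot> s) \<otimes> c) \<odot> (\<iota> v \<otimes> b \<otimes> \<iota> t) \<odot> (\<iota> (v \<cdot> u) \<otimes> U.idem_st)"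
    using yb_tuv[THEN whisker_eq_Vc[where p=s and q=I]] slide_Vc[of bv c I I I] by simp
  finally have L: "(U.lam \<otimes> \<iota> v) \<odot> (\<iota> u \<otimes> V.lam) \<odot> (d \<otimes> U.idem_st) = (\<iota> (s \<cdot> t) \<otimes> d) \<odot> (\<iota> s \<otimes> cv \<otimes> \<iota> u) \<odot> (bv \<otimes> \<iota> (t \<cdot> u)) \<odot> (\<iota> (v \<cdot> s) \<otimes> c) \<odot> (\<iota> v \<otimes> b \<otimes> \<iota> t) \<odot> (\<iota> (v \<cdot> u) \<otimes> U.idem_st)" .
  have "(U.idem_st \<otimes> d) \<odot> (V.lam \<otimes> \<iota> u) \<odot> (\<iota> v \<otimes> U.lam) = (\<iota> (s \<cdot> t) \<otimes> d) \<odot> (U.idem_st \<otimes> \<iota> (v \<cdot> u)) \<odot> (\<iota> s \<otimes> cv \<otimes> \<iota> u) \<odot> (bv \<otimes> \<iota> (t \<cdot> u)) \<odot> (\<iota> v \<otimes> U.idem_st \<otimes> \<iota> u) \<odot> (\<iota> (v \<cdot> s) \<otimes> c) \<odot> (\<iota> v \<otimes> b \<otimes> \<iota> t) \<odot> (\<iota> (v \<cdot> u) \<otimes> U.idem_st)"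
    unfolding U.lam_def V.lam_def using Hc2_split'[of U.idem_st d] by simp
  also have "\<dots> = (\<iota> (s \<cdot> t) \<otimes> d) \<odot> (\<iota> s \<otimes> cv \<otimes> \<iota> u) \<odot> (bv \<otimes> \<iota> (t \<cdot> u)) \<odot> (\<iota> v \<otimes> U.idem_st \<otimes> \<iota> u) \<odot> (\<iota> (v \<cdot> s) \<otimes> c) \<odot> (\<iota> v \<otimes> b \<otimes> \<iota> t) \<odot> (\<iota> (v \<cdot> u) \<otimes> U.idem_st)"
    using V.idem_st_lam_raw[THEN whisker_eq_Vc[where p=I and q=u]] by simp
  also have "\<dots> = (\<iota> (s \<cdot> t) \<otimes> d) \<odot> (\<iota> s \<otimes> cv \<otimes> \<iota> u) \<odot> (bv \<otimes> \<iota> (t \<cdot> u)) \<odot> (\<iota> (v \<cdot> s) \<otimes> c) \<odot> (\<iota> v \<otimes> b \<otimes> \<iota> t) \<odot> (\<iota> (v \<cdot> u) \<otimes> U.idem_st)"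
    using U.idem_st_lam_raw[THEN whisker_eq[where p=v and q=I]] by simp
  finally show ?thesis using L by simp
qed
end

section \<open>The local idempotent closure as a 2-category\<close>

context endo_twocat begin

definition clo_arr where "clo_arr v \<longleftrightarrow> barArr K v \<and> arr (fst v)"
definition clo_cell where "clo_cell x \<longleftrightarrow> clo_arr (fst (snd x)) \<and> clo_arr (snd (snd x)) \<and> barHom K (fst x) (fst (snd x)) (snd (snd x))"

lemma clo_arr_iff: "clo_arr v \<longleftrightarrow> arr (fst v) \<and> cell (snd v) \<and> Dom K (snd v) = fst v \<and> Cod K (snd v) = fst v \<and> snd v \<odot> snd v = snd v"
  unfolding clo_arr_def barArr_def cell_def arr_def by auto

lemma clo_cell_iff: "clo_cell x \<longleftrightarrow> clo_arr (fst (snd x)) \<and> clo_arr (snd (snd x)) \<and> cell (fst x) \<and> Dom K (fst x) = fst (fst (snd x))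
   \<and> Cod K (fst x) = fst (snd (snd x)) \<and> snd (snd (snd x)) \<odot> fst x = fst x \<and> fst x \<odot> snd (fst (snd x)) = fst x"
  unfolding clo_cell_def barHom_def clo_arr_iff cell_def by auto

text \<open>
  A 2-cell of the closure is a triple (w, v, v') of a 2-cell w : v -> v' with its domain and
  codomain, so that identities (the idempotents) are available as genuine identity 2-cells.
\<close>

definition clo :: "('o, 'a \<times> 'c, 'c \<times> ('a \<times> 'c) \<times> ('a \<times> 'c)) tcat" where
  "clo = \<lparr> Obj = {A}, Arr = {v. clo_arr v}, Src = (\<lambda>v. A), Trg = (\<lambda>v. A), Id1 = barId K, Hc1 = barC K,
     Cell = {x. clo_cell x}, Dom = (\<lambda>x. fst (snd x)), Cod = (\<lambda>x. snd (snd x)),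
     Vc = (\<lambda>x y. (Vc K (fst x) (fst y), fst (snd y), snd (snd x))),
     Id2 = (\<lambda>v. (snd v, v, v)),
     Hc2 = (\<lambda>x y. (Hc2 K (fst x) (fst y), barC K (fst (snd x)) (fst (snd y)), barC K (snd (snd x)) (snd (snd y)))) \<rparr>"

lemma clo_arr_barC: "clo_arr u \<Longrightarrow> clo_arr w \<Longrightarrow> clo_arr (barC K u w)"
  by (auto simp: clo_arr_iff barC_def interchange_fuse)
lemma clo_arr_barId: "clo_arr (barId K A)" by (auto simp: clo_arr_iff barId_def)

lemma clo_cell_Vc:
  assumes "clo_cell x" "clo_cell y" "snd (snd y) = fst (snd x)"
  shows "clo_cell (Vc K (fst x) (fst y), fst (snd y), snd (snd x))"
proof -
  have "snd (snd (snd x)) \<odot> fst x \<odot> fst y = fst x \<odot> fst y"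
    using assms by (simp add: clo_cell_iff clo_arr_iff flip: Vc_assoc)
  moreover have "(fst x \<odot> fst y) \<odot> snd (fst (snd y)) = fst x \<odot> fst y"
    using assms by (simp add: clo_cell_iff clo_arr_iff)
  ultimately show ?thesis using assms by (simp add: clo_cell_iff)
qed

lemma clo_twocat: "twocat clo"
proof -
  have Vc_cell: "\<forall>a\<in>Cell clo. \<forall>b\<in>Cell clo. Cod clo b = Dom clo a \<longrightarrow>
        Vc clo a b \<in> Cell clo \<and> Dom clo (Vc clo a b) = Dom clo b \<and> Cod clo (Vc clo a b) = Cod clo a"
    using clo_cell_Vc by (simp add: clo_def)
  have ichg: "\<forall>a\<in>Cell clo. \<forall>b\<in>Cell clo. \<forall>c\<in>Cell clo. \<forall>d\<in>Cell clo.
        Cod clo b = Dom clo a \<longrightarrow> Cod clo d = Dom clo c \<longrightarrow> Trg clo (Dom clo c) = Src clo (Dom clo a) \<longrightarrow>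
        Hc2 clo (Vc clo a b) (Vc clo c d) = Vc clo (Hc2 clo a c) (Hc2 clo b d)"
    by (simp add: clo_def clo_cell_iff interchange)
  show ?thesis
    unfolding twocat_def using Vc_cell ichg
    by (intro conjI; (simp add: clo_def clo_cell_iff clo_arr_iff barC_def barId_def clo_arr_barC clo_arr_barId)?)
      (auto simp: clo_def clo_cell_iff clo_arr_iff barC_def interchange_fuse clo_arr_barC)
qed

lemma clo_simps[simp]: "Obj clo = {A}" "Arr clo = {v. clo_arr v}" "Src clo = (\<lambda>v. A)" "Trg clo = (\<lambda>v. A)"
  "Id1 clo = barId K" "Hc1 clo = barC K" "Cell clo = {x. clo_cell x}" "Dom clo = (\<lambda>x. fst (snd x))"
  "Cod clo = (\<lambda>x. snd (snd x))" "Vc clo x y = (Vc K (fst x) (fst y), fst (snd y), snd (snd x))"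
  "Id2 clo v = (snd v, v, v)"
  "Hc2 clo x y = (Hc2 K (fst x) (fst y), barC K (fst (snd x)) (fst (snd y)), barC K (snd (snd x)) (snd (snd y)))"
  by (simp_all add: clo_def)

lemma endo_twocat_clo: "endo_twocat clo A" by unfold_locales (simp_all add: clo_twocat)

lemma arr_clo_iff: "endo_twocat.arr clo A v \<longleftrightarrow> clo_arr v" by (simp add: endo_twocat.arr_def[OF endo_twocat_clo])
lemma cell_clo_iff: "endo_twocat.cell clo A x \<longleftrightarrow> clo_cell x" by (auto simp: endo_twocat.cell_def[OF endo_twocat_clo] arr_clo_iff clo_cell_def)

lemma barC_assoc: "clo_arr u \<Longrightarrow> clo_arr v \<Longrightarrow> clo_arr w \<Longrightarrow> barC K (barC K u v) w = barC K u (barC K v w)"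
  by (simp add: barC_def clo_arr_iff)
lemma barC_barId: "clo_arr u \<Longrightarrow> barC K u (barId K A) = u" "clo_arr u \<Longrightarrow> barC K (barId K A) u = u"
  by (simp_all add: barC_def barId_def clo_arr_iff)

section \<open>Monads and weak distributive laws of the closure\<close>

definition "clo_mult M = (mmu M, barC K (mc M) (mc M), mc M)"
definition "clo_unit M = (meta M, barId K A, mc M)"

lemma bar_monadD: assumes "bar_monad K A M"
  shows "clo_arr (mc M)" "cell (mmu M)" "Dom K (mmu M) = fst (mc M) \<cdot> fst (mc M)" "Cod K (mmu M) = fst (mc M)"
    "cell (meta M)" "Dom K (meta M) = I" "Cod K (meta M) = fst (mc M)"
    "snd (mc M) \<odot> mmu M = mmu M" "mmu M \<odot> (snd (mc M) \<otimes> snd (mc M)) = mmu M"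
    "snd (mc M) \<odot> meta M = meta M"
    "mmu M \<odot> (mmu M \<otimes> snd (mc M)) = mmu M \<odot> (snd (mc M) \<otimes> mmu M)"
    "mmu M \<odot> (snd (mc M) \<otimes> meta M) = snd (mc M)" "mmu M \<odot> (meta M \<otimes> snd (mc M)) = snd (mc M)"
  using assms unfolding bar_monad_def barHom_def clo_arr_def barArr_def barC_def barId_def wl_def wr_def cell_def arr_def
  by (auto simp: tcD(3)[rule_format] tcD(1)[rule_format, OF A])

lemma is_monad_clo: assumes "bar_monad K A M" shows "endo_twocat.is_monad clo A (mc M) (clo_mult M) (clo_unit M)"
proof -
  note d = bar_monadD[OF assms]
  have c: "clo_arr (barC K (mc M) (mc M))" using d by (simp add: clo_arr_barC)
  show ?thesis
    unfolding endo_twocat.is_monad_def[OF endo_twocat_clo] arr_clo_iff cell_clo_iff clo_mult_def clo_unit_def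
    using d c clo_arr_barId by (simp add: clo_cell_iff barC_assoc barC_barId clo_arr_iff barC_def barId_def)
qed

definition "clo_law T S l = (l, barC K (mc T) (mc S), barC K (mc S) (mc T))"

lemma bar_wdlD: assumes "bar_wdl K A T S l"
  shows "bar_monad K A T" "bar_monad K A S" "cell l" "Dom K l = fst (mc T) \<cdot> fst (mc S)" "Cod K l = fst (mc S) \<cdot> fst (mc T)"
  "(snd (mc S) \<otimes> snd (mc T)) \<odot> l = l" "l \<odot> (snd (mc T) \<otimes> snd (mc S)) = l"
  "l \<odot> (mmu T \<otimes> snd (mc S)) = (snd (mc S) \<otimes> mmu T) \<odot> (l \<otimes> snd (mc T)) \<odot> (snd (mc T) \<otimes> l)"
  "l \<odot> (snd (mc T) \<otimes> mmu S) = (mmu S \<otimes> snd (mc T)) \<odot> (snd (mc S) \<otimes> l) \<odot> (l \<otimes> snd (mc S))"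
  "l \<odot> (meta T \<otimes> snd (mc S)) = (mmu S \<otimes> snd (mc T)) \<odot> (snd (mc S) \<otimes> l) \<odot> ((snd (mc S) \<otimes> snd (mc T)) \<otimes> meta S) \<odot> (snd (mc S) \<otimes> meta T)"
  "l \<odot> (snd (mc T) \<otimes> meta S) = (snd (mc S) \<otimes> mmu T) \<odot> (l \<otimes> snd (mc T)) \<odot> (meta T \<otimes> (snd (mc S) \<otimes> snd (mc T))) \<odot> (meta S \<otimes> snd (mc T))"
  using assms bar_monadD[of T] bar_monadD[of S] unfolding bar_wdl_def barHom_def barC_def wl_def wr_def Let_def cell_def
  by (auto simp: clo_arr_iff)

lemma idem_Hc2: "cell e \<Longrightarrow> cell f \<Longrightarrow> Cod K e = Dom K e \<Longrightarrow> Cod K f = Dom K f \<Longrightarrow> e \<odot> e = e \<Longrightarrow> f \<odot> f = f \<Longrightarrow>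
  (e \<otimes> f) \<odot> (e \<otimes> f) = e \<otimes> f"
  using interchange_fuse[of e e f f] by simp

lemma is_wdl_clo: assumes "bar_wdl K A T S l"
  shows "endo_twocat.is_wdl clo A (mc T) (clo_mult T) (clo_unit T) (mc S) (clo_mult S) (clo_unit S) (clo_law T S l)"
proof -
  note d = bar_wdlD[OF assms]
  note dT = bar_monadD[OF d(1)] and dS = bar_monadD[OF d(2)]
  show ?thesis
    unfolding endo_twocat.is_wdl_def[OF endo_twocat_clo] cell_clo_iff using is_monad_clo[OF d(1)] is_monad_clo[OF d(2)] d dT dS clo_arr_barId
    by (simp add: clo_cell_iff barC_assoc barC_barId clo_arr_iff barC_def barId_def clo_mult_def clo_unit_def clo_law_def idem_Hc2)
qed

lemma twocat_wdl_clo: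
  assumes "bar_wdl K A T S l"
  shows "twocat_wdl clo A (mc T) (clo_mult T) (clo_unit T) (mc S) (clo_mult S) (clo_unit S) (clo_law T S l)"
  by (rule twocat_wdl.intro[OF endo_twocat_clo]) (rule twocat_wdl_axioms.intro, rule is_wdl_clo[OF assms])

lemma cell_clo_fstD:
  assumes "endo_twocat.cell clo A x"
  shows "cell (fst x)" "Dom K (fst x) = fst (Dom clo x)" "Cod K (fst x) = fst (Cod clo x)"
    "snd (Cod clo x) \<odot> fst x = fst x" "fst x \<odot> snd (Dom clo x) = fst x"
  using assms by (simp_all add: cell_clo_iff clo_cell_iff)

context
  fixes T S :: "('a,'c) bmonad" and l :: 'c
  assumes law: "bar_wdl K A T S l"
begin

interpretation W: twocat_wdl clo A "mc T" "clo_mult T" "clo_unit T" "mc S" "clo_mult S" "clo_unit S" "clo_law T S l"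
  by (rule twocat_wdl_clo[OF law])

lemma fst_clo_composite_monad:
  "fst W.idem = wdl_idem K T S l" "fst W.mu_st = mmu (wdl_monad K T S l)" "fst W.eta_st = meta (wdl_monad K T S l)"
  unfolding W.idem_def W.mu_st_alt W.eta_st_def
  by (simp_all add: wdl_idem_def wdl_monad_def wl_def wr_def barC_def clo_mult_def clo_unit_def clo_law_def Let_def)

lemma wdl_idem_typing:
  "cell (wdl_idem K T S l)" "Dom K (wdl_idem K T S l) = fst (mc S) \<cdot> fst (mc T)"
  "Cod K (wdl_idem K T S l) = fst (mc S) \<cdot> fst (mc T)"
  and wdl_idem_absorb:
  "(snd (mc S) \<otimes> snd (mc T)) \<odot> wdl_idem K T S l = wdl_idem K T S l"
  "wdl_idem K T S l \<odot> (snd (mc S) \<otimes> snd (mc T)) = wdl_idem K T S l"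
  using cell_clo_fstD[OF W.idem_typing(1)] W.idem_typing(2,3) by (simp_all add: fst_clo_composite_monad barC_def)

lemma wdl_idem_alt:
  "wdl_idem K T S l = (snd (mc S) \<otimes> mmu T) \<odot> (l \<otimes> snd (mc T)) \<odot> (meta T \<otimes> snd (mc S) \<otimes> snd (mc T))"
proof -
  note mT = bar_monadD[OF bar_wdlD(1)[OF law]] and mS = bar_monadD[OF bar_wdlD(2)[OF law]]
  have "wdl_idem K T S l = fst W.idem'" using W.idem_eq_idem' fst_clo_composite_monad(1) by simp
  also have "\<dots> = (snd (mc S) \<otimes> mmu T) \<odot> (l \<otimes> snd (mc T)) \<odot> (meta T \<otimes> snd (mc S) \<otimes> snd (mc T))"
    unfolding W.idem'_def using mS mT by (simp add: barC_def clo_mult_def clo_unit_def clo_law_def clo_arr_iff)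
  finally show ?thesis .
qed

lemma bar_monad_wdl_monad: "bar_monad K A (wdl_monad K T S l)"
proof -
  let ?e = "wdl_idem K T S l" and ?m = "mmu (wdl_monad K T S l)" and ?h = "meta (wdl_monad K T S l)"
  note mT = bar_monadD[OF bar_wdlD(1)[OF law]] and mS = bar_monadD[OF bar_wdlD(2)[OF law]]
  note fst_eqs = fst_clo_composite_monad
  have mu_typing: "cell ?m" "Dom K ?m = fst (mc S) \<cdot> fst (mc T) \<cdot> fst (mc S) \<cdot> fst (mc T)"
    "Cod K ?m = fst (mc S) \<cdot> fst (mc T)"
    using cell_clo_fstD[OF W.mu_st_typing(1)] W.mu_st_typing(2,3) mS mT
    by (simp_all add: fst_eqs barC_def clo_arr_iff)
  have eta_typing: "cell ?h" "Dom K ?h = I" "Cod K ?h = fst (mc S) \<cdot> fst (mc T)"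
    using cell_clo_fstD[OF W.eta_st_typing(1)] W.eta_st_typing(2,3) by (simp_all add: fst_eqs barC_def barId_def)
  have laws: "?e \<odot> ?e = ?e" "?e \<odot> ?m = ?m" "?m \<odot> (?e \<otimes> ?e) = ?m" "?e \<odot> ?h = ?h"
    "?m \<odot> (?m \<otimes> ?e) = ?m \<odot> (?e \<otimes> ?m)" "?m \<odot> (?e \<otimes> ?h) = ?e" "?m \<odot> (?h \<otimes> ?e) = ?e"
    using W.idem_idem W.idem_mu_st W.mu_st_idem_idem W.idem_eta_st W.mu_st_assoc_idem W.mu_st_idem_eta
      W.mu_st_eta_idem
    by (metis fst_conv fst_eqs clo_simps(10,12))+
  have "arr (fst (mc S) \<cdot> fst (mc T))" using mS mT by (simp add: clo_arr_iff)
  then show ?thesis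
    unfolding bar_monad_def barHom_def barArr_def barC_def barId_def wl_def wr_def
    using wdl_idem_typing mu_typing eta_typing laws mS mT A
    by (auto simp: wdl_monad_def Let_def cell_def arr_def clo_arr_iff)
qed

end

definition "yang_baxter S0 S1 S2 a b c \<longleftrightarrow> Vc K (wr K a (mc S2)) (Vc K (wl K (mc S1) b) (wr K c (mc S0))) =
          Vc K (wl K (mc S0) c) (Vc K (wr K b (mc S1)) (wl K (mc S2) a))"

lemma twocat_wdl_triple_clo:
  assumes "bar_wdl K A S1 S0 a" "bar_wdl K A U S0 b" "bar_wdl K A U S1 c" "yang_baxter S0 S1 U a b c"
  shows "twocat_wdl_triple clo A (mc S0) (clo_mult S0) (clo_unit S0) (mc S1) (clo_mult S1) (clo_unit S1) (mc U) (clo_mult U) (clo_unit U) (clo_law S1 S0 a) (clo_law U S0 b) (clo_law U S1 c)"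
proof -
  note d1 = bar_wdlD[OF assms(1)] and d2 = bar_wdlD[OF assms(2)] and d3 = bar_wdlD[OF assms(3)]
  note m0 = bar_monadD[OF d1(2)] and m1 = bar_monadD[OF d1(1)] and m2 = bar_monadD[OF d2(1)]
  show ?thesis
    apply (rule twocat_wdl_triple.intro[OF endo_twocat_clo])
    apply (rule twocat_wdl_triple_axioms.intro)
       apply (rule is_wdl_clo[OF assms(1)])
      apply (rule is_wdl_clo[OF assms(2)])
     apply (rule is_wdl_clo[OF assms(3)])
    using assms(4) d1 d2 d3 m0 m1 m2 unfolding yang_baxter_def
    by (simp add: clo_law_def barC_def wl_def wr_def clo_arr_iff)
qed

context
  fixes S0 S1 U :: "('a,'c) bmonad" and a b c :: 'c
  assumes laws: "bar_wdl K A S1 S0 a" "bar_wdl K A U S0 b" "bar_wdl K A U S1 c"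
    and yb: "yang_baxter S0 S1 U a b c"
begin

interpretation W: twocat_wdl_triple clo A "mc S0" "clo_mult S0" "clo_unit S0" "mc S1" "clo_mult S1" "clo_unit S1"
    "mc U" "clo_mult U" "clo_unit U" "clo_law S1 S0 a" "clo_law U S0 b" "clo_law U S1 c"
  by (rule twocat_wdl_triple_clo[OF laws yb])

lemma fst_clo_lam:
  "fst W.lam = Vc K (wl K (mc S0) c) (Vc K (wr K b (mc S1)) (wl K (mc U) (wdl_idem K S1 S0 a)))"
  unfolding W.lam_def W.WA.idem_def
  by (simp add: wdl_idem_def wl_def wr_def barC_def clo_mult_def clo_unit_def clo_law_def Let_def)

lemma bar_wdl_C1_law:
  "bar_wdl K A U (wdl_monad K S1 S0 a)
     (Vc K (wl K (mc S0) c) (Vc K (wr K b (mc S1)) (wl K (mc U) (wdl_idem K S1 S0 a))))"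
proof -
  define E where "E = wdl_idem K S1 S0 a"
  define m where "m = mmu (wdl_monad K S1 S0 a)"
  define h where "h = meta (wdl_monad K S1 S0 a)"
  define L where "L = Vc K (wl K (mc S0) c) (Vc K (wr K b (mc S1)) (wl K (mc U) (wdl_idem K S1 S0 a)))"
  let ?u = "snd (mc U)"
  note m0 = bar_monadD[OF bar_wdlD(2)[OF laws(1)]] and m1 = bar_monadD[OF bar_wdlD(1)[OF laws(1)]]
    and m2 = bar_monadD[OF bar_wdlD(1)[OF laws(2)]]
  have fst_eqs: "fst W.idem_st = E" "fst W.WA.mu_st = m" "fst W.WA.eta_st = h" "fst W.lam = L"
    using fst_clo_composite_monad[OF laws(1)] fst_clo_lam by (simp_all add: E_def m_def h_def L_def)
  have L_typing: "cell L" "Dom K L = fst (mc U) \<cdot> fst (mc S0) \<cdot> fst (mc S1)"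
    "Cod K L = (fst (mc S0) \<cdot> fst (mc S1)) \<cdot> fst (mc U)"
    using cell_clo_fstD[OF W.lam_typing(1)] W.lam_typing(2,3) m0 m1 m2
    by (simp_all add: fst_eqs barC_def clo_arr_iff)
  have E_typing: "cell E" "cell h"
    using cell_clo_fstD(1)[OF W.WA.idem_typing(1)] cell_clo_fstD(1)[OF W.WA.eta_st_typing(1)]
    by (simp_all add: fst_eqs)
  have absorb_left: "(E \<otimes> ?u) \<odot> L = L"
    using W.idem_st_lam[THEN arg_cong[where f=fst]] fst_eqs by simp
  have absorb_right: "L \<odot> (?u \<otimes> E) = L"
    using W.lam_idem_st[THEN arg_cong[where f=fst]] fst_eqs by simp
  have mult_U: "L \<odot> (mmu U \<otimes> E) = (E \<otimes> mmu U) \<odot> (L \<otimes> ?u) \<odot> (?u \<otimes> L)"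
    using W.lam_mult_u[THEN arg_cong[where f=fst]] fst_eqs by (simp add: clo_mult_def)
  have mult_st: "L \<odot> (?u \<otimes> m) = (m \<otimes> ?u) \<odot> (E \<otimes> L) \<odot> (L \<otimes> E)"
    using W.lam_mult_st[THEN arg_cong[where f=fst]] fst_eqs by simp
  have unit_U: "L \<odot> (meta U \<otimes> E) = (m \<otimes> ?u) \<odot> (E \<otimes> L) \<odot> ((E \<otimes> ?u) \<otimes> h) \<odot> (E \<otimes> meta U)"
    using W.lam_unit_u[THEN arg_cong[where f=fst]] fst_eqs E_typing m2
    by (simp add: clo_unit_def clo_arr_iff)
  have unit_st: "L \<odot> (?u \<otimes> h) = (E \<otimes> mmu U) \<odot> (L \<otimes> ?u) \<odot> (meta U \<otimes> E \<otimes> ?u) \<odot> (h \<otimes> ?u)"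
    using W.lam_unit_st[THEN arg_cong[where f=fst]] fst_eqs by (simp add: clo_mult_def clo_unit_def)
  have mc: "mc (wdl_monad K S1 S0 a) = (fst (mc S0) \<cdot> fst (mc S1), E)"
    and mm: "mmu (wdl_monad K S1 S0 a) = m" "meta (wdl_monad K S1 S0 a) = h"
    by (simp_all add: wdl_monad_def Let_def E_def m_def h_def)
  have "L \<in> Cell K" using L_typing(1) cell_def by blast
  then have "bar_wdl K A U (wdl_monad K S1 S0 a) L"
    unfolding bar_wdl_def Let_def mc mm barHom_def barC_def wl_def wr_def fst_conv snd_conv
    using m2 bar_monad_wdl_monad[OF laws(1)] bar_wdlD(1)[OF laws(2)] L_typing(2,3)
      absorb_left absorb_right mult_U mult_st unit_U unit_st by blast
  then show ?thesis by (simp add: L_def)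
qed

end

lemma twocat_wdl_quad_clo:
  assumes w: "bar_wdl K A S1 S0 a" "bar_wdl K A U S0 b" "bar_wdl K A U S1 c"
    "bar_wdl K A Vm S0 bv" "bar_wdl K A Vm S1 cv" "bar_wdl K A Vm U d"
  and y: "yang_baxter S0 S1 U a b c" "yang_baxter S0 S1 Vm a bv cv" "yang_baxter S0 U Vm b bv d" "yang_baxter S1 U Vm c cv d"
  shows "twocat_wdl_quad clo A (mc S0) (clo_mult S0) (clo_unit S0) (mc S1) (clo_mult S1) (clo_unit S1) (mc U) (clo_mult U) (clo_unit U) (mc Vm) (clo_mult Vm) (clo_unit Vm)
     (clo_law S1 S0 a) (clo_law U S0 b) (clo_law U S1 c) (clo_law Vm S0 bv) (clo_law Vm S1 cv) (clo_law Vm U d)"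
proof -
  note d1 = bar_wdlD[OF w(1)] and d2 = bar_wdlD[OF w(2)] and d3 = bar_wdlD[OF w(3)]
   and d4 = bar_wdlD[OF w(4)] and d5 = bar_wdlD[OF w(5)] and d6 = bar_wdlD[OF w(6)]
  note m0 = bar_monadD[OF d1(2)] and m1 = bar_monadD[OF d1(1)] and m2 = bar_monadD[OF d2(1)] and m3 = bar_monadD[OF d4(1)]
  show ?thesis
    apply (rule twocat_wdl_quad.intro[OF endo_twocat_clo])
    apply (rule twocat_wdl_quad_axioms.intro)
    apply (rule is_wdl_clo[OF w(1)]) apply (rule is_wdl_clo[OF w(2)]) apply (rule is_wdl_clo[OF w(3)])
    apply (rule is_wdl_clo[OF w(4)]) apply (rule is_wdl_clo[OF w(5)]) apply (rule is_wdl_clo[OF w(6)])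
    using y d1 d2 d3 d4 d5 d6 m0 m1 m2 m3 unfolding yang_baxter_def
    by (simp_all add: clo_law_def barC_def wl_def wr_def clo_arr_iff)
qed

lemma yang_baxter_C1_law:
  assumes w: "bar_wdl K A S1 S0 a" "bar_wdl K A U S0 b" "bar_wdl K A U S1 c"
    "bar_wdl K A Vm S0 bv" "bar_wdl K A Vm S1 cv" "bar_wdl K A Vm U d"
  and y: "yang_baxter S0 S1 U a b c" "yang_baxter S0 S1 Vm a bv cv" "yang_baxter S0 U Vm b bv d" "yang_baxter S1 U Vm c cv d"
  shows "yang_baxter (wdl_monad K S1 S0 a) U Vm
     (Vc K (wl K (mc S0) c) (Vc K (wr K b (mc S1)) (wl K (mc U) (wdl_idem K S1 S0 a))))
     (Vc K (wl K (mc S0) cv) (Vc K (wr K bv (mc S1)) (wl K (mc Vm) (wdl_idem K S1 S0 a)))) d"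
proof -
  interpret W: twocat_wdl_quad clo A "mc S0" "clo_mult S0" "clo_unit S0" "mc S1" "clo_mult S1" "clo_unit S1"
      "mc U" "clo_mult U" "clo_unit U" "mc Vm" "clo_mult Vm" "clo_unit Vm" "clo_law S1 S0 a"
      "clo_law U S0 b" "clo_law U S1 c" "clo_law Vm S0 bv" "clo_law Vm S1 cv" "clo_law Vm U d"
    by (rule twocat_wdl_quad_clo[OF w y])
  show ?thesis
    using W.lam_yang_baxter[THEN arg_cong[where f=fst]] fst_clo_composite_monad(1)[OF w(1)]
      fst_clo_lam[OF w(1,2,3) y(1)] fst_clo_lam[OF w(1,4,5) y(2)]
    unfolding yang_baxter_def by (simp add: wl_def wr_def wdl_monad_def Let_def clo_law_def)
qed

lemma Wdl_obj_iff: "wA D = A \<Longrightarrow> Wdl_obj K D \<longleftrightarrow> (\<forall>i\<le>wm D. bar_monad K A (wS D i)) \<and>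
     (\<forall>i j. i < j \<and> j \<le> wm D \<longrightarrow> bar_wdl K A (wS D j) (wS D i) (wL D i j)) \<and>
     (\<forall>i j k. i < j \<and> j < k \<and> k \<le> wm D \<longrightarrow> yang_baxter (wS D i) (wS D j) (wS D k) (wL D i j) (wL D i k) (wL D j k))"
  unfolding Wdl_obj_def yang_baxter_def Let_def by simp

lemma C1_simps: "wA (C1 K D) = wA D" "wm (C1 K D) = wm D - 1"
  "wS (C1 K D) i = (if i = 0 then wdl_monad K (wS D 1) (wS D 0) (wL D 0 1) else wS D (Suc i))"
  "wL (C1 K D) i j = (if i = 0 then Vc K (wl K (mc (wS D 0)) (wL D 1 (Suc j)))
                   (Vc K (wr K (wL D 0 (Suc j)) (mc (wS D 1))) (wl K (mc (wS D (Suc j))) (wdl_idem K (wS D 1) (wS D 0) (wL D 0 1))))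
               else wL D (Suc i) (Suc j))"
  by (simp_all add: C1_def Let_def)

lemma Wdl_obj_C1:
  assumes D: "Wdl_obj K D" "wA D = A" and m: "1 \<le> wm D"
  shows "Wdl_obj K (C1 K D)"
proof -
  let ?S = "wS D" and ?L = "wL D"
  have M: "\<And>i. i \<le> wm D \<Longrightarrow> bar_monad K A (?S i)"
    and Wd: "\<And>i j. i < j \<Longrightarrow> j \<le> wm D \<Longrightarrow> bar_wdl K A (?S j) (?S i) (?L i j)"
    and YB: "\<And>i j k. i < j \<Longrightarrow> j < k \<Longrightarrow> k \<le> wm D \<Longrightarrow>
      yang_baxter (?S i) (?S j) (?S k) (?L i j) (?L i k) (?L j k)"
    using D by (auto simp: Wdl_obj_iff)
  have "bar_monad K A (wS (C1 K D) i)" if "i \<le> wm (C1 K D)" for i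
    using that M[of "Suc i"] bar_monad_wdl_monad[OF Wd[of 0 1]] m by (simp add: C1_simps)
  moreover have "bar_wdl K A (wS (C1 K D) j) (wS (C1 K D) i) (wL (C1 K D) i j)"
    if "i < j" "j \<le> wm (C1 K D)" for i j
  proof (cases "i = 0")
    case True
    have "bar_wdl K A (?S (Suc j)) (wdl_monad K (?S 1) (?S 0) (?L 0 1))
        (Vc K (wl K (mc (?S 0)) (?L 1 (Suc j))) (Vc K (wr K (?L 0 (Suc j)) (mc (?S 1)))
          (wl K (mc (?S (Suc j))) (wdl_idem K (?S 1) (?S 0) (?L 0 1)))))"
      by (rule bar_wdl_C1_law) (use that m in \<open>auto intro!: Wd YB simp: C1_simps\<close>)
    then show ?thesis using True that by (simp add: C1_simps)
  qed (use that Wd[of "Suc i" "Suc j"] in \<open>simp add: C1_simps\<close>)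
  moreover have "yang_baxter (wS (C1 K D) i) (wS (C1 K D) j) (wS (C1 K D) k)
      (wL (C1 K D) i j) (wL (C1 K D) i k) (wL (C1 K D) j k)"
    if "i < j" "j < k" "k \<le> wm (C1 K D)" for i j k
  proof (cases "i = 0")
    case True
    have "yang_baxter (wdl_monad K (?S 1) (?S 0) (?L 0 1)) (?S (Suc j)) (?S (Suc k))
        (Vc K (wl K (mc (?S 0)) (?L 1 (Suc j))) (Vc K (wr K (?L 0 (Suc j)) (mc (?S 1)))
          (wl K (mc (?S (Suc j))) (wdl_idem K (?S 1) (?S 0) (?L 0 1)))))
        (Vc K (wl K (mc (?S 0)) (?L 1 (Suc k))) (Vc K (wr K (?L 0 (Suc k)) (mc (?S 1)))
          (wl K (mc (?S (Suc k))) (wdl_idem K (?S 1) (?S 0) (?L 0 1)))))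
        (?L (Suc j) (Suc k))"
      by (rule yang_baxter_C1_law) (use that m in \<open>auto intro!: Wd YB simp: C1_simps\<close>)
    then show ?thesis using True that by (simp add: C1_simps)
  qed (use that YB[of "Suc i" "Suc j" "Suc k"] in \<open>simp add: C1_simps\<close>)
  ultimately show ?thesis using D(2) by (simp add: Wdl_obj_iff C1_simps)
qed

section \<open>Composites of a sequence of monads\<close>

lemma comp_list_Cons: "clo_arr v \<Longrightarrow> comp_list K A (v#xs) = barC K v (comp_list K A xs)"
  by (cases xs) (auto simp: barC_barId)
lemma clo_arr_comp_list: "\<forall>x\<in>set xs. clo_arr x \<Longrightarrow> clo_arr (comp_list K A xs)"
  by (induction xs) (auto simp: clo_arr_barId clo_arr_barC comp_list_Cons)
lemma comp_list_snoc: "\<forall>x\<in>set xs. clo_arr x \<Longrightarrow> clo_arr v \<Longrightarrow> comp_list K A (xs @ [v]) = barC K (comp_list K A xs) v"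
proof (induction xs)
  case Nil then show ?case by (simp add: barC_barId)
next
  case (Cons x xs)
  then have "comp_list K A ((x # xs) @ [v]) = barC K x (comp_list K A (xs @ [v]))"
    using comp_list_Cons[of x "xs @ [v]"] by simp
  also have "\<dots> = barC K x (barC K (comp_list K A xs) v)" using Cons by simp
  also have "\<dots> = barC K (barC K x (comp_list K A xs)) v" using Cons by (simp add: barC_assoc clo_arr_comp_list)
  also have "\<dots> = barC K (comp_list K A (x # xs)) v" using Cons by (simp add: comp_list_Cons)
  finally show ?case .
qed

lemma lbar_step_absorb:
  assumes s: "cell ws" "Dom K ws = W" "Cod K ws = W" "arr W"
  and b: "cell lb" "Dom K lb = W" "Cod K lb = W" "ws \<odot> lb = lb" "lb \<odot> lb = lb"
  and t: "cell e" "Dom K e = t" "Cod K e = t" "e \<odot> e = e" "arr t"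
  and m: "cell mt" "Dom K mt = t \<cdot> t" "Cod K mt = t" "e \<odot> mt = mt" "mt \<odot> (e \<otimes> e) = mt"
  and h: "cell ht" "Dom K ht = I" "Cod K ht = t" "e \<odot> ht = ht"
  and r: "cell R" "Dom K R = t \<cdot> W" "Cod K R = W \<cdot> t" "(lb \<otimes> e) \<odot> R \<odot> (e \<otimes> lb) = R \<odot> (e \<otimes> lb)"
  shows "(lb \<otimes> mt) \<odot> ((R \<odot> (e \<otimes> lb)) \<otimes> e) \<odot> (ht \<otimes> lb \<otimes> e) = (ws \<otimes> mt) \<odot> (R \<otimes> e) \<odot> (ht \<otimes> ws \<otimes> e) \<odot> (lb \<otimes> e)"
proof -
  have 1: "lb \<otimes> mt = (ws \<otimes> mt) \<odot> (lb \<otimes> e \<otimes> e)" using interchange_fuse[of ws lb mt "e \<otimes> e"] s b t m by simp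
  have 2: "(lb \<otimes> e \<otimes> e) \<odot> ((R \<odot> (e \<otimes> lb)) \<otimes> e) = (R \<odot> (e \<otimes> lb)) \<otimes> e"
    using interchange_fuse[of "lb \<otimes> e" "R \<odot> (e \<otimes> lb)" e e] s b t r by simp
  have 3: "(R \<odot> (e \<otimes> lb)) \<otimes> e = (R \<otimes> e) \<odot> (e \<otimes> lb \<otimes> e)"
    using interchange_fuse[of R "e \<otimes> lb" e e] s b t r by simp
  have 4: "(e \<otimes> lb \<otimes> e) \<odot> (ht \<otimes> lb \<otimes> e) = ht \<otimes> lb \<otimes> e"
    using interchange_fuse[of e ht "lb \<otimes> e" "lb \<otimes> e"] interchange_fuse[of lb lb e e] s b t h by simp
  have 5: "ht \<otimes> lb \<otimes> e = (ht \<otimes> ws \<otimes> e) \<odot> (lb \<otimes> e)"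
    using interchange_fuse[of ht "Id2 K I" "ws \<otimes> e" "lb \<otimes> e"] interchange_fuse[of ws lb e e] s b t h by simp
  have "(lb \<otimes> mt) \<odot> ((R \<odot> (e \<otimes> lb)) \<otimes> e) \<odot> (ht \<otimes> lb \<otimes> e)
     = (ws \<otimes> mt) \<odot> ((lb \<otimes> e \<otimes> e) \<odot> ((R \<odot> (e \<otimes> lb)) \<otimes> e)) \<odot> (ht \<otimes> lb \<otimes> e)"
    unfolding 1 using s b t m r h by simp
  also have "\<dots> = (ws \<otimes> mt) \<odot> (R \<otimes> e) \<odot> ((e \<otimes> lb \<otimes> e) \<odot> (ht \<otimes> lb \<otimes> e))"
    unfolding 2 unfolding 3 using s b t m r h by simp
  also have "\<dots> = (ws \<otimes> mt) \<odot> (R \<otimes> e) \<odot> (ht \<otimes> ws \<otimes> e) \<odot> (lb \<otimes> e)"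
    unfolding 4 unfolding 5 using s b t m r h by simp
  finally show ?thesis .
qed

lemma law_step_absorb:
  assumes s: "cell ws" "Dom K ws = W" "Cod K ws = W" "arr W"
  and b: "cell lb" "Dom K lb = W" "Cod K lb = W" "ws \<odot> lb = lb"
  and t: "cell e" "Dom K e = t" "Cod K e = t" "e \<odot> e = e" "arr t"
  and u: "cell f" "Dom K f = u" "Cod K f = u" "f \<odot> f = f" "arr u"
  and l: "cell Lk" "Dom K Lk = u \<cdot> t" "Cod K Lk = t \<cdot> u" "Lk \<odot> (f \<otimes> e) = Lk"
  and r: "cell R" "Dom K R = u \<cdot> W" "Cod K R = W \<cdot> u" "(lb \<otimes> f) \<odot> R \<odot> (f \<otimes> lb) = R \<odot> (f \<otimes> lb)"
  and p: "cell lb'" "Dom K lb' = W \<cdot> t" "Cod K lb' = W \<cdot> t" "(lb \<otimes> e) \<odot> lb' = lb'"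
  shows "(lb \<otimes> Lk) \<odot> ((R \<odot> (f \<otimes> lb)) \<otimes> e) \<odot> (f \<otimes> lb') = (ws \<otimes> Lk) \<odot> (R \<otimes> e) \<odot> (f \<otimes> lb')"
proof -
  have 1: "lb \<otimes> Lk = (ws \<otimes> Lk) \<odot> (lb \<otimes> f \<otimes> e)" using interchange_fuse[of ws lb Lk "f \<otimes> e"] s b t u l by simp
  have 2: "(lb \<otimes> f \<otimes> e) \<odot> ((R \<odot> (f \<otimes> lb)) \<otimes> e) = (R \<odot> (f \<otimes> lb)) \<otimes> e"
    using interchange_fuse[of "lb \<otimes> f" "R \<odot> (f \<otimes> lb)" e e] s b t u r by simp
  have 3: "(R \<odot> (f \<otimes> lb)) \<otimes> e = (R \<otimes> e) \<odot> (f \<otimes> lb \<otimes> e)"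
    using interchange_fuse[of R "f \<otimes> lb" e e] s b t u r by simp
  have 4: "(f \<otimes> lb \<otimes> e) \<odot> (f \<otimes> lb') = f \<otimes> lb'"
    using interchange_fuse[of f f "lb \<otimes> e" lb'] s b t u p by simp
  have "(lb \<otimes> Lk) \<odot> ((R \<odot> (f \<otimes> lb)) \<otimes> e) \<odot> (f \<otimes> lb') = (ws \<otimes> Lk) \<odot> ((lb \<otimes> f \<otimes> e) \<odot> ((R \<odot> (f \<otimes> lb)) \<otimes> e)) \<odot> (f \<otimes> lb')"
    unfolding 1 using s b t u l r p by simp
  also have "\<dots> = (ws \<otimes> Lk) \<odot> (R \<otimes> e) \<odot> ((f \<otimes> lb \<otimes> e) \<odot> (f \<otimes> lb'))"
    unfolding 2 unfolding 3 using s b t u l r p by simp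
  also have "\<dots> = (ws \<otimes> Lk) \<odot> (R \<otimes> e) \<odot> (f \<otimes> lb')" unfolding 4 ..
  finally show ?thesis .
qed

end

locale monad_seq = endo_twocat +
  fixes S and L and N :: nat
  assumes monads: "\<And>i. i \<le> N \<Longrightarrow> bar_monad K A (S i)"
    and laws: "\<And>i j. i < j \<Longrightarrow> j \<le> N \<Longrightarrow> bar_wdl K A (S j) (S i) (L i j)"
    and N1: "1 \<le> N"
begin

lemma clo_arr_mc: "i \<le> N \<Longrightarrow> clo_arr (mc (S i))"
  using bar_monadD(1)[OF monads] .

lemma law01: "bar_wdl K A (S 1) (S 0) (L 0 1)"
  using laws[of 0 1] N1 by simp

abbreviation "sg \<equiv> seg K A S"

lemma clo_arr_seg: "a \<le> b \<Longrightarrow> b \<le> Suc N \<Longrightarrow> clo_arr (sg a b)"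
  unfolding seg_def by (rule clo_arr_comp_list) (auto intro: clo_arr_mc)
lemma seg_empty[simp]: "sg a a = barId K A" by (simp add: seg_def)
lemma seg_snoc: "a \<le> b \<Longrightarrow> b \<le> N \<Longrightarrow> sg a (Suc b) = barC K (sg a b) (mc (S b))"
  unfolding seg_def by (simp add: comp_list_snoc clo_arr_mc)
lemma seg_Cons: "a < b \<Longrightarrow> b \<le> Suc N \<Longrightarrow> sg a b = barC K (mc (S a)) (sg (Suc a) b)"
  unfolding seg_def by (simp add: upt_conv_Cons comp_list_Cons clo_arr_mc)

lemma arr_fst_mc[simp]: "i \<le> N \<Longrightarrow> arr (fst (mc (S i)))" using clo_arr_mc by (simp add: clo_arr_iff)
lemma cell_snd_mc[simp]: "i \<le> N \<Longrightarrow> cell (snd (mc (S i)))" "i \<le> N \<Longrightarrow> Dom K (snd (mc (S i))) = fst (mc (S i))"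
  "i \<le> N \<Longrightarrow> Cod K (snd (mc (S i))) = fst (mc (S i))" "i \<le> N \<Longrightarrow> snd (mc (S i)) \<odot> snd (mc (S i)) = snd (mc (S i))"
  using clo_arr_mc by (simp_all add: clo_arr_iff)
lemma arr_fst_seg[simp]: "a \<le> b \<Longrightarrow> b \<le> Suc N \<Longrightarrow> arr (fst (sg a b))" using clo_arr_seg by (simp add: clo_arr_iff)
lemma cell_snd_seg[simp]: "a \<le> b \<Longrightarrow> b \<le> Suc N \<Longrightarrow> cell (snd (sg a b))" "a \<le> b \<Longrightarrow> b \<le> Suc N \<Longrightarrow> Dom K (snd (sg a b)) = fst (sg a b)"
  "a \<le> b \<Longrightarrow> b \<le> Suc N \<Longrightarrow> Cod K (snd (sg a b)) = fst (sg a b)"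
  "a \<le> b \<Longrightarrow> b \<le> Suc N \<Longrightarrow> snd (sg a b) \<odot> snd (sg a b) = snd (sg a b)"
  using clo_arr_seg by (simp_all add: clo_arr_iff)
lemma law_typing[simp]: "i < j \<Longrightarrow> j \<le> N \<Longrightarrow> cell (L i j)" "i < j \<Longrightarrow> j \<le> N \<Longrightarrow> Dom K (L i j) = fst (mc (S j)) \<cdot> fst (mc (S i))"
  "i < j \<Longrightarrow> j \<le> N \<Longrightarrow> Cod K (L i j) = fst (mc (S i)) \<cdot> fst (mc (S j))" using bar_wdlD(3-5)[OF laws] by simp_all

lemma fst_seg_snoc: "a \<le> b \<Longrightarrow> b \<le> N \<Longrightarrow> fst (sg a (Suc b)) = fst (sg a b) \<cdot> fst (mc (S b))"
  by (simp add: seg_snoc barC_def)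
lemma fst_seg_Cons: "a < b \<Longrightarrow> b \<le> Suc N \<Longrightarrow> fst (sg a b) = fst (mc (S a)) \<cdot> fst (sg (Suc a) b)"
  by (simp add: seg_Cons[of a b] barC_def)
lemma snd_seg_snoc: "a \<le> b \<Longrightarrow> b \<le> N \<Longrightarrow> snd (sg a (Suc b)) = snd (sg a b) \<otimes> snd (mc (S b))"
  by (simp add: seg_snoc barC_def)
lemma barId_simps[simp]: "fst (barId K A) = I" "snd (barId K A) = Id2 K I" by (simp_all add: barId_def)

lemma fst_seg_append: "a \<le> b \<Longrightarrow> b \<le> c \<Longrightarrow> c \<le> Suc N \<Longrightarrow> fst (sg a b) \<cdot> fst (sg b c) = fst (sg a c)"
proof (induction c rule: nat_induct)
  case 0 then show ?case by simp
next
  case (Suc c)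
  show ?case
  proof (cases "b = Suc c")
    case True then show ?thesis using Suc by simp
  next
    case False
    then have bc: "b \<le> c" using Suc by simp
    have ih: "fst (sg a b) \<cdot> fst (sg b c) = fst (sg a c)" using Suc bc by simp
    have "fst (sg a b) \<cdot> fst (sg b (Suc c)) = fst (sg a b) \<cdot> (fst (sg b c) \<cdot> fst (mc (S c)))"
      using bc Suc by (simp add: fst_seg_snoc)
    also have "\<dots> = (fst (sg a b) \<cdot> fst (sg b c)) \<cdot> fst (mc (S c))"
      by (rule Hc1_assoc[symmetric]) (use bc Suc in simp_all)
    also have "\<dots> = fst (sg a c) \<cdot> fst (mc (S c))" unfolding ih ..
    also have "\<dots> = fst (sg a (Suc c))" using bc Suc by (simp add: fst_seg_snoc)
    finally show ?thesis .
  qed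
qed

abbreviation "RT \<equiv> Rterm K A S L"
abbreviation "PC \<equiv> pushc K A S L"

lemma Rterm_eq: "RT l k i = snd (sg 0 i) \<otimes> L i l \<otimes> snd (sg (Suc i) k)" by (simp add: Rterm_def wl_def wr_def)

lemma Rterm_typing: assumes "i < l" "l \<le> N" "i < k" "k \<le> Suc N"
  shows "cell (RT l k i)" "Dom K (RT l k i) = fst (sg 0 i) \<cdot> fst (mc (S l)) \<cdot> fst (mc (S i)) \<cdot> fst (sg (Suc i) k)"
    "Cod K (RT l k i) = fst (sg 0 i) \<cdot> fst (mc (S i)) \<cdot> fst (mc (S l)) \<cdot> fst (sg (Suc i) k)"
  using assms by (simp_all add: Rterm_eq)

lemma pushc_typing: "1 \<le> j \<Longrightarrow> j \<le> k \<Longrightarrow> j \<le> l \<Longrightarrow> l \<le> N \<Longrightarrow> k \<le> Suc N \<Longrightarrow>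
   cell (PC l k j) \<and> Dom K (PC l k j) = fst (mc (S l)) \<cdot> fst (sg 0 k) \<and> Cod K (PC l k j) = fst (sg 0 j) \<cdot> fst (mc (S l)) \<cdot> fst (sg j k)"
proof (induction j rule: nat_induct)
  case 0 then show ?case by simp
next
  case (Suc j)
  show ?case
  proof (cases j)
    case 0
    have "fst (sg 0 k) = fst (mc (S 0)) \<cdot> fst (sg (Suc 0) k)" using Suc 0 by (simp add: fst_seg_Cons)
    moreover have "fst (sg 0 1) = fst (mc (S 0))" using Suc 0 by (simp add: fst_seg_snoc)
    ultimately show ?thesis using Suc 0 Rterm_typing[of 0 l k] by (simp add: eval_nat_numeral)
  next
    case (Suc j')
    then have IH: "cell (PC l k j) \<and> Dom K (PC l k j) = fst (mc (S l)) \<cdot> fst (sg 0 k) \<and> Cod K (PC l k j) = fst (sg 0 j) \<cdot> fst (mc (S l)) \<cdot> fst (sg j k)"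
      using Suc.IH Suc.prems by simp
    have c: "Cod K (PC l k j) = Dom K (RT l k j)"
    proof -
      have "fst (sg j k) = fst (mc (S j)) \<cdot> fst (sg (Suc j) k)" using Suc.prems by (simp add: fst_seg_Cons)
      then show ?thesis using IH Suc.prems Rterm_typing[of j l k] by simp
    qed
    have p: "PC l k (Suc j) = RT l k j \<odot> PC l k j" using Suc by simp
    have "fst (sg 0 (Suc j)) = fst (sg 0 j) \<cdot> fst (mc (S j))" using Suc.prems by (simp add: fst_seg_snoc)
    then show ?thesis unfolding p using IH c Suc.prems Rterm_typing[of j l k] by simp
  qed
qed

lemma Rterm_seg_snoc: "i < k \<Longrightarrow> i < l \<Longrightarrow> l \<le> N \<Longrightarrow> k \<le> N \<Longrightarrow> RT l (Suc k) i = RT l k i \<otimes> snd (mc (S k))"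
  by (simp add: Rterm_eq snd_seg_snoc)

lemma pushc_seg_snoc: "1 \<le> j \<Longrightarrow> j \<le> k \<Longrightarrow> j \<le> l \<Longrightarrow> l \<le> N \<Longrightarrow> k \<le> N \<Longrightarrow> PC l (Suc k) j = PC l k j \<otimes> snd (mc (S k))"
proof (induction j rule: nat_induct)
  case 0 then show ?case by simp
next
  case (Suc j)
  show ?case
  proof (cases j)
    case 0 then show ?thesis using Suc Rterm_seg_snoc[of 0 k l] by simp
  next
    case (Suc j')
    then have IH: "PC l (Suc k) j = PC l k j \<otimes> snd (mc (S k))" using Suc.IH Suc.prems by simp
    have t1: "cell (PC l k j)" "Cod K (PC l k j) = Dom K (RT l k j)"
      using pushc_typing[of j k l] Rterm_typing[of j l k] Suc Suc.prems fst_seg_Cons[of j k] by auto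
    have "PC l (Suc k) (Suc j) = RT l (Suc k) j \<odot> PC l (Suc k) j" using Suc by simp
    also have "\<dots> = (RT l k j \<otimes> snd (mc (S k))) \<odot> (PC l k j \<otimes> snd (mc (S k)))" using IH Rterm_seg_snoc[of j k l] Suc.prems by simp
    also have "\<dots> = (RT l k j \<odot> PC l k j) \<otimes> snd (mc (S k))"
      using interchange_fuse[of "RT l k j" "PC l k j" "snd (mc (S k))" "snd (mc (S k))"] t1 Rterm_typing[of j l k] Suc.prems by simp
    finally show ?thesis using Suc by simp
  qed
qed

lemma mmu_meta_typing[simp]: "i \<le> N \<Longrightarrow> cell (mmu (S i))" "i \<le> N \<Longrightarrow> Dom K (mmu (S i)) = fst (mc (S i)) \<cdot> fst (mc (S i))"
  "i \<le> N \<Longrightarrow> Cod K (mmu (S i)) = fst (mc (S i))" "i \<le> N \<Longrightarrow> cell (meta (S i))" "i \<le> N \<Longrightarrow> Dom K (meta (S i)) = I"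
  "i \<le> N \<Longrightarrow> Cod K (meta (S i)) = fst (mc (S i))"
  using bar_monadD[OF monads] by simp_all

abbreviation "E0 \<equiv> wdl_idem K (S 1) (S 0) (L 0 1)"
lemma E0_typing[simp]: "cell E0" "Dom K E0 = fst (sg 0 2)" "Cod K E0 = fst (sg 0 2)"
proof -
  have "clo_arr (mc (wdl_monad K (S 1) (S 0) (L 0 1)))" using bar_monadD(1)[OF bar_monad_wdl_monad[OF law01]] .
  moreover have "fst (sg 0 2) = fst (mc (S 0)) \<cdot> fst (mc (S 1))"
    using fst_seg_snoc[of 0 1] fst_seg_snoc[of 0 0] N1 by (simp add: eval_nat_numeral)
  ultimately show "cell E0" "Dom K E0 = fst (sg 0 2)" "Cod K E0 = fst (sg 0 2)"
    by (simp_all add: clo_arr_iff wdl_monad_def Let_def)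
qed

lemma E0_typing_Suc[simp]: "cell (wdl_idem K (S (Suc 0)) (S 0) (L 0 (Suc 0)))"
  "Dom K (wdl_idem K (S (Suc 0)) (S 0) (L 0 (Suc 0))) = fst (sg 0 (Suc (Suc 0)))"
  "Cod K (wdl_idem K (S (Suc 0)) (S 0) (L 0 (Suc 0))) = fst (sg 0 (Suc (Suc 0)))"
  using E0_typing unfolding One_nat_def numeral_2_eq_2 by simp_all

lemma fst_seg_single: "l \<le> N \<Longrightarrow> fst (sg l (Suc l)) = fst (mc (S l))" using fst_seg_snoc[of l l] by simp

abbreviation "OV \<equiv> ovl K A S L"
lemma ovl_eq: "OV l = (snd (sg 0 l) \<otimes> mmu (S l)) \<odot> PC l (Suc l) l \<odot> (meta (S l) \<otimes> snd (sg 0 (Suc l)))"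
  by (simp add: ovl_def wl_def wr_def)
lemma ovl_typing: assumes "1 \<le> l" "l \<le> N" shows "cell (OV l)" "Dom K (OV l) = fst (sg 0 (Suc l))" "Cod K (OV l) = fst (sg 0 (Suc l))"
proof -
  note p = pushc_typing[of l "Suc l" l]
  have w: "fst (sg 0 (Suc l)) = fst (sg 0 l) \<cdot> fst (mc (S l))" using assms by (simp add: fst_seg_snoc)
  show "cell (OV l)" "Dom K (OV l) = fst (sg 0 (Suc l))" "Cod K (OV l) = fst (sg 0 (Suc l))"
    unfolding ovl_eq using p assms w fst_seg_single[of l] by simp_all
qed

abbreviation "LT \<equiv> lbterm K A S L"
abbreviation "LA \<equiv> lbaux K A S L"
definition "lbfactor j = (if j = 1 then E0 else OV j)"
lemma lbfactor_typing: "1 \<le> j \<Longrightarrow> j \<le> N \<Longrightarrow> cell (lbfactor j) \<and> Dom K (lbfactor j) = fst (sg 0 (Suc j)) \<and> Cod K (lbfactor j) = fst (sg 0 (Suc j))"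
  by (cases "j = 1") (auto simp: lbfactor_def ovl_typing)
lemma lbterm_eq: "LT m j = lbfactor j \<otimes> snd (sg (Suc j) (Suc m))"
  by (simp add: lbterm_def lbfactor_def wr_def eval_nat_numeral)

lemma lbterm_typing: "1 \<le> j \<Longrightarrow> j \<le> m \<Longrightarrow> m \<le> N \<Longrightarrow> cell (LT m j) \<and> Dom K (LT m j) = fst (sg 0 (Suc m)) \<and> Cod K (LT m j) = fst (sg 0 (Suc m))"
  unfolding lbterm_eq using lbfactor_typing[of j] fst_seg_append[of 0 "Suc j" "Suc m"] by simp

lemma lbaux_typing: "1 \<le> j \<Longrightarrow> j \<le> m \<Longrightarrow> m \<le> N \<Longrightarrow> cell (LA m j) \<and> Dom K (LA m j) = fst (sg 0 (Suc m)) \<and> Cod K (LA m j) = fst (sg 0 (Suc m))"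
proof (induction j rule: nat_induct)
  case 0 then show ?case by simp
next
  case (Suc j)
  show ?case
  proof (cases j)
    case 0 then show ?thesis using Suc lbterm_typing[of 1 m] by simp
  next
    case (Suc j')
    then have "LA m (Suc j) = LT m (Suc j) \<odot> LA m j" by simp
    then show ?thesis using Suc.IH Suc.prems lbterm_typing[of "Suc j" m] \<open>j = Suc j'\<close> by simp
  qed
qed

lemma lbterm_seg_snoc: "1 \<le> j \<Longrightarrow> j \<le> m \<Longrightarrow> Suc m \<le> N \<Longrightarrow> LT (Suc m) j = LT m j \<otimes> snd (mc (S (Suc m)))"
  unfolding lbterm_eq using lbfactor_typing[of j] by (simp add: snd_seg_snoc)

lemma lbaux_seg_snoc: "1 \<le> j \<Longrightarrow> j \<le> m \<Longrightarrow> Suc m \<le> N \<Longrightarrow> LA (Suc m) j = LA m j \<otimes> snd (mc (S (Suc m)))"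
proof (induction j rule: nat_induct)
  case 0 then show ?case by simp
next
  case (Suc j)
  show ?case
  proof (cases j)
    case 0 then show ?thesis using Suc lbterm_seg_snoc[of 1 m] by simp
  next
    case (Suc j')
    have IH: "LA (Suc m) j = LA m j \<otimes> snd (mc (S (Suc m)))" using Suc.IH Suc.prems \<open>j = Suc j'\<close> by simp
    have t: "cell (LA m j)" "cell (LT m (Suc j))" "Cod K (LA m j) = Dom K (LT m (Suc j))"
      using lbaux_typing[of j m] lbterm_typing[of "Suc j" m] Suc.prems \<open>j = Suc j'\<close> by auto
    have "LA (Suc m) (Suc j) = LT (Suc m) (Suc j) \<odot> LA (Suc m) j" using \<open>j = Suc j'\<close> by simp
    also have "\<dots> = (LT m (Suc j) \<otimes> snd (mc (S (Suc m)))) \<odot> (LA m j \<otimes> snd (mc (S (Suc m))))"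
      using IH lbterm_seg_snoc[of "Suc j" m] Suc.prems by simp
    also have "\<dots> = (LT m (Suc j) \<odot> LA m j) \<otimes> snd (mc (S (Suc m)))"
      using interchange_fuse[of "LT m (Suc j)" "LA m j" "snd (mc (S (Suc m)))" "snd (mc (S (Suc m)))"] t Suc.prems by simp
    also have "\<dots> = LA m (Suc j) \<otimes> snd (mc (S (Suc m)))" using \<open>j = Suc j'\<close> by simp
    finally show ?thesis .
  qed
qed

abbreviation "LB \<equiv> lbar K A S L"
lemma lbar_lbaux: "1 \<le> k \<Longrightarrow> k \<le> N \<Longrightarrow> LB k = LA k k"
  by (cases "k = 1") (simp_all add: lbar_def lbterm_def wr_def numeral_2_eq_2)

lemma lbar_typing: "1 \<le> k \<Longrightarrow> k \<le> N \<Longrightarrow> cell (LB k) \<and> Dom K (LB k) = fst (sg 0 (Suc k)) \<and> Cod K (LB k) = fst (sg 0 (Suc k))"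
  using lbar_lbaux lbaux_typing by simp

lemma lbar_Suc: assumes "1 \<le> k" "Suc k \<le> N" shows "LB (Suc k) = OV (Suc k) \<odot> (LB k \<otimes> snd (mc (S (Suc k))))"
proof -
  obtain k' where k: "k = Suc k'" using assms by (cases k) auto
  have "LB (Suc k) = LA (Suc k) (Suc k)" using lbar_lbaux assms by simp
  also have "\<dots> = LT (Suc k) (Suc k) \<odot> LA (Suc k) k" using k by simp
  also have "\<dots> = OV (Suc k) \<odot> (LA k k \<otimes> snd (mc (S (Suc k))))"
    using lbaux_seg_snoc[of k k] assms ovl_typing[of "Suc k"] by (simp add: lbterm_eq lbfactor_def)
  finally show ?thesis using lbar_lbaux assms by simp
qed
end

context endo_twocat begin

section \<open>Iterating C1\<close>

lemma monad_seq_Wdl_obj: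
  assumes "Wdl_obj K D" "wA D = A" "1 \<le> wm D"
  shows "monad_seq K A (wS D) (wL D) (wm D)"
  using assms by unfold_locales (auto simp: Wdl_obj_iff)

text \<open>The state after k applications of C1; pushc ... (Suc k) (Suc k) is the 2-cell R of the statement.\<close>

definition "C1_iter_inv D n k \<longleftrightarrow> Wdl_obj K ((C1 K ^^ k) D) \<and> wA ((C1 K ^^ k) D) = A \<and> wm ((C1 K ^^ k) D) = n - k \<and>
  mc (wS ((C1 K ^^ k) D) 0) = (fst (seg K A (wS D) 0 (Suc k)), lbar K A (wS D) (wL D) k) \<and>
  (\<forall>i. 1 \<le> i \<longrightarrow> wS ((C1 K ^^ k) D) i = wS D (i + k)) \<and>
  (\<forall>i j. 1 \<le> i \<longrightarrow> wL ((C1 K ^^ k) D) i j = wL D (i + k) (j + k)) \<and>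
  (\<forall>j. 1 \<le> j \<longrightarrow> j + k \<le> n \<longrightarrow> wL ((C1 K ^^ k) D) 0 j =
      Vc K (pushc K A (wS D) (wL D) (j + k) (Suc k) (Suc k)) (wl K (mc (wS D (j + k))) (lbar K A (wS D) (wL D) k))) \<and>
  Vc K (snd (seg K A (wS D) 0 (Suc k))) (lbar K A (wS D) (wL D) k) = lbar K A (wS D) (wL D) k"

lemma C1_iter_inv_1:
  assumes D: "Wdl_obj K D" "wA D = A" "wm D = n" "1 < n"
  shows "C1_iter_inv D n 1"
proof -
  interpret Q: monad_seq K A "wS D" "wL D" n using monad_seq_Wdl_obj[OF D(1,2)] D by simp
  have s02: "Q.sg 0 2 = barC K (mc (wS D 0)) (mc (wS D 1))"
    using Q.seg_snoc[of 0 1] Q.seg_snoc[of 0 0] D Q.clo_arr_mc[of 0] by (simp add: barC_barId numeral_2_eq_2)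
  have s01: "Q.sg 0 1 = mc (wS D 0)" using Q.seg_snoc[of 0 0] D Q.clo_arr_mc[of 0] by (simp add: barC_barId)
  have lb1: "Q.LB 1 = Q.E0" by (simp add: lbar_def)
  have L0: "\<And>j. 1 \<le> j \<Longrightarrow> j + 1 \<le> n \<Longrightarrow> wL (C1 K D) 0 j =
      Vc K (Q.PC (j + 1) 2 2) (wl K (mc (wS D (j + 1))) Q.E0)"
  proof -
    fix j assume j: "1 \<le> j" "j + 1 \<le> n"
    have p: "Q.PC (j + 1) 2 2 = Q.RT (j + 1) 2 1 \<odot> Q.RT (j + 1) 2 0" by (simp add: numeral_2_eq_2)
    have r1: "Q.RT (j + 1) 2 1 = snd (mc (wS D 0)) \<otimes> wL D 1 (j + 1)"
      unfolding Q.Rterm_eq using s01 j D by (simp add: numeral_2_eq_2)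
    have r0: "Q.RT (j + 1) 2 0 = wL D 0 (j + 1) \<otimes> snd (mc (wS D 1))"
      unfolding Q.Rterm_eq using Q.seg_snoc[of 1 1] Q.clo_arr_mc[of 1] j D by (simp add: barC_barId numeral_2_eq_2)
    have w02: "fst (Q.sg 0 (Suc (Suc 0))) = fst (mc (wS D 0)) \<cdot> fst (mc (wS D (Suc 0)))"
      using s02 by (simp add: barC_def numeral_2_eq_2)
    show "wL (C1 K D) 0 j = Vc K (Q.PC (j + 1) 2 2) (wl K (mc (wS D (j + 1))) Q.E0)"
      unfolding p r1 r0 C1_simps using j D w02 by (simp add: wl_def wr_def)
  qed
  show ?thesis unfolding C1_iter_inv_def
    using Wdl_obj_C1[OF D(1,2)] D s02 lb1 L0 wdl_idem_absorb(1)[OF Q.law01]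
    by (auto simp: C1_simps wdl_monad_def Let_def barC_def numeral_2_eq_2)
qed

context
  fixes D :: "('o,'a,'c) wdlm" and n k :: nat
  assumes D: "Wdl_obj K D" "wA D = A" "wm D = n"
    and inv: "C1_iter_inv D n k" and k: "1 \<le> k" "Suc k \<le> n - 1"
begin

interpretation Q: monad_seq K A "wS D" "wL D" n
  using monad_seq_Wdl_obj[OF D(1,2)] D k by simp

abbreviation Dk where "Dk \<equiv> (C1 K ^^ k) D"

lemma C1_iter_invD:
  "Wdl_obj K Dk" "wA Dk = A" "wm Dk = n - k" "mc (wS Dk 0) = (fst (Q.sg 0 (Suc k)), Q.LB k)"
  "1 \<le> i \<Longrightarrow> wS Dk i = wS D (i + k)" "1 \<le> i \<Longrightarrow> wL Dk i j = wL D (i + k) (j + k)"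
  "1 \<le> j \<Longrightarrow> j + k \<le> n \<Longrightarrow>
     wL Dk 0 j = Vc K (Q.PC (j + k) (Suc k) (Suc k)) (wl K (mc (wS D (j + k))) (Q.LB k))"
  "snd (Q.sg 0 (Suc k)) \<odot> Q.LB k = Q.LB k"
  using inv by (simp_all add: C1_iter_inv_def)

lemma bar_wdl_iter: "i < j \<Longrightarrow> j \<le> n - k \<Longrightarrow> bar_wdl K A (wS Dk j) (wS Dk i) (wL Dk i j)"
  using C1_iter_invD(1,2,3) by (auto simp: Wdl_obj_iff)

lemma lbar_iter_typing:
  "cell (Q.LB k)" "Dom K (Q.LB k) = fst (Q.sg 0 (Suc k))" "Cod K (Q.LB k) = fst (Q.sg 0 (Suc k))"
  "Q.LB k \<odot> Q.LB k = Q.LB k"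
proof -
  have "clo_arr (mc (wS Dk 0))"
    using bar_monadD(1)[OF bar_wdlD(2)[OF bar_wdl_iter[of 0 1]]] k by simp
  then show "cell (Q.LB k)" "Dom K (Q.LB k) = fst (Q.sg 0 (Suc k))" "Cod K (Q.LB k) = fst (Q.sg 0 (Suc k))"
    "Q.LB k \<odot> Q.LB k = Q.LB k"
    using C1_iter_invD(4) by (simp_all add: clo_arr_iff)
qed

lemma first_law_iter:
  "wL Dk 0 1 = Q.PC (Suc k) (Suc k) (Suc k) \<odot> (snd (mc (wS D (Suc k))) \<otimes> Q.LB k)"
  using C1_iter_invD(7)[of 1] k by (simp add: wl_def)

lemma wdl_idem_iter: "wdl_idem K (wS Dk 1) (wS Dk 0) (wL Dk 0 1) = Q.LB (Suc k)"
proof -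
  let ?t = "fst (mc (wS D (Suc k)))" and ?e = "snd (mc (wS D (Suc k)))" and ?W = "fst (Q.sg 0 (Suc k))"
    and ?sg = "snd (Q.sg 0 (Suc k))" and ?R = "Q.PC (Suc k) (Suc k) (Suc k)"
    and ?m = "mmu (wS D (Suc k))" and ?h = "meta (wS D (Suc k))"
  have kn: "Suc k \<le> n" using k by simp
  have law01: "bar_wdl K A (wS Dk 1) (wS Dk 0) (wL Dk 0 1)" using bar_wdl_iter[of 0 1] k by simp
  have S1: "wS Dk 1 = wS D (Suc k)" using C1_iter_invD(5)[of 1] by simp
  have monad: "?e \<odot> ?m = ?m" "?m \<odot> (?e \<otimes> ?e) = ?m" "?e \<odot> ?h = ?h"
    using bar_monadD[OF Q.monads[OF kn]] by simp_all
  have R_typing: "cell ?R" "Dom K ?R = ?t \<cdot> ?W" "Cod K ?R = ?W \<cdot> ?t"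
    using Q.pushc_typing[of "Suc k" "Suc k" "Suc k"] kn by simp_all
  have R_absorb: "(Q.LB k \<otimes> ?e) \<odot> ?R \<odot> (?e \<otimes> Q.LB k) = ?R \<odot> (?e \<otimes> Q.LB k)"
    using bar_wdlD(6)[OF law01] first_law_iter S1 C1_iter_invD(4) by simp
  have "wdl_idem K (wS Dk 1) (wS Dk 0) (wL Dk 0 1)
      = (Q.LB k \<otimes> ?m) \<odot> ((?R \<odot> (?e \<otimes> Q.LB k)) \<otimes> ?e) \<odot> (?h \<otimes> Q.LB k \<otimes> ?e)"
    using wdl_idem_alt[OF law01] S1 C1_iter_invD(4) first_law_iter by simp
  also have "\<dots> = (?sg \<otimes> ?m) \<odot> (?R \<otimes> ?e) \<odot> (?h \<otimes> ?sg \<otimes> ?e) \<odot> (Q.LB k \<otimes> ?e)"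
    by (rule lbar_step_absorb)
      (use lbar_iter_typing C1_iter_invD(8) monad R_typing R_absorb kn in simp_all)
  also have "\<dots> = Q.LB (Suc k)"
    using Q.lbar_Suc[of k] k Q.pushc_seg_snoc[of "Suc k" "Suc k" "Suc k"] Q.snd_seg_snoc[of 0 "Suc k"]
      Q.ovl_typing[of "Suc k"] lbar_iter_typing R_typing kn
    by (simp add: Q.ovl_eq)
  finally show ?thesis .
qed

lemma lbar_iter_Suc_absorb:
  "(Q.LB k \<otimes> snd (mc (wS D (Suc k)))) \<odot> Q.LB (Suc k) = Q.LB (Suc k)"
  using wdl_idem_absorb(1)[OF bar_wdl_iter[of 0 1]] wdl_idem_iter C1_iter_invD(4) C1_iter_invD(5)[of 1] k by simp

lemma lbar_iter_Suc_typing: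
  "cell (Q.LB (Suc k))" "Dom K (Q.LB (Suc k)) = fst (Q.sg 0 (Suc k)) \<cdot> fst (mc (wS D (Suc k)))"
  "Cod K (Q.LB (Suc k)) = fst (Q.sg 0 (Suc k)) \<cdot> fst (mc (wS D (Suc k)))"
  using Q.lbar_typing[of "Suc k"] k Q.fst_seg_snoc[of 0 "Suc k"] by simp_all

lemma law_iter_Suc:
  assumes j: "1 \<le> j" "j + Suc k \<le> n"
  shows "wL (C1 K Dk) 0 j = Vc K (Q.PC (j + Suc k) (Suc (Suc k)) (Suc (Suc k)))
           (wl K (mc (wS D (j + Suc k))) (Q.LB (Suc k)))"
proof -
  define l where "l = j + Suc k"
  have l: "Suc k < l" "l \<le> n" "Suc j + k = l" using j by (auto simp: l_def)
  let ?e = "snd (mc (wS D (Suc k)))" and ?W = "fst (Q.sg 0 (Suc k))" and ?sg = "snd (Q.sg 0 (Suc k))"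
    and ?f = "snd (mc (wS D l))" and ?u = "fst (mc (wS D l))" and ?Lk = "wL D (Suc k) l"
    and ?R = "Q.PC l (Suc k) (Suc k)"
  have "wL (C1 K Dk) 0 j = (Q.LB k \<otimes> ?Lk) \<odot> ((?R \<odot> (?f \<otimes> Q.LB k)) \<otimes> ?e) \<odot> (?f \<otimes> Q.LB (Suc k))"
    using C1_iter_invD(4) C1_iter_invD(5)[of 1] C1_iter_invD(5)[of "Suc j"] C1_iter_invD(6)[of 1 "Suc j"]
      C1_iter_invD(7)[of "Suc j"] wdl_idem_iter l j
    by (simp add: C1_simps wl_def wr_def)
  also have "\<dots> = (?sg \<otimes> ?Lk) \<odot> (?R \<otimes> ?e) \<odot> (?f \<otimes> Q.LB (Suc k))"
  proof (rule law_step_absorb)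
    show "cell ?R" "Dom K ?R = ?u \<cdot> ?W" "Cod K ?R = ?W \<cdot> ?u"
      using Q.pushc_typing[of "Suc k" "Suc k" l] l by simp_all
    show "(Q.LB k \<otimes> ?f) \<odot> ?R \<odot> (?f \<otimes> Q.LB k) = ?R \<odot> (?f \<otimes> Q.LB k)"
      using bar_wdlD(6)[OF bar_wdl_iter[of 0 "Suc j"]] C1_iter_invD(4) C1_iter_invD(5,7)[of "Suc j"] l j
      by (simp add: wl_def)
    show "?Lk \<odot> (?f \<otimes> ?e) = ?Lk"
      using bar_wdlD(7)[OF Q.laws[of "Suc k" l]] l by simp
  qed (use lbar_iter_typing C1_iter_invD(8) lbar_iter_Suc_typing lbar_iter_Suc_absorb k l in simp_all)
  also have "\<dots> = Vc K (Q.PC l (Suc (Suc k)) (Suc (Suc k))) (wl K (mc (wS D l)) (Q.LB (Suc k)))"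
    using Q.pushc_seg_snoc[of "Suc k" "Suc k" l] Q.pushc_typing[of "Suc k" "Suc k" l] l
      lbar_iter_Suc_typing k
    by (simp add: Q.Rterm_eq wl_def)
  finally show ?thesis by (simp add: l_def)
qed

lemma seg_lbar_iter_Suc: "snd (Q.sg 0 (Suc (Suc k))) \<odot> Q.LB (Suc k) = Q.LB (Suc k)"
proof -
  let ?e = "snd (mc (wS D (Suc k)))" and ?sg = "snd (Q.sg 0 (Suc k))"
  have kn: "Suc k \<le> n" using k by simp
  have "(?sg \<otimes> ?e) \<odot> (Q.LB k \<otimes> ?e) = Q.LB k \<otimes> ?e"
    using interchange_fuse[of ?sg "Q.LB k" ?e ?e] C1_iter_invD(8) lbar_iter_typing kn by simp
  moreover have "snd (Q.sg 0 (Suc (Suc k))) \<odot> Q.LB (Suc k) = ((?sg \<otimes> ?e) \<odot> (Q.LB k \<otimes> ?e)) \<odot> Q.LB (Suc k)"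
  proof -
    have "snd (Q.sg 0 (Suc (Suc k))) \<odot> Q.LB (Suc k) = (?sg \<otimes> ?e) \<odot> ((Q.LB k \<otimes> ?e) \<odot> Q.LB (Suc k))"
      using Q.snd_seg_snoc[of 0 "Suc k"] kn lbar_iter_Suc_absorb by simp
    then show ?thesis
      using lbar_iter_typing lbar_iter_Suc_typing kn by (simp add: Vc_assoc)
  qed
  ultimately show ?thesis using lbar_iter_Suc_absorb by simp
qed

lemma C1_iter_inv_Suc: "C1_iter_inv D n (Suc k)"
  unfolding C1_iter_inv_def funpow.simps(2) o_apply
proof (intro conjI allI impI)
  show "Wdl_obj K (C1 K Dk)" using Wdl_obj_C1[OF C1_iter_invD(1,2)] C1_iter_invD(3) k by simp
  show "mc (wS (C1 K Dk) 0) = (fst (Q.sg 0 (Suc (Suc k))), Q.LB (Suc k))"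
    using wdl_idem_iter C1_iter_invD(4) C1_iter_invD(5)[of 1] Q.fst_seg_snoc[of 0 "Suc k"] k
    by (simp add: C1_simps wdl_monad_def Let_def)
qed (use C1_iter_invD seg_lbar_iter_Suc law_iter_Suc in \<open>simp_all add: C1_simps\<close>)

end

lemma C1_iter_inv_all:
  assumes D: "Wdl_obj K D" "wA D = A" "wm D = n" "1 < n"
  shows "1 \<le> k \<Longrightarrow> k \<le> n - 1 \<Longrightarrow> C1_iter_inv D n k"
proof (induction k)
  case (Suc k)
  then show ?case
    using C1_iter_inv_1[OF D] C1_iter_inv_Suc[OF D(1-3) Suc.IH] by (cases "k = 0") simp_all
qed simp

end

theorem lemma2p8:
  fixes K :: "('o,'a,'c) tcat" and D :: "('o,'a,'c) wdlm" and n :: nat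
  assumes "twocat K" and "Wdl_obj K D" and "wm D = n" and "1 < n"
  shows "wm ((C1 K ^^ (n - 1)) D) = 1 \<and>
         wA ((C1 K ^^ (n - 1)) D) = wA D \<and>
         mc (wS ((C1 K ^^ (n - 1)) D) 0) =
           (fst (seg K (wA D) (wS D) 0 n), lbar K (wA D) (wS D) (wL D) (n - 1)) \<and>
         wS ((C1 K ^^ (n - 1)) D) 1 = wS D n \<and>
         wL ((C1 K ^^ (n - 1)) D) 0 1 =
           Vc K (pushc K (wA D) (wS D) (wL D) n n n)
                (wl K (mc (wS D n)) (lbar K (wA D) (wS D) (wL D) (n - 1)))"
proof -
  have "bar_monad K (wA D) (wS D 0)" using assms(2) unfolding Wdl_obj_def by simp
  then have A: "wA D \<in> Obj K" by (simp add: bar_monad_def)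
  interpret endo_twocat K "wA D" by unfold_locales (rule assms(1), rule A)
  have "C1_iter_inv D n (n - 1)" using C1_iter_inv_all assms by simp
  moreover have "Suc (n - 1) = n" "1 + (n - 1) = n" using assms by auto
  ultimately show ?thesis using assms unfolding C1_iter_inv_def by auto
qed

end
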